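(* There are isomorphisms of algebras: - If $r\in3+2\mathbb N$: $\mathbb A_{\bar0}\cong A^{\frac{r-1}{2}}\times\mathbb C\cong\mathbb A_{\bar1}$. - If $r\in2+4\mathbb N$: $\mathbb A_{\bar0}\cong A^{\frac{r-2}{4}}\times B$ and $\mathbb A_{\bar1}\cong A^{\frac{r-2}{4}}\times\mathbb C$. - If $r\in4+4\mathbb N$: $\mathbb A_{\bar0}\cong A^{\frac r4}$ and $\mathbb A_{\bar1}\cong A^{\frac{r-4}{4}}\times B\times\mathbb C$. Here $A^n$ denotes the product of $n$ copies of $A$.
   Context: Fix a positive integer $r$. Let $r'=r$ if $r$ is odd and $r'=r/2$ if $r$ is even. Set $q=e^{\pi\sqrt{-1}/r}$, $q^x=e^{\pi\sqrt{-1}x/r}$, $\{x\}=q^x-q^{-x}$, $[x]=\{x\}/\{1\}$. $\overline U=\overline U_q^H\mathfrak{sl}(2)$ is the Hopf algebra over $\mathbb C$ generated by $E,F,K,K^{-1},H$ with: - relations $KK^{-1}=K^{-1}K=1$, $KEK^{-1}=q^2E$, $KFK^{-1}=q^{-2}F$, $EF-FE=\frac{K-K^{-1}}{q-q^{-1}}$, $HK=KH$, $[H,E]=2E$, $[H,F]=-2F$, $E^r=F^r=0$; - coproduct $\Delta(E)=1\otimes E+E\otimes K$, $\Delta(F)=K^{-1}\otimes F+F\otimes1$, $\Delta(K)=K\otimes K$, $\Delta(H)=H\otimes1+1\otimes H$. Weight modules: $H$ diagonalizable and $K=q^\lambda$ on weight-$\lambda$ vectors. $\mathbb C^H_{kr}$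 is the one-dimensional module with $E=F=0$ and $H=kr$. Definition of $P_i$, for $i\in\{0,\dots,r-2\}$ (write $j=r-2-i$ and $\gamma_{n,k}=[k][n-k+1]$). $P_i$ has basis $h_m$ ($m=i,i-2,\dots,-i$), $s_m$ ($m=i,\dots,-i$), $R_m$ ($m=r+j,\dots,r-j$), $L_m$ ($m=j-r,\dots,-j-r$), each of weight $m$, with: - $Fh_m=h_{m-2}$ ($m>-i$), $Fh_{-i}=L_{j-r}$; - $Fs_m=s_{m-2}$ ($m>-i$), $Fs_{-i}=0$; - $FL_m=L_{m-2}$ ($m>-j-r$), $FL_{-j-r}=0$; - $FR_{r-j}=s_i$, $FR_{r-j+2k}=-\gamma_{j,k}R_{r-j+2k-2}$ ($1\le k\le j$); - $Eh_i=R_{r-j}$, $Eh_{i-2k}=\gamma_{i,k}h_{i-2k+2}+s_{i-2k+2}$; - $Es_i=0$, $Es_{i-2k}=\gamma_{i,k}s_{i-2k+2}$; - $ER_m=R_{m+2}$ ($m<r+j$), $ER_{r+j}=0$; - $EL_{j-r}=s_{-i}$, $EL_{j-2k-r}=-\gamma_{j,k}L_{j-2k-r+2}$. $P_{r-1}$ is the $r$-dimensional simple module of highest weight $r-1$. The module $\mathbb P$. Let $\mathbb P=\bigoplus_{k\in\mathbb Z}\bigoplus_{i=0}^{r-1}\mathbb C^H_{kr}\otimes P_i$, an infinite-dimensional weight module with finite-dimensional weight spaces. - It is $\mathbb Z$-graded by giving the summand $\mathbb C^H_{kr}\otimes P_i$ degree $k$. - For $\nu\in\{\bar0,\bar1\}$,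 $\mathbb P_\nu$ is the sum of the weight spaces with weights in $\nu+2\mathbb Z$, so $\mathbb P=\mathbb P_{\bar0}\oplus\mathbb P_{\bar1}$. - Let $\sigma=\mathbb C^H_{2r'}$. The canonical isomorphisms $\sigma\otimes\mathbb C^H_{kr}\otimes P_i\cong\mathbb C^H_{kr+2r'}\otimes P_i$ ($1\otimes1\otimes v\mapsto1\otimes v$) define an action of $\mathbb Z$ on $\mathbb P$. - $\mathbb A_\nu=\mathrm{End}_\sigma(\mathbb P_\nu)$ is the algebra of $\overline U$-linear endomorphisms of $\mathbb P_\nu$ commuting with this action. It is $\mathbb Z$-graded: a map has degree $d$ if it sends degree $k$ to degree $k+d$. The algebras $A$ and $B$. - $A$ is the $\mathbb Z$-graded $\mathbb C$-algebra generated by orthogonal idempotents $p,q$ with $p+q=1$ and elements $a_+,a_-,b_+,b_-$ with $a_\pm=qa_\pm p$, $b_\pm=pb_\pm q$ (the path algebra of the quiver with two vertices $p,q$, arrows $a_\pm$ from $p$ to $q$ and $b_\pm$ from $q$ to $p$). The relations are $a_+b_+=b_+a_+=a_-b_-=b_-a_-=0$, $a_+b_-+a_-b_+=0$, $b_+a_-+b_-a_+=0$. Grading: $a_+,b_+$ have degree $1$, $a_-,b_-$ degree $-1$, and $p,q$ degree $0$; $A$ has basis $\{a_+,b_+,a_-,b_-,p,q,b_+a_-,a_+b_-\}$. - $B$ is the quotient of $A$ by $p=q$, $a_+=b_+$, $a_-=b_-$; that is, the exterior algebra generated by $a_+$ (degree $1$) and $a_-$ (degree $-1$) with $a_+^2=a_-^2=0$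 and $a_+a_-+a_-a_+=0$. *)

theory Defs
  imports Complex_Main
begin

definition qe :: "nat \<Rightarrow> int \<Rightarrow> complex" where
  "qe r x = exp (of_real pi * \<i> * of_int x / of_nat r)"

definition qbr :: "nat \<Rightarrow> int \<Rightarrow> complex" where
  "qbr r x = qe r x - qe r (- x)"

definition qint :: "nat \<Rightarrow> int \<Rightarrow> complex" where
  "qint r x = qbr r x / qbr r 1"

definition gam :: "nat \<Rightarrow> int \<Rightarrow> int \<Rightarrow> complex" where
  "gam r n k = qint r k * qint r (n - k + 1)"

record 'a calg =
  acar  :: "'a set"
  aadd  :: "'a \<Rightarrow> 'a \<Rightarrow> 'a"
  amul  :: "'a \<Rightarrow> 'a \<Rightarrow> 'a"
  asmul :: "complex \<Rightarrow> 'a \<Rightarrow> 'a"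
  azero :: "'a"
  aone  :: "'a"

definition alg_iso :: "'a calg \<Rightarrow> 'b calg \<Rightarrow> ('a \<Rightarrow> 'b) \<Rightarrow> bool" where
  "alg_iso S T \<phi> \<longleftrightarrow> bij_betw \<phi> (acar S) (acar T)
     \<and> (\<forall>x\<in>acar S. \<forall>y\<in>acar S. \<phi> (aadd S x y) = aadd T (\<phi> x) (\<phi> y))
     \<and> (\<forall>x\<in>acar S. \<forall>y\<in>acar S. \<phi> (amul S x y) = amul T (\<phi> x) (\<phi> y))
     \<and> (\<forall>c. \<forall>x\<in>acar S. \<phi> (asmul S c x) = asmul T c (\<phi> x))
     \<and> \<phi> (aone S) = aone T"

definition alg_isomorphic :: "'a calg \<Rightarrow> 'b calg \<Rightarrow> bool" where
  "alg_isomorphic S T \<longleftrightarrow> (\<exists>\<phi>. alg_iso S T \<phi>)"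

definition complex_alg :: "complex calg" where
  "complex_alg = \<lparr>acar = UNIV, aadd = (+), amul = (*), asmul = (*), azero = 0, aone = 1\<rparr>"

definition prod_alg :: "'a calg \<Rightarrow> 'b calg \<Rightarrow> ('a \<times> 'b) calg" where
  "prod_alg S T = \<lparr>acar = acar S \<times> acar T,
     aadd = (\<lambda>x y. (aadd S (fst x) (fst y), aadd T (snd x) (snd y))),
     amul = (\<lambda>x y. (amul S (fst x) (fst y), amul T (snd x) (snd y))),
     asmul = (\<lambda>c x. (asmul S c (fst x), asmul T c (snd x))),
     azero = (azero S, azero T), aone = (aone S, aone T)\<rparr>"

text \<open>The product of n copies of an algebra (components with index \<open>\<ge> n\<close> are fixed to zero).\<close>
definition pow_alg :: "'a calg \<Rightarrow> nat \<Rightarrow> (nat \<Rightarrow> 'a) calg" where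
  "pow_alg S n = \<lparr>acar = {f. (\<forall>i<n. f i \<in> acar S) \<and> (\<forall>i\<ge>n. f i = azero S)},
     aadd = (\<lambda>f g i. if i < n then aadd S (f i) (g i) else azero S),
     amul = (\<lambda>f g i. if i < n then amul S (f i) (g i) else azero S),
     asmul = (\<lambda>c f i. if i < n then asmul S c (f i) else azero S),
     azero = (\<lambda>i. azero S),
     aone = (\<lambda>i. if i < n then aone S else azero S)\<rparr>"

text \<open>A finite-dimensional algebra given by a basis and structure constants:
  the product of basis elements u, w is either 0 (None) or c * v (Some (c, v)).\<close>
definition basis_alg :: "'b list \<Rightarrow> ('b \<Rightarrow> 'b \<Rightarrow> (complex \<times> 'b) option) \<Rightarrow> ('b \<Rightarrow> complex)
     \<Rightarrow> ('b \<Rightarrow> complex) calg" where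
  "basis_alg bs m one = \<lparr>acar = {x. \<forall>z. z \<notin> set bs \<longrightarrow> x z = 0},
     aadd = (\<lambda>x y z. x z + y z),
     amul = (\<lambda>x y z. \<Sum>u\<in>set bs. \<Sum>w\<in>set bs. x u * y w *
                (case m u w of None \<Rightarrow> 0 | Some (c, v) \<Rightarrow> if v = z then c else 0)),
     asmul = (\<lambda>c x z. c * x z),
     azero = (\<lambda>z. 0), aone = one\<rparr>"

text \<open>Basis p, q, a+, a-, b+, b-, b+a-, a+b-.\<close>
datatype abas = Ap | Aq | Aap | Aam | Abp | Abm | Abpam | Aapbm

definition abas_list :: "abas list" where
  "abas_list = [Ap, Aq, Aap, Aam, Abp, Abm, Abpam, Aapbm]"

text \<open>left and right idempotents of basis paths (a = q a p, b = p b q)\<close>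
fun lidA :: "abas \<Rightarrow> abas" where
  "lidA Ap = Ap" | "lidA Aq = Aq" | "lidA Aap = Aq" | "lidA Aam = Aq"
| "lidA Abp = Ap" | "lidA Abm = Ap" | "lidA Abpam = Ap" | "lidA Aapbm = Aq"

fun ridA :: "abas \<Rightarrow> abas" where
  "ridA Ap = Ap" | "ridA Aq = Aq" | "ridA Aap = Ap" | "ridA Aam = Ap"
| "ridA Abp = Aq" | "ridA Abm = Aq" | "ridA Abpam = Ap" | "ridA Aapbm = Aq"

fun amulA :: "abas \<Rightarrow> abas \<Rightarrow> (complex \<times> abas) option" where
  "amulA Ap u = (if lidA u = Ap then Some (1, u) else None)"
| "amulA Aq u = (if lidA u = Aq then Some (1, u) else None)"
| "amulA u Ap = (if ridA u = Ap then Some (1, u) else None)"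
| "amulA u Aq = (if ridA u = Aq then Some (1, u) else None)"
| "amulA Aap Abm = Some (1, Aapbm)"
| "amulA Aam Abp = Some (-1, Aapbm)"
| "amulA Abp Aam = Some (1, Abpam)"
| "amulA Abm Aap = Some (-1, Abpam)"
| "amulA _ _ = None"

definition algA :: "(abas \<Rightarrow> complex) calg" where
  "algA = basis_alg abas_list amulA (\<lambda>z. if z = Ap \<or> z = Aq then 1 else 0)"

section \<open>The algebra B (exterior algebra on a+, a-)\<close>

datatype bbas = B1 | Bp | Bm | Bpm

definition bbas_list :: "bbas list" where
  "bbas_list = [B1, Bp, Bm, Bpm]"

fun amulB :: "bbas \<Rightarrow> bbas \<Rightarrow> (complex \<times> bbas) option" where
  "amulB B1 u = Some (1, u)"
| "amulB u B1 = Some (1, u)"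
| "amulB Bp Bm = Some (1, Bpm)"
| "amulB Bm Bp = Some (-1, Bpm)"
| "amulB _ _ = None"

definition algB :: "(bbas \<Rightarrow> complex) calg" where
  "algB = basis_alg bbas_list amulB (\<lambda>z. if z = B1 then 1 else 0)"

text \<open>Basis labels of P_i: for i \<le> r-2 (j = r-2-i):
  Hb a = h_{i-2a}, Sb a = s_{i-2a} (0 \<le> a \<le> i), Rb a = R_{r-j+2a}, Lb a = L_{j-r-2a} (0 \<le> a \<le> j);
  for i = r-1: Vb a = v_a of weight r-1-2a (0 \<le> a \<le> r-1), with F v_a = v_{a+1}, E v_a = [a][r-a] v_{a-1}.\<close>
datatype blab = Hb nat | Sb nat | Rb nat | Lb nat | Vb nat

fun valid_lab :: "nat \<Rightarrow> nat \<Rightarrow> blab \<Rightarrow> bool" where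
  "valid_lab r i (Hb a) = (i + 2 \<le> r \<and> a \<le> i)"
| "valid_lab r i (Sb a) = (i + 2 \<le> r \<and> a \<le> i)"
| "valid_lab r i (Rb a) = (i + 2 \<le> r \<and> a \<le> r - 2 - i)"
| "valid_lab r i (Lb a) = (i + 2 \<le> r \<and> a \<le> r - 2 - i)"
| "valid_lab r i (Vb a) = (i + 1 = r \<and> a < r)"

fun lab_wt :: "nat \<Rightarrow> nat \<Rightarrow> blab \<Rightarrow> int" where
  "lab_wt r i (Hb a) = int i - 2 * int a"
| "lab_wt r i (Sb a) = int i - 2 * int a"
| "lab_wt r i (Rb a) = int r - (int r - 2 - int i) + 2 * int a"
| "lab_wt r i (Lb a) = (int r - 2 - int i) - int r - 2 * int a"
| "lab_wt r i (Vb a) = int r - 1 - 2 * int a"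

definition dl :: "blab \<Rightarrow> blab \<Rightarrow> complex" where
  "dl y z = (if z = y then 1 else 0)"

fun Eb :: "nat \<Rightarrow> nat \<Rightarrow> blab \<Rightarrow> blab \<Rightarrow> complex" where
  "Eb r i (Hb a) = (if a = 0 then dl (Rb 0)
      else (\<lambda>z. gam r (int i) (int a) * dl (Hb (a - 1)) z + dl (Sb (a - 1)) z))"
| "Eb r i (Sb a) = (if a = 0 then (\<lambda>z. 0) else (\<lambda>z. gam r (int i) (int a) * dl (Sb (a - 1)) z))"
| "Eb r i (Rb a) = (if a < r - 2 - i then dl (Rb (a + 1)) else (\<lambda>z. 0))"
| "Eb r i (Lb a) = (if a = 0 then dl (Sb i)
      else (\<lambda>z. - gam r (int (r - 2 - i)) (int a) * dl (Lb (a - 1)) z))"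
| "Eb r i (Vb a) = (if a = 0 then (\<lambda>z. 0)
      else (\<lambda>z. qint r (int a) * qint r (int r - int a) * dl (Vb (a - 1)) z))"

fun Fb :: "nat \<Rightarrow> nat \<Rightarrow> blab \<Rightarrow> blab \<Rightarrow> complex" where
  "Fb r i (Hb a) = (if a < i then dl (Hb (a + 1)) else dl (Lb 0))"
| "Fb r i (Sb a) = (if a < i then dl (Sb (a + 1)) else (\<lambda>z. 0))"
| "Fb r i (Lb a) = (if a < r - 2 - i then dl (Lb (a + 1)) else (\<lambda>z. 0))"
| "Fb r i (Rb a) = (if a = 0 then dl (Sb 0)
      else (\<lambda>z. - gam r (int (r - 2 - i)) (int a) * dl (Rb (a - 1)) z))"
| "Fb r i (Vb a) = (if a + 1 < r then dl (Vb (a + 1)) else (\<lambda>z. 0))"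

text \<open>Basis of P: (k, i, b) is the vector 1 \<otimes> b of C^H_{kr} \<otimes> P_i (degree k).\<close>
type_synonym pidx = "int \<times> nat \<times> blab"

definition valid :: "nat \<Rightarrow> pidx \<Rightarrow> bool" where
  "valid r x = (fst (snd x) < r \<and> valid_lab r (fst (snd x)) (snd (snd x)))"

definition wt :: "nat \<Rightarrow> pidx \<Rightarrow> int" where
  "wt r x = fst x * int r + lab_wt r (fst (snd x)) (snd (snd x))"

text \<open>Coefficient of basis vector y in E x, F x. Via the coproduct, on C^H_{kr} \<otimes> P_i,
  E acts as 1 \<otimes> E and F as K^{-1} \<otimes> F = q^{-kr} F.\<close>
definition Ecoef :: "nat \<Rightarrow> pidx \<Rightarrow> pidx \<Rightarrow> complex" where
  "Ecoef r x y = (if fst y = fst x \<and> fst (snd y) = fst (snd x)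
     then Eb r (fst (snd x)) (snd (snd x)) (snd (snd y)) else 0)"

definition Fcoef :: "nat \<Rightarrow> pidx \<Rightarrow> pidx \<Rightarrow> complex" where
  "Fcoef r x y = (if fst y = fst x \<and> fst (snd y) = fst (snd x)
     then qe r (- (fst x * int r)) * Fb r (fst (snd x)) (snd (snd x)) (snd (snd y)) else 0)"

type_synonym pvec = "pidx \<Rightarrow> complex"

definition opE :: "nat \<Rightarrow> pvec \<Rightarrow> pvec" where
  "opE r v = (\<lambda>y. \<Sum>x\<in>{x. v x \<noteq> 0}. v x * Ecoef r x y)"

definition opF :: "nat \<Rightarrow> pvec \<Rightarrow> pvec" where
  "opF r v = (\<lambda>y. \<Sum>x\<in>{x. v x \<noteq> 0}. v x * Fcoef r x y)"

definition opH :: "nat \<Rightarrow> pvec \<Rightarrow> pvec" where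
  "opH r v = (\<lambda>y. of_int (wt r y) * v y)"

definition opK :: "nat \<Rightarrow> pvec \<Rightarrow> pvec" where
  "opK r v = (\<lambda>y. qe r (wt r y) * v y)"

definition opKinv :: "nat \<Rightarrow> pvec \<Rightarrow> pvec" where
  "opKinv r v = (\<lambda>y. qe r (- wt r y) * v y)"

definition Pnu :: "nat \<Rightarrow> int \<Rightarrow> pvec set" where
  "Pnu r \<nu> = {v. finite {x. v x \<noteq> 0} \<and>
      (\<forall>x. v x \<noteq> 0 \<longrightarrow> valid r x \<and> wt r x mod 2 = \<nu>)}"

definition rprime :: "nat \<Rightarrow> nat" where
  "rprime r = (if odd r then r else r div 2)"

text \<open>The generator of the Z-action: sigma \<otimes> C^H_{kr} \<otimes> P_i = C^H_{kr + 2r'} \<otimes> P_i,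
  i.e. shift of degree by 2r'/r.\<close>
definition shiftP :: "nat \<Rightarrow> pvec \<Rightarrow> pvec" where
  "shiftP r v = (\<lambda>y. v (fst y - int (2 * rprime r div r), snd y))"

definition EndSet :: "nat \<Rightarrow> int \<Rightarrow> (pvec \<Rightarrow> pvec) set" where
  "EndSet r \<nu> = {f.
     (\<forall>v\<in>Pnu r \<nu>. f v \<in> Pnu r \<nu>)
   \<and> (\<forall>v\<in>Pnu r \<nu>. \<forall>w\<in>Pnu r \<nu>. f (\<lambda>x. v x + w x) = (\<lambda>x. f v x + f w x))
   \<and> (\<forall>c. \<forall>v\<in>Pnu r \<nu>. f (\<lambda>x. c * v x) = (\<lambda>x. c * f v x))
   \<and> (\<forall>v\<in>Pnu r \<nu>. f (opE r v) = opE r (f v))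
   \<and> (\<forall>v\<in>Pnu r \<nu>. f (opF r v) = opF r (f v))
   \<and> (\<forall>v\<in>Pnu r \<nu>. f (opK r v) = opK r (f v))
   \<and> (\<forall>v\<in>Pnu r \<nu>. f (opKinv r v) = opKinv r (f v))
   \<and> (\<forall>v\<in>Pnu r \<nu>. f (opH r v) = opH r (f v))
   \<and> (\<forall>v\<in>Pnu r \<nu>. f (shiftP r v) = shiftP r (f v))
   \<and> (\<forall>v. v \<notin> Pnu r \<nu> \<longrightarrow> f v = (\<lambda>x. 0))}"

text \<open>The algebra A_nu = End_sigma(P_nu), product = composition.\<close>
definition EndAlg :: "nat \<Rightarrow> int \<Rightarrow> (pvec \<Rightarrow> pvec) calg" where
  "EndAlg r \<nu> = \<lparr>acar = EndSet r \<nu>,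
     aadd = (\<lambda>f g v. if v \<in> Pnu r \<nu> then (\<lambda>x. f v x + g v x) else (\<lambda>x. 0)),
     amul = (\<lambda>f g v. if v \<in> Pnu r \<nu> then f (g v) else (\<lambda>x. 0)),
     asmul = (\<lambda>c f v. if v \<in> Pnu r \<nu> then (\<lambda>x. c * f v x) else (\<lambda>x. 0)),
     azero = (\<lambda>v x. 0),
     aone = (\<lambda>v. if v \<in> Pnu r \<nu> then v else (\<lambda>x. 0))\<rparr>"

end

theory Submission
  imports Defs
begin

text \<open>Each summand \<open>\<complex>\<^sup>H\<^sub>k\<^sub>r \<otimes> P\<^sub>i\<close> of \<open>P\<^sub>\<nu>\<close> is generated by its top vector (\<open>h\<^sub>i\<close>, or \<open>v\<^sub>0\<close> for
  \<open>i = r - 1\<close>), so an endomorphism is determined by the images of these vectors.  The central Casimir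
  element has the single generalised eigenvalue \<open>(-1)\<^sup>k (q\<^sup>i\<^sup>+\<^sup>1 + q\<^sup>-\<^sup>i\<^sup>-\<^sup>1) / {1}\<^sup>2\<close> on that summand, and
  these values separate \<open>(k, i)\<close> from every other summand except \<open>(k \<plusminus> 1, r - 2 - i)\<close>.  Together with
  the weight this confines the image of \<open>h\<^sub>i\<close> to the span of \<open>h\<^sub>i\<close>, \<open>s\<^sub>i\<close> and one vector in each of the
  summands \<open>(k \<plusminus> 1, r - 2 - i)\<close>: an endomorphism is given by four scalars per summand, periodic in
  \<open>k\<close>.  Composition multiplies these scalars as in \<open>A\<close> for a pair \<open>i < r - 2 - i\<close>, as in \<open>B\<close> for the
  self-dual summand \<open>i = r - 2 - i\<close>, and as in \<open>\<complex>\<close> for the simple summand \<open>i = r - 1\<close>; counting the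
  summands of each kind modulo the \<open>\<int>\<close>-action gives the exponents.\<close>

definition alg_hom :: "'a calg \<Rightarrow> 'b calg \<Rightarrow> ('a \<Rightarrow> 'b) \<Rightarrow> bool" where
  "alg_hom S T \<phi> \<longleftrightarrow> (\<forall>x\<in>acar S. \<phi> x \<in> acar T)
     \<and> (\<forall>x\<in>acar S. \<forall>y\<in>acar S. \<phi> (aadd S x y) = aadd T (\<phi> x) (\<phi> y))
     \<and> (\<forall>x\<in>acar S. \<forall>y\<in>acar S. \<phi> (amul S x y) = amul T (\<phi> x) (\<phi> y))
     \<and> (\<forall>c. \<forall>x\<in>acar S. \<phi> (asmul S c x) = asmul T c (\<phi> x))
     \<and> \<phi> (aone S) = aone T"

lemma alg_iso_intro:
  assumes "alg_hom S T \<phi>" "inj_on \<phi> (acar S)" "\<And>y. y \<in> acar T \<Longrightarrow> \<exists>x\<in>acar S. \<phi> x = y"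
  shows "alg_iso S T \<phi>"
proof -
  have "\<phi> ` acar S = acar T"
    using assms(1,3) unfolding alg_hom_def by force
  then have "bij_betw \<phi> (acar S) (acar T)" using assms(2) by (simp add: bij_betw_def)
  then show ?thesis using assms(1) by (simp add: alg_iso_def alg_hom_def)
qed

lemma alg_hom_prod:
  assumes "alg_hom S T1 \<phi>1" "alg_hom S T2 \<phi>2"
  shows "alg_hom S (prod_alg T1 T2) (\<lambda>x. (\<phi>1 x, \<phi>2 x))"
  using assms unfolding alg_hom_def prod_alg_def by auto

lemma alg_hom_pow:
  assumes "\<And>t. t < n \<Longrightarrow> alg_hom S T (\<psi> t)"
  shows "alg_hom S (pow_alg T n) (\<lambda>x t. if t < n then \<psi> t x else azero T)"
  using assms unfolding alg_hom_def pow_alg_def by (auto simp: fun_eq_iff)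

lemma algA_simps:
  "acar algA = UNIV"
  "aadd algA x y = (\<lambda>z. x z + y z)"
  "asmul algA c x = (\<lambda>z. c * x z)"
  "aone algA = (\<lambda>z. if z = Ap \<or> z = Aq then 1 else 0)"
  "azero algA = (\<lambda>z. 0)"
proof -
  have "\<And>z. z \<in> set abas_list" unfolding abas_list_def by (case_tac z) auto
  then show "acar algA = UNIV" by (auto simp: algA_def basis_alg_def)
qed (simp_all add: algA_def basis_alg_def)

lemma algB_simps:
  "acar algB = UNIV"
  "aadd algB x y = (\<lambda>z. x z + y z)"
  "asmul algB c x = (\<lambda>z. c * x z)"
  "aone algB = (\<lambda>z. if z = B1 then 1 else 0)"
  "azero algB = (\<lambda>z. 0)"
proof -
  have "\<And>z. z \<in> set bbas_list" unfolding bbas_list_def by (case_tac z) auto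
  then show "acar algB = UNIV" by (auto simp: algB_def basis_alg_def)
qed (simp_all add: algB_def basis_alg_def)

lemma acar_pow_algA: "z \<in> acar (pow_alg algA n) \<longleftrightarrow> (\<forall>t\<ge>n. z t = azero algA)"
  by (simp add: pow_alg_def algA_simps)

lemma amul_algA:
  "amul algA x y = (\<lambda>z. case z of
      Ap \<Rightarrow> x Ap * y Ap
    | Aq \<Rightarrow> x Aq * y Aq
    | Aap \<Rightarrow> x Aq * y Aap + x Aap * y Ap
    | Aam \<Rightarrow> x Aq * y Aam + x Aam * y Ap
    | Abp \<Rightarrow> x Ap * y Abp + x Abp * y Aq
    | Abm \<Rightarrow> x Ap * y Abm + x Abm * y Aq
    | Abpam \<Rightarrow> x Ap * y Abpam + x Abpam * y Ap + x Abp * y Aam - x Abm * y Aap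
    | Aapbm \<Rightarrow> x Aq * y Aapbm + x Aapbm * y Aq + x Aap * y Abm - x Aam * y Abp)"
  unfolding algA_def basis_alg_def abas_list_def
  by (rule ext, case_tac z) (simp_all add: algebra_simps)

lemma amul_algB:
  "amul algB x y = (\<lambda>z. case z of
      B1 \<Rightarrow> x B1 * y B1
    | Bp \<Rightarrow> x B1 * y Bp + x Bp * y B1
    | Bm \<Rightarrow> x B1 * y Bm + x Bm * y B1
    | Bpm \<Rightarrow> x B1 * y Bpm + x Bpm * y B1 + x Bp * y Bm - x Bm * y Bp)"
  unfolding algB_def basis_alg_def bbas_list_def
  by (rule ext, case_tac z) (simp_all add: algebra_simps)

definition bvec :: "'a \<Rightarrow> 'a \<Rightarrow> complex" where
  "bvec x = (\<lambda>y. if y = x then 1 else 0)"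

text \<open>A matrix \<open>M\<close> is stored by rows: \<open>M x\<close> is the image of the basis vector \<open>x\<close>.\<close>

definition mat_apply :: "('a \<Rightarrow> 'b \<Rightarrow> complex) \<Rightarrow> ('a \<Rightarrow> complex) \<Rightarrow> 'b \<Rightarrow> complex" where
  "mat_apply M v = (\<lambda>y. \<Sum>x\<in>{x. v x \<noteq> 0}. v x * M x y)"

definition fin_supp :: "('a \<Rightarrow> complex) \<Rightarrow> bool" where
  "fin_supp v \<longleftrightarrow> finite {x. v x \<noteq> 0}"

lemma mat_apply_sum:
  assumes "finite S" "{x. v x \<noteq> 0} \<subseteq> S"
  shows "mat_apply M v y = (\<Sum>x\<in>S. v x * M x y)"
  unfolding mat_apply_def by (rule sum.mono_neutral_left) (use assms in auto)

lemma mat_apply_add: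
  assumes "fin_supp v" "fin_supp w"
  shows "mat_apply M (\<lambda>x. v x + w x) = (\<lambda>y. mat_apply M v y + mat_apply M w y)"
proof
  fix y
  let ?S = "{x. v x \<noteq> 0} \<union> {x. w x \<noteq> 0}"
  have f: "finite ?S" using assms by (auto simp: fin_supp_def)
  have "mat_apply M (\<lambda>x. v x + w x) y = (\<Sum>x\<in>?S. (v x + w x) * M x y)"
    by (rule mat_apply_sum[OF f]) auto
  also have "\<dots> = (\<Sum>x\<in>?S. v x * M x y) + (\<Sum>x\<in>?S. w x * M x y)"
    by (simp add: distrib_right sum.distrib)
  also have "\<dots> = mat_apply M v y + mat_apply M w y"
    by (simp add: mat_apply_sum[OF f])
  finally show "mat_apply M (\<lambda>x. v x + w x) y = mat_apply M v y + mat_apply M w y" .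
qed

lemma mat_apply_smul:
  assumes "fin_supp v"
  shows "mat_apply M (\<lambda>x. c * v x) = (\<lambda>y. c * mat_apply M v y)"
proof
  fix y
  have f: "finite {x. v x \<noteq> 0}" using assms by (auto simp: fin_supp_def)
  have "mat_apply M (\<lambda>x. c * v x) y = (\<Sum>x\<in>{x. v x \<noteq> 0}. c * v x * M x y)"
    by (rule mat_apply_sum[OF f]) auto
  also have "\<dots> = c * mat_apply M v y"
    by (simp add: mat_apply_def sum_distrib_left mult.assoc)
  finally show "mat_apply M (\<lambda>x. c * v x) y = c * mat_apply M v y" .
qed

lemma mat_apply_bvec[simp]: "mat_apply M (bvec x) = M x"
proof
  fix y
  have "mat_apply M (bvec x) y = (\<Sum>z\<in>{x}. bvec x z * M z y)"
    by (rule mat_apply_sum) (auto simp: bvec_def)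
  then show "mat_apply M (bvec x) y = M x y" by (simp add: bvec_def)
qed

lemma mat_apply_zero[simp]: "mat_apply M (\<lambda>x. 0) = (\<lambda>y. 0)"
  by (simp add: mat_apply_def)

lemma fin_supp_bvec[simp]: "fin_supp (bvec x)" by (simp add: fin_supp_def bvec_def)
lemma fin_supp_add: "fin_supp v \<Longrightarrow> fin_supp w \<Longrightarrow> fin_supp (\<lambda>x. v x + w x)"
  unfolding fin_supp_def by (rule finite_subset[of _ "{x. v x \<noteq> 0} \<union> {x. w x \<noteq> 0}"]) auto
lemma fin_supp_smul: "fin_supp v \<Longrightarrow> fin_supp (\<lambda>x. c * v x)"
  unfolding fin_supp_def by (rule finite_subset[of _ "{x. v x \<noteq> 0}"]) auto
lemma fin_supp_zero[simp]: "fin_supp (\<lambda>x. 0)" by (simp add: fin_supp_def)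

lemma mat_apply_cong:
  assumes "\<And>x. v x \<noteq> 0 \<Longrightarrow> M x = N x"
  shows "mat_apply M v = mat_apply N v"
  using assms by (auto simp: mat_apply_def fun_eq_iff intro!: sum.cong)

lemma fin_supp_mat_apply:
  assumes "fin_supp v" "\<And>x. v x \<noteq> 0 \<Longrightarrow> fin_supp (M x)"
  shows "fin_supp (mat_apply M v)"
proof -
  have "{y. mat_apply M v y \<noteq> 0} \<subseteq> (\<Union>x\<in>{x. v x \<noteq> 0}. {y. M x y \<noteq> 0})"
  proof
    fix y assume "y \<in> {y. mat_apply M v y \<noteq> 0}"
    then have "(\<Sum>x\<in>{x. v x \<noteq> 0}. v x * M x y) \<noteq> 0" by (simp add: mat_apply_def)
    then obtain x where "x \<in> {x. v x \<noteq> 0}" "v x * M x y \<noteq> 0" by (rule sum.not_neutral_contains_not_neutral)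
    then show "y \<in> (\<Union>x\<in>{x. v x \<noteq> 0}. {y. M x y \<noteq> 0})" by (intro UN_I[of x]) simp_all
  qed
  moreover have "finite (\<Union>x\<in>{x. v x \<noteq> 0}. {y. M x y \<noteq> 0})"
    using assms by (auto simp: fin_supp_def)
  ultimately show ?thesis unfolding fin_supp_def by (rule finite_subset)
qed

lemma mat_apply_supp:
  assumes "mat_apply M v y \<noteq> 0"
  obtains x where "v x \<noteq> 0" "M x y \<noteq> 0"
proof -
  from assms have "(\<Sum>x\<in>{x. v x \<noteq> 0}. v x * M x y) \<noteq> 0" by (simp add: mat_apply_def)
  then obtain x where "x \<in> {x. v x \<noteq> 0}" "v x * M x y \<noteq> 0"
    by (rule sum.not_neutral_contains_not_neutral)
  then show ?thesis using that by auto
qed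

lemma mat_apply_comp:
  assumes "fin_supp v" "\<And>x. v x \<noteq> 0 \<Longrightarrow> fin_supp (M x)"
  shows "mat_apply N (mat_apply M v) = mat_apply (\<lambda>x. mat_apply N (M x)) v"
proof
  fix y
  let ?V = "{x. v x \<noteq> 0}"
  let ?S = "\<Union>x\<in>?V. {z. M x z \<noteq> 0}"
  have fV: "finite ?V" using assms by (auto simp: fin_supp_def)
  have fS: "finite ?S" using assms by (auto simp: fin_supp_def)
  have sub: "{z. mat_apply M v z \<noteq> 0} \<subseteq> ?S"
    by (auto elim!: mat_apply_supp)
  have "mat_apply N (mat_apply M v) y = (\<Sum>z\<in>?S. mat_apply M v z * N z y)"
    by (rule mat_apply_sum[OF fS sub])
  also have "\<dots> = (\<Sum>z\<in>?S. \<Sum>x\<in>?V. v x * M x z * N z y)"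
    by (simp add: mat_apply_def sum_distrib_right)
  also have "\<dots> = (\<Sum>x\<in>?V. \<Sum>z\<in>?S. v x * M x z * N z y)"
    by (rule sum.swap)
  also have "\<dots> = (\<Sum>x\<in>?V. v x * mat_apply N (M x) y)"
  proof (rule sum.cong[OF refl])
    fix x assume x: "x \<in> ?V"
    have "mat_apply N (M x) y = (\<Sum>z\<in>?S. M x z * N z y)"
      by (rule mat_apply_sum[OF fS]) (use x in auto)
    then show "(\<Sum>z\<in>?S. v x * M x z * N z y) = v x * mat_apply N (M x) y"
      by (simp add: sum_distrib_left mult.assoc)
  qed
  also have "\<dots> = mat_apply (\<lambda>x. mat_apply N (M x)) v y" by (simp add: mat_apply_def)
  finally show "mat_apply N (mat_apply M v) y = mat_apply (\<lambda>x. mat_apply N (M x)) v y" .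
qed

declare fin_supp_add[simp] fin_supp_smul[simp] mat_apply_add[simp] mat_apply_smul[simp]

lemma fin_supp_uminus[simp]: "fin_supp v \<Longrightarrow> fin_supp (\<lambda>x. - v x)"
  using fin_supp_smul[of v "-1"] by simp

lemma mat_apply_uminus[simp]: "fin_supp v \<Longrightarrow> mat_apply M (\<lambda>x. - v x) = (\<lambda>y. - mat_apply M v y)"
  using mat_apply_smul[of v M "-1"] by simp

lemma fin_supp_diff[simp]: "fin_supp v \<Longrightarrow> fin_supp w \<Longrightarrow> fin_supp (\<lambda>x. v x - w x)"
  using fin_supp_add[of v "\<lambda>x. - w x"] by simp

lemma mat_apply_diff[simp]:
  "fin_supp v \<Longrightarrow> fin_supp w \<Longrightarrow> mat_apply M (\<lambda>x. v x - w x) = (\<lambda>y. mat_apply M v y - mat_apply M w y)"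
  using mat_apply_add[of v "\<lambda>x. - w x" M] by simp

lemma fin_supp_expand:
  assumes "fin_supp v"
  shows "v = (\<lambda>y. \<Sum>x\<in>{x. v x \<noteq> 0}. v x * bvec x y)"
proof
  fix y
  show "v y = (\<Sum>x\<in>{x. v x \<noteq> 0}. v x * bvec x y)"
  proof (cases "v y = 0")
    case True then show ?thesis by (auto simp: bvec_def intro!: sum.neutral)
  next
    case False
    have f: "finite {x. v x \<noteq> 0}" using assms by (simp add: fin_supp_def)
    have "(\<Sum>x\<in>{x. v x \<noteq> 0}. v x * bvec x y) = (\<Sum>x\<in>{y}. v x * bvec x y)"
      by (rule sum.mono_neutral_right) (use f False in \<open>auto simp: bvec_def\<close>)
    then show ?thesis by (simp add: bvec_def)
  qed
qed

section \<open>Quantum numbers\<close>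

lemma qe_add: "qe r (x + y) = qe r x * qe r y"
  by (simp add: qe_def exp_add[symmetric] distrib_left distrib_right add_divide_distrib)

lemma qe_0[simp]: "qe r 0 = 1" by (simp add: qe_def)

lemma qe_neg: "qe r (- x) = inverse (qe r x)"
  by (simp add: qe_def exp_minus)

lemma qe_r: "r > 0 \<Longrightarrow> qe r (int r) = -1"
  by (simp add: qe_def)

lemma qe_nat_r: "r > 0 \<Longrightarrow> qe r (int n * int r) = (-1) ^ n"
proof (induction n)
  case 0 then show ?case by simp
next
  case (Suc n)
  have "qe r (int (Suc n) * int r) = qe r (int n * int r + int r)" by (simp add: algebra_simps)
  also have "\<dots> = qe r (int n * int r) * qe r (int r)" by (rule qe_add)
  finally show ?case using Suc qe_r[of r] by simp
qed

lemma qe_mult_r: "r > 0 \<Longrightarrow> qe r (k * int r) = (-1) ^ nat \<bar>k\<bar>"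
proof (cases "k \<ge> 0")
  case True
  assume "r > 0"
  then show ?thesis using True qe_nat_r[of r "nat k"] by simp
next
  case False
  assume r: "r > 0"
  have "qe r (k * int r) = qe r (- (int (nat (-k)) * int r))" using False by simp
  also have "\<dots> = inverse ((-1) ^ nat (-k))" using qe_nat_r[OF r, of "nat (-k)"] by (simp add: qe_neg)
  also have "\<dots> = (-1) ^ nat \<bar>k\<bar>" using False by (simp add: power_inverse[symmetric])
  finally show ?thesis .
qed

lemma qe_cis: "qe r x = cis (pi * of_int x / of_nat r)"
  by (simp add: qe_def cis_conv_exp mult_ac)

lemma qe_plus_neg: "qe r x + qe r (- x) = of_real (2 * cos (pi * of_int x / of_nat r))"
  by (simp add: qe_cis complex_eq_iff)

lemma qbr_sin: "qbr r x = \<i> * of_real (2 * sin (pi * of_int x / of_nat r))"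
  by (simp add: qbr_def qe_cis complex_eq_iff)

lemma qbr1_nz: "r \<ge> 2 \<Longrightarrow> qbr r 1 \<noteq> 0"
proof -
  assume r: "r \<ge> 2"
  have "0 < pi / real r" using r by simp
  moreover have "pi / real r < pi" using r by (simp add: divide_less_eq)
  ultimately have "sin (pi / real r) > 0" by (rule sin_gt_zero)
  then show ?thesis by (simp add: qbr_sin)
qed

lemma qbr_prod: "qbr r x * qbr r y = qe r (x + y) - qe r (x - y) - qe r (y - x) + qe r (- x - y)"
proof -
  have "qbr r x * qbr r y = qe r x * qe r y - qe r x * qe r (- y) - qe r (- x) * qe r y + qe r (- x) * qe r (- y)"
    by (simp add: qbr_def algebra_simps)
  also have "\<dots> = qe r (x + y) - qe r (x - y) - qe r (y - x) + qe r (- x - y)"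
    by (simp add: qe_add[symmetric] algebra_simps)
  finally show ?thesis .
qed

lemma qint_prod:
  assumes "r \<ge> 2"
  shows "qint r x * qint r y = (qe r (x + y) - qe r (x - y) - qe r (y - x) + qe r (- x - y)) / (qbr r 1)\<^sup>2"
  using qbr1_nz[OF assms] by (simp add: qint_def qbr_prod[symmetric] power2_eq_square)

lemma qe_plus_r: "r > 0 \<Longrightarrow> qe r (x + int r) = - qe r x"
  by (simp add: qe_add qe_r)

lemma qint_nz:
  assumes r2: "r \<ge> 2" and x: "0 < x" "x < int r"
  shows "qint r x \<noteq> 0"
proof -
  have r: "real r > 0" using r2 by simp
  have "0 < pi * real_of_int x / real r" using x r by simp
  moreover have "pi * real_of_int x / real r < pi"
    using x r by (simp add: divide_less_eq)
  ultimately have "sin (pi * real_of_int x / real r) > 0" by (rule sin_gt_zero)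
  then have "qbr r x \<noteq> 0" by (simp add: qbr_sin)
  then show ?thesis using qbr1_nz[OF r2] by (simp add: qint_def)
qed

lemma gam_sym: "gam r n (n - m + 1) = gam r n m"
  by (simp add: gam_def mult.commute)

fun gam_prod :: "nat \<Rightarrow> nat \<Rightarrow> nat \<Rightarrow> complex" where
  "gam_prod r n 0 = 1"
| "gam_prod r n (Suc a) = gam_prod r n a * gam r (int n) (int n - int a)"

lemma gam_prod_nz:
  assumes r2: "r \<ge> 2" and i: "i < r"
  shows "a \<le> i \<Longrightarrow> gam_prod r i a \<noteq> 0"
proof (induction a)
  case 0 then show ?case by simp
next
  case (Suc a)
  have "gam r (int i) (int i - int a) = qint r (int i - int a) * qint r (int a + 1)"
    by (simp add: gam_def)
  moreover have "qint r (int i - int a) \<noteq> 0" using Suc i by (intro qint_nz[OF r2]) auto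
  moreover have "qint r (int a + 1) \<noteq> 0" using Suc i by (intro qint_nz[OF r2]) auto
  ultimately show ?case using Suc by simp
qed

lemma gam_prod_full_nz: "r \<ge> 2 \<Longrightarrow> i < r \<Longrightarrow> gam_prod r i i \<noteq> 0"
  using gam_prod_nz by blast

definition deg_sign :: "nat \<Rightarrow> int \<Rightarrow> complex" where "deg_sign r k = qe r (- (k * int r))"

lemma deg_sign_succ: "r > 0 \<Longrightarrow> deg_sign r (k + 1) = - deg_sign r k"
proof -
  assume r: "r > 0"
  have "qe r (- ((k + 1) * int r)) = qe r (- (k * int r)) * qe r (- int r)"
    by (subst qe_add[symmetric]) (simp add: algebra_simps)
  also have "qe r (- int r) = -1" using qe_r[OF r] by (simp add: qe_neg)
  finally show ?thesis by (simp add: deg_sign_def)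
qed

lemma deg_sign_pred: "r > 0 \<Longrightarrow> deg_sign r (k - 1) = - deg_sign r k"
  using deg_sign_succ[of r "k - 1"] by simp

lemma deg_sign_pow: "r > 0 \<Longrightarrow> deg_sign r k = (-1) ^ nat \<bar>k\<bar>"
  using qe_mult_r[of r "-k"] by (simp add: deg_sign_def)

lemma deg_sign_eq: "r > 0 \<Longrightarrow> deg_sign r k' = (if even (k' - k) then deg_sign r k else - deg_sign r k)"
proof -
  assume r: "r > 0"
  have "deg_sign r k' = qe r (- (k * int r)) * qe r (- ((k' - k) * int r))"
    unfolding qe_add[symmetric] by (simp add: deg_sign_def algebra_simps)
  also have "\<dots> = deg_sign r k * deg_sign r (k' - k)" by (simp add: deg_sign_def)
  also have "deg_sign r (k' - k) = (if even (k' - k) then 1 else -1)"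
    using deg_sign_pow[OF r, of "k' - k"] by (simp add: even_nat_iff)
  finally show ?thesis by simp
qed

lemma deg_sign_nz: "deg_sign r k \<noteq> 0" by (simp add: deg_sign_def qe_def)

lemma qe_kr: "r > 0 \<Longrightarrow> qe r (k * int r) = deg_sign r k"
  using qe_mult_r[of r k] qe_mult_r[of r "-k"] by (simp add: deg_sign_def)

lemma opE_mat_apply: "opE r = mat_apply (Ecoef r)"
  by (simp add: opE_def mat_apply_def fun_eq_iff)

lemma opF_mat_apply: "opF r = mat_apply (Fcoef r)"
  by (simp add: opF_def mat_apply_def fun_eq_iff)

definition lab_nbhd :: "nat \<Rightarrow> blab \<Rightarrow> blab set" where
  "lab_nbhd i b = (let n = (case b of Hb a \<Rightarrow> a | Sb a \<Rightarrow> a | Rb a \<Rightarrow> a | Lb a \<Rightarrow> a | Vb a \<Rightarrow> a) in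
     {Hb (n-1), Sb (n-1), Rb (n+1), Rb 0, Lb (n-1), Lb (n+1), Lb 0, Sb i, Sb 0, Hb (n+1),
      Sb (n+1), Rb (n-1), Vb (n-1), Vb (n+1)})"

lemma finite_lab_nbhd[simp]: "finite (lab_nbhd i b)" by (simp add: lab_nbhd_def Let_def)

lemma Eb_lab_nbhd: "Eb r i b z \<noteq> 0 \<Longrightarrow> z \<in> lab_nbhd i b"
  by (cases b) (auto simp: lab_nbhd_def dl_def split: if_splits)

lemma Fb_lab_nbhd: "Fb r i b z \<noteq> 0 \<Longrightarrow> z \<in> lab_nbhd i b"
  by (cases b) (auto simp: lab_nbhd_def dl_def split: if_splits)

lemma Eb_supp:
  assumes "valid_lab r i b" "Eb r i b z \<noteq> 0"
  shows "valid_lab r i z \<and> lab_wt r i z = lab_wt r i b + 2"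
  using assms by (cases b) (auto simp: dl_def split: if_splits)

lemma Fb_supp:
  assumes "valid_lab r i b" "Fb r i b z \<noteq> 0"
  shows "valid_lab r i z \<and> lab_wt r i z = lab_wt r i b - 2"
  using assms by (cases b) (auto simp: dl_def split: if_splits)

lemma Ecoef_supp:
  assumes "valid r x" "Ecoef r x y \<noteq> 0"
  shows "valid r y \<and> wt r y = wt r x + 2 \<and> fst y = fst x \<and> fst (snd y) = fst (snd x)"
  using assms Eb_supp[of r "fst (snd x)" "snd (snd x)" "snd (snd y)"]
  by (auto simp: Ecoef_def valid_def wt_def split: if_splits)

lemma Fcoef_supp:
  assumes "valid r x" "Fcoef r x y \<noteq> 0"
  shows "valid r y \<and> wt r y = wt r x - 2 \<and> fst y = fst x \<and> fst (snd y) = fst (snd x)"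
  using assms Fb_supp[of r "fst (snd x)" "snd (snd x)" "snd (snd y)"]
  by (auto simp: Fcoef_def valid_def wt_def split: if_splits)

lemma fin_supp_Ecoef[simp]: "fin_supp (Ecoef r x)"
proof -
  obtain k i b where x: "x = (k, i, b)" by (cases x) auto
  have "{y. Ecoef r x y \<noteq> 0} \<subseteq> (\<lambda>z. (k, i, z)) ` lab_nbhd i b"
  proof
    fix y assume "y \<in> {y. Ecoef r x y \<noteq> 0}"
    then have "fst y = k" "fst (snd y) = i" "Eb r i b (snd (snd y)) \<noteq> 0"
      by (auto simp: Ecoef_def x split: if_splits)
    then show "y \<in> (\<lambda>z. (k, i, z)) ` lab_nbhd i b"
      by (intro image_eqI[of _ _ "snd (snd y)"]) (auto intro: Eb_lab_nbhd simp: prod_eq_iff)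
  qed
  then show ?thesis unfolding fin_supp_def by (rule finite_subset) simp
qed

lemma fin_supp_Fcoef[simp]: "fin_supp (Fcoef r x)"
proof -
  obtain k i b where x: "x = (k, i, b)" by (cases x) auto
  have "{y. Fcoef r x y \<noteq> 0} \<subseteq> (\<lambda>z. (k, i, z)) ` lab_nbhd i b"
  proof
    fix y assume "y \<in> {y. Fcoef r x y \<noteq> 0}"
    then have "fst y = k" "fst (snd y) = i" "Fb r i b (snd (snd y)) \<noteq> 0"
      by (auto simp: Fcoef_def x split: if_splits)
    then show "y \<in> (\<lambda>z. (k, i, z)) ` lab_nbhd i b"
      by (intro image_eqI[of _ _ "snd (snd y)"]) (auto intro: Fb_lab_nbhd simp: prod_eq_iff)
  qed
  then show ?thesis unfolding fin_supp_def by (rule finite_subset) simp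
qed

definition Pbasis :: "nat \<Rightarrow> int \<Rightarrow> pidx set" where
  "Pbasis r \<nu> = {x. valid r x \<and> wt r x mod 2 = \<nu>}"

lemma Pnu_iff: "v \<in> Pnu r \<nu> \<longleftrightarrow> fin_supp v \<and> (\<forall>x. v x \<noteq> 0 \<longrightarrow> x \<in> Pbasis r \<nu>)"
  by (simp add: Pnu_def Pbasis_def fin_supp_def)

declare split_paired_All[simp del] split_paired_Ex[simp del]

lemma bvec_Pnu[simp]: "bvec x \<in> Pnu r \<nu> \<longleftrightarrow> x \<in> Pbasis r \<nu>"
  by (simp add: Pnu_iff) (simp add: bvec_def)

lemma zero_Pnu[simp]: "(\<lambda>x. 0) \<in> Pnu r \<nu>" by (simp add: Pnu_iff)

lemma add_Pnu: "v \<in> Pnu r \<nu> \<Longrightarrow> w \<in> Pnu r \<nu> \<Longrightarrow> (\<lambda>x. v x + w x) \<in> Pnu r \<nu>"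
  unfolding Pnu_iff
proof (intro conjI allI impI)
  fix x assume "fin_supp v \<and> (\<forall>x. v x \<noteq> 0 \<longrightarrow> x \<in> Pbasis r \<nu>)" "fin_supp w \<and> (\<forall>x. w x \<noteq> 0 \<longrightarrow> x \<in> Pbasis r \<nu>)"
    "v x + w x \<noteq> 0"
  then show "x \<in> Pbasis r \<nu>" by (metis add.right_neutral add_0)
qed (auto intro: fin_supp_add)

lemma smul_Pnu: "v \<in> Pnu r \<nu> \<Longrightarrow> (\<lambda>x. c * v x) \<in> Pnu r \<nu>"
  unfolding Pnu_iff by (auto intro: fin_supp_smul)

lemma Pnu_fin_supp: "v \<in> Pnu r \<nu> \<Longrightarrow> fin_supp v" by (simp add: Pnu_iff)
lemma mat_apply_Pnu:
  assumes "v \<in> Pnu r \<nu>" "\<And>x. x \<in> Pbasis r \<nu> \<Longrightarrow> M x \<in> Pnu r \<nu>"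
  shows "mat_apply M v \<in> Pnu r \<nu>"
  unfolding Pnu_iff
proof
  show "fin_supp (mat_apply M v)"
    by (rule fin_supp_mat_apply) (use assms in \<open>auto simp: Pnu_iff\<close>)
  show "\<forall>x. mat_apply M v x \<noteq> 0 \<longrightarrow> x \<in> Pbasis r \<nu>"
    by (auto elim!: mat_apply_supp) (use assms in \<open>auto simp: Pnu_iff\<close>)
qed

lemma opE_Pnu: "v \<in> Pnu r \<nu> \<Longrightarrow> opE r v \<in> Pnu r \<nu>"
  unfolding opE_mat_apply
proof (rule mat_apply_Pnu)
  fix x assume x: "x \<in> Pbasis r \<nu>"
  show "Ecoef r x \<in> Pnu r \<nu>"
    unfolding Pnu_iff
  proof (intro conjI allI impI)
    fix y assume "Ecoef r x y \<noteq> 0"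
    with Ecoef_supp[of r x y] x have "valid r y" "wt r y = wt r x + 2" by (auto simp: Pbasis_def)
    then show "y \<in> Pbasis r \<nu>" using x by (auto simp: Pbasis_def)
  qed simp
qed

lemma opF_Pnu: "v \<in> Pnu r \<nu> \<Longrightarrow> opF r v \<in> Pnu r \<nu>"
  unfolding opF_mat_apply
proof (rule mat_apply_Pnu)
  fix x assume x: "x \<in> Pbasis r \<nu>"
  show "Fcoef r x \<in> Pnu r \<nu>"
    unfolding Pnu_iff
  proof (intro conjI allI impI)
    fix y assume "Fcoef r x y \<noteq> 0"
    with Fcoef_supp[of r x y] x have "valid r y" "wt r y = wt r x - 2" by (auto simp: Pbasis_def)
    then show "y \<in> Pbasis r \<nu>" using x by (auto simp: Pbasis_def)
  qed simp
qed

definition wt_diag :: "nat \<Rightarrow> (int \<Rightarrow> complex) \<Rightarrow> pvec \<Rightarrow> pvec" where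
  "wt_diag r g v = (\<lambda>y. g (wt r y) * v y)"

lemma opH_wt_diag: "opH r = wt_diag r of_int" by (simp add: opH_def wt_diag_def fun_eq_iff)
lemma opK_wt_diag: "opK r = wt_diag r (qe r)" by (simp add: opK_def wt_diag_def fun_eq_iff)
lemma opKinv_wt_diag: "opKinv r = wt_diag r (\<lambda>m. qe r (-m))" by (simp add: opKinv_def wt_diag_def fun_eq_iff)

lemma wt_diag_Pnu: "v \<in> Pnu r \<nu> \<Longrightarrow> wt_diag r g v \<in> Pnu r \<nu>"
  unfolding Pnu_iff wt_diag_def fin_supp_def
  by (auto intro: finite_subset[of _ "{x. v x \<noteq> 0}"])

definition shift_deg :: "nat \<Rightarrow> int" where "shift_deg r = int (2 * rprime r div r)"

lemma shift_deg_cases: "r > 0 \<Longrightarrow> (odd r \<and> shift_deg r = 2) \<or> (even r \<and> shift_deg r = 1)"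
  by (auto simp: shift_deg_def rprime_def)

lemma shift_deg_odd: "odd r \<Longrightarrow> shift_deg r = 2"
  using shift_deg_cases[of r] by (cases r) auto

lemma shift_deg_even: "even r \<Longrightarrow> r > 0 \<Longrightarrow> shift_deg r = 1"
  using shift_deg_cases[of r] by auto

lemma shiftP_alt: "shiftP r v = (\<lambda>y. v (fst y - shift_deg r, snd y))"
  by (simp add: shiftP_def shift_deg_def)

lemma even_shift_deg: "even (shift_deg r * int r)"
proof (cases "odd r")
  case True
  then have "r > 0" by (cases r) auto
  then have "shift_deg r = 2" using True by (simp add: shift_deg_def rprime_def)
  then show ?thesis by simp
next
  case False then show ?thesis by simp
qed

lemma wt_shift: "wt r (fst x + s, snd x) = wt r x + s * int r"
  by (simp add: wt_def algebra_simps)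

lemma Pbasis_shift: "x \<in> Pbasis r \<nu> \<Longrightarrow> (fst x + shift_deg r, snd x) \<in> Pbasis r \<nu>"
proof -
  assume x: "x \<in> Pbasis r \<nu>"
  obtain m where m: "shift_deg r * int r = 2 * m" using even_shift_deg[of r] by (auto elim: evenE)
  have "wt r (fst x + shift_deg r, snd x) mod 2 = (wt r x + 2 * m) mod 2" using m by (simp add: wt_shift)
  also have "\<dots> = wt r x mod 2" by simp
  finally show ?thesis using x by (simp add: Pbasis_def valid_def)
qed

lemma Pbasis_unshift: "x \<in> Pbasis r \<nu> \<Longrightarrow> (fst x - shift_deg r, snd x) \<in> Pbasis r \<nu>"
proof -
  assume x: "x \<in> Pbasis r \<nu>"
  obtain m where m: "shift_deg r * int r = 2 * m" using even_shift_deg[of r] by (auto elim: evenE)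
  have "wt r (fst x - shift_deg r, snd x) = wt r x - 2 * m" using m by (simp add: wt_def algebra_simps)
  then have "wt r (fst x - shift_deg r, snd x) mod 2 = (wt r x - 2 * m) mod 2" by simp
  also have "\<dots> = wt r x mod 2" by presburger
  finally show ?thesis using x by (simp add: Pbasis_def valid_def)
qed

lemma shiftP_Pnu: "v \<in> Pnu r \<nu> \<Longrightarrow> shiftP r v \<in> Pnu r \<nu>"
proof -
  assume v: "v \<in> Pnu r \<nu>"
  have "{y. shiftP r v y \<noteq> 0} = (\<lambda>x. (fst x + shift_deg r, snd x)) ` {x. v x \<noteq> 0}"
    by (force simp: shiftP_alt image_iff)
  then have "fin_supp (shiftP r v)" using v by (simp add: fin_supp_def Pnu_iff)
  moreover have "\<forall>y. shiftP r v y \<noteq> 0 \<longrightarrow> y \<in> Pbasis r \<nu>"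
  proof (intro allI impI)
    fix y assume "shiftP r v y \<noteq> 0"
    then have "(fst y - shift_deg r, snd y) \<in> Pbasis r \<nu>" using v by (auto simp: shiftP_alt Pnu_iff)
    from Pbasis_shift[OF this] show "y \<in> Pbasis r \<nu>" by simp
  qed
  ultimately show ?thesis by (simp add: Pnu_iff)
qed

lemma shiftP_bvec: "shiftP r (bvec x) = bvec (fst x + shift_deg r, snd x)"
  by (auto simp: shiftP_alt bvec_def fun_eq_iff)

definition dual :: "nat \<Rightarrow> nat \<Rightarrow> nat" where "dual r i = r - 2 - i"

lemma dual_inv: "i + 2 \<le> r \<Longrightarrow> dual r (dual r i) = i" by (simp add: dual_def)

lemma dual_le: "i + 2 \<le> r \<Longrightarrow> dual r i + 2 \<le> r" by (simp add: dual_def)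

lemma int_dual: "i + 2 \<le> r \<Longrightarrow> int (dual r i) = int r - 2 - int i"
  by (simp add: dual_def)

lemma lab_wt_mod2: "valid_lab r i b \<Longrightarrow> lab_wt r i b mod 2 = int i mod 2"
proof (cases b)
  case (Hb a)
  have "lab_wt r i b = int i - 2 * int a" using Hb by simp
  then show ?thesis by presburger
next
  case (Sb a)
  have "lab_wt r i b = int i - 2 * int a" using Sb by simp
  then show ?thesis by presburger
next
  case (Rb a)
  have "lab_wt r i b = int i + 2 * (1 + int a)" using Rb by simp
  then show ?thesis by presburger
next
  case (Lb a)
  have "lab_wt r i b = - 2 * (1 + int a) - int i" using Lb by simp
  then show ?thesis by presburger
next
  case (Vb a)
  assume v: "valid_lab r i b"
  then have "int r = int i + 1" using Vb by simp
  then have "lab_wt r i b = int i - 2 * int a" using Vb by simp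
  then show ?thesis by presburger
qed

definition summand :: "nat \<Rightarrow> int \<Rightarrow> int \<Rightarrow> nat \<Rightarrow> bool" where
  "summand r \<nu> k i \<longleftrightarrow> i < r \<and> (k * int r + int i) mod 2 = \<nu>"

lemma Pbasis_iff_summand: "(k, i, b) \<in> Pbasis r \<nu> \<longleftrightarrow> summand r \<nu> k i \<and> valid_lab r i b"
proof -
  have "valid_lab r i b \<Longrightarrow> (k * int r + lab_wt r i b) mod 2 = (k * int r + int i) mod 2"
    using lab_wt_mod2[of r i b] by (metis mod_add_right_eq)
  then show ?thesis by (auto simp: Pbasis_def valid_def wt_def summand_def)
qed

lemma summand_dual:
  assumes "i + 2 \<le> r" "summand r \<nu> k i"
  shows "summand r \<nu> (k + 1) (dual r i) \<and> summand r \<nu> (k - 1) (dual r i)"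
proof -
  have dual_eq: "int (dual r i) = int r - 2 - int i" using assms by (intro int_dual) simp
  have e1: "(k + 1) * int r + int (dual r i) = (k * int r + int i) + 2 * (int r - 1 - int i)"
    using dual_eq by (simp add: algebra_simps)
  have e2: "(k - 1) * int r + int (dual r i) = (k * int r + int i) + 2 * (- 1 - int i)"
    using dual_eq by (simp add: algebra_simps)
  have lt: "dual r i < r" using assms by (simp add: dual_def)
  have pr: "\<forall>X::int. (X + int i) mod 2 = \<nu> \<longrightarrow> (X + int i + 2 * (int r - 1 - int i)) mod 2 = \<nu>
     \<and> (X + int i + 2 * (- 1 - int i)) mod 2 = \<nu>" by presburger
  show ?thesis using assms(2) lt pr[rule_format, of "k * int r"] unfolding summand_def e1 e2 by blast
qed

lemma mult_odd_mod2: "odd r \<Longrightarrow> (k * int r + m) mod 2 = (k + m) mod 2"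
proof -
  assume "odd r"
  then obtain q where q: "r = 2 * q + 1" by (auto elim: oddE)
  have "k * int r + m = 2 * (k * int q) + (k + m)" by (simp add: q algebra_simps)
  then show ?thesis by presburger
qed

lemma mult_even_mod2: "even r \<Longrightarrow> (k * int r + m) mod 2 = m mod 2"
proof -
  assume "even r"
  then obtain q where q: "r = 2 * q" by (auto elim: evenE)
  have "k * int r + m = 2 * (k * int q) + m" by (simp add: q algebra_simps)
  then show ?thesis by presburger
qed

lemma summand_even: "even r \<Longrightarrow> summand r \<nu> k i \<longleftrightarrow> i < r \<and> int (i mod 2) = \<nu>"
  by (simp add: summand_def mult_even_mod2 of_nat_mod)

definition mat_endo :: "nat \<Rightarrow> int \<Rightarrow> (pidx \<Rightarrow> pvec) \<Rightarrow> pvec \<Rightarrow> pvec" where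
  "mat_endo r \<nu> M = (\<lambda>v. if v \<in> Pnu r \<nu> then mat_apply M v else (\<lambda>x. 0))"

lemma mat_apply_wt_diag:
  assumes v: "v \<in> Pnu r \<nu>"
    and w: "\<And>x y. x \<in> Pbasis r \<nu> \<Longrightarrow> M x y \<noteq> 0 \<Longrightarrow> wt r y = wt r x"
  shows "mat_apply M (wt_diag r g v) = wt_diag r g (mat_apply M v)"
proof
  fix y
  have f: "finite {x. v x \<noteq> 0}" using v by (simp add: Pnu_iff fin_supp_def)
  have "mat_apply M (wt_diag r g v) y = (\<Sum>x\<in>{x. v x \<noteq> 0}. g (wt r x) * v x * M x y)"
    using mat_apply_sum[OF f, of "wt_diag r g v" M y] by (auto simp: wt_diag_def)
  also have "\<dots> = (\<Sum>x\<in>{x. v x \<noteq> 0}. v x * (g (wt r y) * M x y))"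
  proof (rule sum.cong[OF refl])
    fix x assume "x \<in> {x. v x \<noteq> 0}"
    then have "x \<in> Pbasis r \<nu>" using v by (simp add: Pnu_iff)
    then show "g (wt r x) * v x * M x y = v x * (g (wt r y) * M x y)"
      using w[of x y] by (cases "M x y = 0") auto
  qed
  also have "\<dots> = wt_diag r g (mat_apply M v) y"
    by (simp add: wt_diag_def mat_apply_def sum_distrib_left mult_ac)
  finally show "mat_apply M (wt_diag r g v) y = wt_diag r g (mat_apply M v) y" .
qed

lemma mat_apply_shift:
  assumes v: "v \<in> Pnu r \<nu>"
    and s: "\<And>x. x \<in> Pbasis r \<nu> \<Longrightarrow> M (fst x + shift_deg r, snd x) = shiftP r (M x)"
  shows "mat_apply M (shiftP r v) = shiftP r (mat_apply M v)"
proof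
  fix y
  let ?g = "\<lambda>x. (fst x + shift_deg r, snd x)"
  have f: "finite {x. v x \<noteq> 0}" using v by (simp add: Pnu_iff fin_supp_def)
  have supp: "{x. shiftP r v x \<noteq> 0} = ?g ` {x. v x \<noteq> 0}"
    by (force simp: shiftP_alt image_iff)
  have inj: "inj_on ?g {x. v x \<noteq> 0}" by (auto simp: inj_on_def prod_eq_iff)
  have "mat_apply M (shiftP r v) y = (\<Sum>x\<in>?g ` {x. v x \<noteq> 0}. shiftP r v x * M x y)"
    by (simp add: mat_apply_def supp)
  also have "\<dots> = (\<Sum>x\<in>{x. v x \<noteq> 0}. shiftP r v (?g x) * M (?g x) y)"
    by (simp add: sum.reindex[OF inj])
  also have "\<dots> = (\<Sum>x\<in>{x. v x \<noteq> 0}. v x * M x (fst y - shift_deg r, snd y))"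
  proof (rule sum.cong[OF refl])
    fix x assume "x \<in> {x. v x \<noteq> 0}"
    then have "x \<in> Pbasis r \<nu>" using v by (simp add: Pnu_iff)
    then show "shiftP r v (?g x) * M (?g x) y = v x * M x (fst y - shift_deg r, snd y)"
      using s[of x] by (simp add: shiftP_alt)
  qed
  also have "\<dots> = shiftP r (mat_apply M v) y" by (simp add: shiftP_alt mat_apply_def)
  finally show "mat_apply M (shiftP r v) y = shiftP r (mat_apply M v) y" .
qed

lemma mat_apply_comm:
  assumes v: "v \<in> Pnu r \<nu>"
    and rowP: "\<And>x. x \<in> Pbasis r \<nu> \<Longrightarrow> M x \<in> Pnu r \<nu>"
    and fN: "\<And>x. fin_supp (N x)"
    and c: "\<And>x. x \<in> Pbasis r \<nu> \<Longrightarrow> mat_apply M (N x) = mat_apply N (M x)"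
  shows "mat_apply M (mat_apply N v) = mat_apply N (mat_apply M v)"
proof -
  have fv: "fin_supp v" using v by (simp add: Pnu_iff)
  have "mat_apply M (mat_apply N v) = mat_apply (\<lambda>x. mat_apply M (N x)) v" by (rule mat_apply_comp[OF fv fN])
  also have "\<dots> = mat_apply (\<lambda>x. mat_apply N (M x)) v"
    by (rule mat_apply_cong) (use v c in \<open>auto simp: Pnu_iff\<close>)
  also have "\<dots> = mat_apply N (mat_apply M v)"
    by (rule mat_apply_comp[symmetric, OF fv]) (use v rowP in \<open>auto simp: Pnu_iff\<close>)
  finally show ?thesis .
qed

lemma mat_endo_EndSet:
  assumes rowP: "\<And>x. x \<in> Pbasis r \<nu> \<Longrightarrow> M x \<in> Pnu r \<nu>"
    and roww: "\<And>x y. x \<in> Pbasis r \<nu> \<Longrightarrow> M x y \<noteq> 0 \<Longrightarrow> wt r y = wt r x"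
    and rowE: "\<And>x. x \<in> Pbasis r \<nu> \<Longrightarrow> mat_apply M (Ecoef r x) = mat_apply (Ecoef r) (M x)"
    and rowF: "\<And>x. x \<in> Pbasis r \<nu> \<Longrightarrow> mat_apply M (Fcoef r x) = mat_apply (Fcoef r) (M x)"
    and rowS: "\<And>x. x \<in> Pbasis r \<nu> \<Longrightarrow> M (fst x + shift_deg r, snd x) = shiftP r (M x)"
  shows "mat_endo r \<nu> M \<in> EndSet r \<nu>"
proof -
  have LP: "\<And>v. v \<in> Pnu r \<nu> \<Longrightarrow> mat_apply M v \<in> Pnu r \<nu>" by (rule mat_apply_Pnu) (use rowP in auto)
  show ?thesis
    unfolding EndSet_def mem_Collect_eq
  proof (intro conjI ballI allI impI)
    fix v assume v: "v \<in> Pnu r \<nu>"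
    show "mat_endo r \<nu> M v \<in> Pnu r \<nu>" using v LP by (simp add: mat_endo_def)
    show "mat_endo r \<nu> M (opE r v) = opE r (mat_endo r \<nu> M v)"
      using v opE_Pnu[OF v] by (simp add: mat_endo_def opE_mat_apply mat_apply_comm[OF v rowP _ rowE])
    show "mat_endo r \<nu> M (opF r v) = opF r (mat_endo r \<nu> M v)"
      using v opF_Pnu[OF v] by (simp add: mat_endo_def opF_mat_apply mat_apply_comm[OF v rowP _ rowF])
    show "mat_endo r \<nu> M (opK r v) = opK r (mat_endo r \<nu> M v)"
      using v by (simp add: mat_endo_def opK_wt_diag wt_diag_Pnu mat_apply_wt_diag[OF v roww])
    show "mat_endo r \<nu> M (opKinv r v) = opKinv r (mat_endo r \<nu> M v)"
      using v by (simp add: mat_endo_def opKinv_wt_diag wt_diag_Pnu mat_apply_wt_diag[OF v roww])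
    show "mat_endo r \<nu> M (opH r v) = opH r (mat_endo r \<nu> M v)"
      using v by (simp add: mat_endo_def opH_wt_diag wt_diag_Pnu mat_apply_wt_diag[OF v roww])
    show "mat_endo r \<nu> M (shiftP r v) = shiftP r (mat_endo r \<nu> M v)"
      using v by (simp add: mat_endo_def shiftP_Pnu mat_apply_shift[where M=M, OF v rowS])
  next
    fix c v assume v: "v \<in> Pnu r \<nu>"
    show "mat_endo r \<nu> M (\<lambda>x. c * v x) = (\<lambda>x. c * mat_endo r \<nu> M v x)"
      using v by (simp add: mat_endo_def smul_Pnu mat_apply_smul Pnu_fin_supp)
  next
    fix v w assume v: "v \<in> Pnu r \<nu>" and w: "w \<in> Pnu r \<nu>"
    show "mat_endo r \<nu> M (\<lambda>x. v x + w x) = (\<lambda>x. mat_endo r \<nu> M v x + mat_endo r \<nu> M w x)"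
      using v w by (simp add: mat_endo_def add_Pnu mat_apply_add Pnu_fin_supp)
  next
    fix v assume "v \<notin> Pnu r \<nu>"
    then show "mat_endo r \<nu> M v = (\<lambda>x. 0)" by (simp add: mat_endo_def)
  qed
qed

lemma End_Pnu: "f \<in> EndSet r \<nu> \<Longrightarrow> v \<in> Pnu r \<nu> \<Longrightarrow> f v \<in> Pnu r \<nu>"
  unfolding EndSet_def by blast
lemma End_add: "f \<in> EndSet r \<nu> \<Longrightarrow> v \<in> Pnu r \<nu> \<Longrightarrow> w \<in> Pnu r \<nu> \<Longrightarrow>
   f (\<lambda>x. v x + w x) = (\<lambda>x. f v x + f w x)"
  unfolding EndSet_def by blast
lemma End_smul: "f \<in> EndSet r \<nu> \<Longrightarrow> v \<in> Pnu r \<nu> \<Longrightarrow> f (\<lambda>x. c * v x) = (\<lambda>x. c * f v x)"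
  unfolding EndSet_def by blast
lemma End_zero:
  assumes "f \<in> EndSet r \<nu>" shows "f (\<lambda>x. 0) = (\<lambda>x. 0)"
  using End_smul[OF assms zero_Pnu, of 0] by simp

lemma End_E: "f \<in> EndSet r \<nu> \<Longrightarrow> v \<in> Pnu r \<nu> \<Longrightarrow> f (opE r v) = opE r (f v)"
  unfolding EndSet_def by blast
lemma End_F: "f \<in> EndSet r \<nu> \<Longrightarrow> v \<in> Pnu r \<nu> \<Longrightarrow> f (opF r v) = opF r (f v)"
  unfolding EndSet_def by blast
lemma End_H: "f \<in> EndSet r \<nu> \<Longrightarrow> v \<in> Pnu r \<nu> \<Longrightarrow> f (opH r v) = opH r (f v)"
  unfolding EndSet_def by blast
lemma End_S: "f \<in> EndSet r \<nu> \<Longrightarrow> v \<in> Pnu r \<nu> \<Longrightarrow> f (shiftP r v) = shiftP r (f v)"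
  unfolding EndSet_def by blast
lemma End_out: "f \<in> EndSet r \<nu> \<Longrightarrow> v \<notin> Pnu r \<nu> \<Longrightarrow> f v = (\<lambda>x. 0)"
  unfolding EndSet_def by blast

lemma End_sum:
  assumes f: "f \<in> EndSet r \<nu>" and S: "finite S" "S \<subseteq> Pbasis r \<nu>"
  shows "f (\<lambda>y. \<Sum>x\<in>S. c x * bvec x y) = (\<lambda>y. \<Sum>x\<in>S. c x * f (bvec x) y)
     \<and> (\<lambda>y. \<Sum>x\<in>S. c x * bvec x y) \<in> Pnu r \<nu>"
  using S
proof (induction S rule: finite_induct)
  case empty then show ?case using End_zero[OF f] by simp
next
  case (insert a S)
  then have a: "a \<in> Pbasis r \<nu>" and IH: "f (\<lambda>y. \<Sum>x\<in>S. c x * bvec x y) = (\<lambda>y. \<Sum>x\<in>S. c x * f (bvec x) y)"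
    "(\<lambda>y. \<Sum>x\<in>S. c x * bvec x y) \<in> Pnu r \<nu>" by auto
  have e: "(\<lambda>y. c a * bvec a y) \<in> Pnu r \<nu>" using a by (intro smul_Pnu) simp
  have eq: "(\<lambda>y. \<Sum>x\<in>insert a S. c x * bvec x y) = (\<lambda>y. (\<lambda>y. c a * bvec a y) y + (\<lambda>y. \<Sum>x\<in>S. c x * bvec x y) y)"
    using insert by simp
  show ?case
    unfolding eq
    using insert End_add[OF f e IH(2)] End_smul[OF f, of "bvec a" "c a"] a IH add_Pnu[OF e IH(2)]
    by simp
qed

lemma End_mat_apply:
  assumes f: "f \<in> EndSet r \<nu>" and v: "v \<in> Pnu r \<nu>"
  shows "f v = mat_apply (\<lambda>x. f (bvec x)) v"
proof -
  have fv: "fin_supp v" using v by (simp add: Pnu_iff)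
  have S: "finite {x. v x \<noteq> 0}" "{x. v x \<noteq> 0} \<subseteq> Pbasis r \<nu>" using v by (auto simp: Pnu_iff fin_supp_def)
  have "f v = f (\<lambda>y. \<Sum>x\<in>{x. v x \<noteq> 0}. v x * bvec x y)" using fin_supp_expand[OF fv] by simp
  also have "\<dots> = (\<lambda>y. \<Sum>x\<in>{x. v x \<noteq> 0}. v x * f (bvec x) y)"
    using End_sum[OF f S] by blast
  also have "\<dots> = mat_apply (\<lambda>x. f (bvec x)) v" by (simp add: mat_apply_def)
  finally show ?thesis .
qed

lemma End_eqI:
  assumes f: "f \<in> EndSet r \<nu>" and g: "g \<in> EndSet r \<nu>"
    and e: "\<And>x. x \<in> Pbasis r \<nu> \<Longrightarrow> f (bvec x) = g (bvec x)"
  shows "f = g"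
proof
  fix v
  show "f v = g v"
  proof (cases "v \<in> Pnu r \<nu>")
    case True
    have "f v = mat_apply (\<lambda>x. f (bvec x)) v" by (rule End_mat_apply[OF f True])
    also have "\<dots> = mat_apply (\<lambda>x. g (bvec x)) v"
      by (rule mat_apply_cong) (use True e in \<open>auto simp: Pnu_iff\<close>)
    also have "\<dots> = g v" by (rule End_mat_apply[OF g True, symmetric])
    finally show ?thesis .
  next
    case False then show ?thesis using End_out[OF f] End_out[OF g] by simp
  qed
qed

lemma End_wt:
  assumes f: "f \<in> EndSet r \<nu>" and x: "x \<in> Pbasis r \<nu>" and y: "f (bvec x) y \<noteq> 0"
  shows "wt r y = wt r x"
proof -
  have "opH r (bvec x) = (\<lambda>y. of_int (wt r x) * bvec x y)" by (auto simp: opH_def bvec_def fun_eq_iff)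
  then have "f (opH r (bvec x)) = (\<lambda>y. of_int (wt r x) * f (bvec x) y)"
    using End_smul[OF f, of "bvec x"] x by simp
  moreover have "f (opH r (bvec x)) = opH r (f (bvec x))" using End_H[OF f] x by simp
  ultimately have "of_int (wt r x) * f (bvec x) y = of_int (wt r y) * f (bvec x) y"
    by (metis opH_def)
  then show ?thesis using y by simp
qed

lemma End_shift_bvec:
  assumes f: "f \<in> EndSet r \<nu>" and x: "x \<in> Pbasis r \<nu>"
  shows "f (bvec (fst x + shift_deg r, snd x)) = shiftP r (f (bvec x))"
  using End_S[OF f, of "bvec x"] x by (simp add: shiftP_bvec)

lemma Ecoef_alt: "Ecoef r (k, i, b) = (\<lambda>y. if fst y = k \<and> fst (snd y) = i then Eb r i b (snd (snd y)) else 0)"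
  by (simp add: Ecoef_def fun_eq_iff)

lemma Fcoef_alt: "Fcoef r (k, i, b) = (\<lambda>y. deg_sign r k * (if fst y = k \<and> fst (snd y) = i then Fb r i b (snd (snd y)) else 0))"
  by (simp add: Fcoef_def deg_sign_def fun_eq_iff)

lemma E_H0: "Ecoef r (k, i, Hb 0) = bvec (k, i, Rb 0)"
  by (auto simp: Ecoef_alt bvec_def dl_def fun_eq_iff prod_eq_iff)
lemma E_H: "Ecoef r (k, i, Hb (Suc a)) = (\<lambda>y. gam r (int i) (int (Suc a)) * bvec (k, i, Hb a) y + bvec (k, i, Sb a) y)"
  by (auto simp: Ecoef_alt bvec_def dl_def fun_eq_iff prod_eq_iff)
lemma E_S0: "Ecoef r (k, i, Sb 0) = (\<lambda>y. 0)"
  by (auto simp: Ecoef_alt fun_eq_iff)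
lemma E_S: "Ecoef r (k, i, Sb (Suc a)) = (\<lambda>y. gam r (int i) (int (Suc a)) * bvec (k, i, Sb a) y)"
  by (auto simp: Ecoef_alt bvec_def dl_def fun_eq_iff prod_eq_iff)
lemma E_R: "a < dual r i \<Longrightarrow> Ecoef r (k, i, Rb a) = bvec (k, i, Rb (Suc a))"
  by (auto simp: Ecoef_alt bvec_def dl_def fun_eq_iff dual_def prod_eq_iff)
lemma E_Rtop: "\<not> a < dual r i \<Longrightarrow> Ecoef r (k, i, Rb a) = (\<lambda>y. 0)"
  by (auto simp: Ecoef_alt fun_eq_iff dual_def)
lemma E_L0: "Ecoef r (k, i, Lb 0) = bvec (k, i, Sb i)"
  by (auto simp: Ecoef_alt bvec_def dl_def fun_eq_iff prod_eq_iff)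
lemma E_L: "Ecoef r (k, i, Lb (Suc a)) = (\<lambda>y. (- gam r (int (dual r i)) (int (Suc a))) * bvec (k, i, Lb a) y)"
  by (auto simp: Ecoef_alt bvec_def dl_def fun_eq_iff dual_def prod_eq_iff)
lemma E_V0: "Ecoef r (k, i, Vb 0) = (\<lambda>y. 0)"
  by (auto simp: Ecoef_alt fun_eq_iff)
lemma E_V: "Ecoef r (k, i, Vb (Suc a)) = (\<lambda>y. (qint r (int (Suc a)) * qint r (int r - int (Suc a))) * bvec (k, i, Vb a) y)"
  by (auto simp: Ecoef_alt bvec_def dl_def fun_eq_iff prod_eq_iff)

lemma F_H: "a < i \<Longrightarrow> Fcoef r (k, i, Hb a) = (\<lambda>y. deg_sign r k * bvec (k, i, Hb (Suc a)) y)"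
  by (auto simp: Fcoef_alt bvec_def dl_def fun_eq_iff prod_eq_iff)
lemma F_Hbot: "\<not> a < i \<Longrightarrow> Fcoef r (k, i, Hb a) = (\<lambda>y. deg_sign r k * bvec (k, i, Lb 0) y)"
  by (auto simp: Fcoef_alt bvec_def dl_def fun_eq_iff prod_eq_iff)
lemma F_S: "a < i \<Longrightarrow> Fcoef r (k, i, Sb a) = (\<lambda>y. deg_sign r k * bvec (k, i, Sb (Suc a)) y)"
  by (auto simp: Fcoef_alt bvec_def dl_def fun_eq_iff prod_eq_iff)
lemma F_Sbot: "\<not> a < i \<Longrightarrow> Fcoef r (k, i, Sb a) = (\<lambda>y. 0)"
  by (auto simp: Fcoef_alt fun_eq_iff)
lemma F_L: "a < dual r i \<Longrightarrow> Fcoef r (k, i, Lb a) = (\<lambda>y. deg_sign r k * bvec (k, i, Lb (Suc a)) y)"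
  by (auto simp: Fcoef_alt bvec_def dl_def fun_eq_iff dual_def prod_eq_iff)
lemma F_Lbot: "\<not> a < dual r i \<Longrightarrow> Fcoef r (k, i, Lb a) = (\<lambda>y. 0)"
  by (auto simp: Fcoef_alt fun_eq_iff dual_def)
lemma F_R0: "Fcoef r (k, i, Rb 0) = (\<lambda>y. deg_sign r k * bvec (k, i, Sb 0) y)"
  by (auto simp: Fcoef_alt bvec_def dl_def fun_eq_iff prod_eq_iff)
lemma F_R: "Fcoef r (k, i, Rb (Suc a)) = (\<lambda>y. (deg_sign r k * (- gam r (int (dual r i)) (int (Suc a)))) * bvec (k, i, Rb a) y)"
  by (auto simp: Fcoef_alt bvec_def dl_def fun_eq_iff dual_def prod_eq_iff)
lemma F_V: "a + 1 < r \<Longrightarrow> Fcoef r (k, i, Vb a) = (\<lambda>y. deg_sign r k * bvec (k, i, Vb (Suc a)) y)"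
  by (auto simp: Fcoef_alt bvec_def dl_def fun_eq_iff prod_eq_iff)
lemma F_Vbot: "\<not> a + 1 < r \<Longrightarrow> Fcoef r (k, i, Vb a) = (\<lambda>y. 0)"
  by (auto simp: Fcoef_alt fun_eq_iff)

type_synonym coef_fun = "int \<Rightarrow> nat \<Rightarrow> complex"

text \<open>The general shape of an endomorphism: on the summand \<open>(k, i)\<close> the top vector \<open>h\<^sub>i\<close> goes to
  \<open>A h\<^sub>i + B s\<^sub>i + G L\<^sub>j\<^sub>-\<^sub>r + D R\<^sub>r\<^sub>+\<^sub>i\<close>, the last two being the vectors of the same weight in the summands
  \<open>(k + 1, j)\<close> and \<open>(k - 1, j)\<close>; the other rows are forced by commuting with \<open>E\<close> and \<open>F\<close>.\<close>

fun endo_row :: "nat \<Rightarrow> coef_fun \<Rightarrow> coef_fun \<Rightarrow> coef_fun \<Rightarrow> coef_fun \<Rightarrow> pidx \<Rightarrow> pvec" where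
  "endo_row r A B G D (k, i, Hb a) = (\<lambda>y. A k i * bvec (k, i, Hb a) y + (B k i * bvec (k, i, Sb a) y
      + ((G k i * (-1) ^ a) * bvec (k + 1, dual r i, Lb a) y
      + (D k i * gam_prod r i a) * bvec (k - 1, dual r i, Rb (i - a)) y)))"
| "endo_row r A B G D (k, i, Sb a) = (\<lambda>y. A k i * bvec (k, i, Sb a) y)"
| "endo_row r A B G D (k, i, Rb a) = (\<lambda>y. A k i * bvec (k, i, Rb a) y
      + (G k i * gam_prod r (dual r i) a) * bvec (k + 1, dual r i, Sb (dual r i - a)) y)"
| "endo_row r A B G D (k, i, Lb a) = (\<lambda>y. A k i * bvec (k, i, Lb a) y
      + (- (D k i * gam_prod r i i * (-1) ^ a)) * bvec (k - 1, dual r i, Sb a) y)"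
| "endo_row r A B G D (k, i, Vb a) = (\<lambda>y. A k i * bvec (k, i, Vb a) y)"

lemmas E_basis_eqs = E_H0 E_H E_S0 E_S E_L0 E_L E_V0 E_V
lemmas F_basis_eqs = F_H F_Hbot F_S F_Sbot F_L F_Lbot F_R0 F_R F_V F_Vbot

lemma endo_row_E_H0:
  assumes "i + 2 \<le> r"
  shows "mat_apply (endo_row r A B G D) (Ecoef r (k, i, Hb 0)) = mat_apply (Ecoef r) (endo_row r A B G D (k, i, Hb 0))"
proof -
  have j: "dual r (dual r i) = i" using assms by (rule dual_inv)
  show ?thesis by (simp add: E_basis_eqs E_Rtop j, (simp add: fun_eq_iff)?)
qed

lemma endo_row_E_H:
  assumes "i + 2 \<le> r" "Suc a \<le> i"
  shows "mat_apply (endo_row r A B G D) (Ecoef r (k, i, Hb (Suc a))) = mat_apply (Ecoef r) (endo_row r A B G D (k, i, Hb (Suc a)))"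
proof -
  have j: "dual r (dual r i) = i" using assms by (intro dual_inv) simp
  have lt: "i - Suc a < i" using assms by simp
  have s: "Suc (i - Suc a) = i - a" using assms by simp
  have g: "gam r (int i) (int i - int a) = gam r (int i) (int (Suc a))"
    using gam_sym[of r "int i" "int (Suc a)"] by simp
  show ?thesis using lt by (simp add: E_basis_eqs E_R j s g, (simp add: fun_eq_iff algebra_simps)?)
qed

lemma endo_row_E_S:
  shows "mat_apply (endo_row r A B G D) (Ecoef r (k, i, Sb a)) = mat_apply (Ecoef r) (endo_row r A B G D (k, i, Sb a))"
  by (cases a) (simp_all add: E_basis_eqs, (simp add: fun_eq_iff algebra_simps)?)

lemma endo_row_E_R:
  assumes "i + 2 \<le> r" "a \<le> dual r i"
  shows "mat_apply (endo_row r A B G D) (Ecoef r (k, i, Rb a)) = mat_apply (Ecoef r) (endo_row r A B G D (k, i, Rb a))"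
proof (cases "a < dual r i")
  case True
  have s: "dual r i - a = Suc (dual r i - Suc a)" using True by simp
  have g: "int (Suc (dual r i - Suc a)) = int (dual r i) - int a" using True by simp
  show ?thesis using True by (simp add: E_basis_eqs E_R s g, (simp add: fun_eq_iff algebra_simps)?)
next
  case False
  then have a: "a = dual r i" using assms by simp
  show ?thesis using False by (simp add: E_basis_eqs E_Rtop a, (simp add: fun_eq_iff)?)
qed

lemma endo_row_E_L:
  assumes "i + 2 \<le> r"
  shows "mat_apply (endo_row r A B G D) (Ecoef r (k, i, Lb a)) = mat_apply (Ecoef r) (endo_row r A B G D (k, i, Lb a))"
proof (cases a)
  case 0
  then show ?thesis by (simp add: E_basis_eqs, (simp add: fun_eq_iff)?)
next
  case (Suc b)
  show ?thesis using Suc by (simp add: E_basis_eqs, (simp add: fun_eq_iff algebra_simps)?)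
qed

lemma endo_row_E_V:
  shows "mat_apply (endo_row r A B G D) (Ecoef r (k, i, Vb a)) = mat_apply (Ecoef r) (endo_row r A B G D (k, i, Vb a))"
  by (cases a) (simp_all add: E_basis_eqs, (simp add: fun_eq_iff algebra_simps)?)

lemma endo_row_F_H:
  assumes r: "i + 2 \<le> r" and a: "a < i"
  shows "mat_apply (endo_row r A B G D) (Fcoef r (k, i, Hb a)) = mat_apply (Fcoef r) (endo_row r A B G D (k, i, Hb a))"
proof -
  have r0: "r > 0" using r by simp
  have j: "dual r (dual r i) = i" using r by (rule dual_inv)
  have s: "i - a = Suc (i - Suc a)" using a by simp
  have g: "int (Suc (i - Suc a)) = int i - int a" using a by simp
  show ?thesis using a
    by (simp add: F_basis_eqs j s g deg_sign_succ[OF r0] deg_sign_pred[OF r0], (simp add: fun_eq_iff algebra_simps)?)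
qed

lemma endo_row_F_Hbot:
  assumes r: "i + 2 \<le> r"
  shows "mat_apply (endo_row r A B G D) (Fcoef r (k, i, Hb i)) = mat_apply (Fcoef r) (endo_row r A B G D (k, i, Hb i))"
proof -
  have r0: "r > 0" using r by simp
  have j: "dual r (dual r i) = i" using r by (rule dual_inv)
  show ?thesis
    by (simp add: F_basis_eqs j deg_sign_succ[OF r0] deg_sign_pred[OF r0], (simp add: fun_eq_iff algebra_simps)?)
qed

lemma endo_row_F_S:
  shows "mat_apply (endo_row r A B G D) (Fcoef r (k, i, Sb a)) = mat_apply (Fcoef r) (endo_row r A B G D (k, i, Sb a))"
  by (cases "a < i") (simp_all add: F_basis_eqs, (simp add: fun_eq_iff algebra_simps)?)

lemma endo_row_F_R:
  assumes r: "i + 2 \<le> r" and a: "a \<le> dual r i"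
  shows "mat_apply (endo_row r A B G D) (Fcoef r (k, i, Rb a)) = mat_apply (Fcoef r) (endo_row r A B G D (k, i, Rb a))"
proof (cases a)
  case 0
  have r0: "r > 0" using r by simp
  show ?thesis using 0 by (simp add: F_basis_eqs deg_sign_succ[OF r0] deg_sign_pred[OF r0], (simp add: fun_eq_iff algebra_simps)?)
next
  case (Suc b)
  have r0: "r > 0" using r by simp
  have lt: "dual r i - Suc b < dual r i" using Suc a by simp
  have s: "Suc (dual r i - Suc b) = dual r i - b" using Suc a by simp
  have g: "gam r (int (dual r i)) (int (dual r i) - int b) = gam r (int (dual r i)) (int (Suc b))"
    using gam_sym[of r "int (dual r i)" "int (Suc b)"] Suc a by simp
  show ?thesis using Suc lt
    by (simp add: F_basis_eqs s g deg_sign_succ[OF r0] deg_sign_pred[OF r0], (simp add: fun_eq_iff algebra_simps)?)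
qed

lemma endo_row_F_L:
  assumes r: "i + 2 \<le> r"
  shows "mat_apply (endo_row r A B G D) (Fcoef r (k, i, Lb a)) = mat_apply (Fcoef r) (endo_row r A B G D (k, i, Lb a))"
proof -
  have r0: "r > 0" using r by simp
  show ?thesis
    by (cases "a < dual r i") (simp_all add: F_basis_eqs deg_sign_succ[OF r0] deg_sign_pred[OF r0], (simp add: fun_eq_iff algebra_simps)?)
qed

lemma endo_row_F_V:
  shows "mat_apply (endo_row r A B G D) (Fcoef r (k, i, Vb a)) = mat_apply (Fcoef r) (endo_row r A B G D (k, i, Vb a))"
  by (cases "a + 1 < r") (simp_all add: F_basis_eqs, (simp add: fun_eq_iff algebra_simps)?)

lemma fin_supp_endo_row[simp]: "fin_supp (endo_row r A B G D x)"
proof -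
  obtain k i b where x: "x = (k, i, b)" by (cases x) auto
  show ?thesis unfolding x by (cases b) simp_all
qed

lemma endo_row_supp:
  assumes x: "x \<in> Pbasis r \<nu>" and y: "endo_row r A B G D x y \<noteq> 0"
  shows "y \<in> Pbasis r \<nu> \<and> wt r y = wt r x"
proof -
  obtain k i b where xx: "x = (k, i, b)" by (cases x) auto
  have sx: "summand r \<nu> k i" and vb: "valid_lab r i b" using x by (auto simp: xx Pbasis_iff_summand)
  show ?thesis
  proof (cases b)
    case (Hb a)
    then have ir: "i + 2 \<le> r" "a \<le> i" using vb by auto
    have dual_eq: "int (dual r i) = int r - 2 - int i" using ir by (intro int_dual) simp
    have s1: "summand r \<nu> (k + 1) (dual r i)" "summand r \<nu> (k - 1) (dual r i)"
      using summand_dual[OF ir(1) sx] by auto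
    show ?thesis using y Hb ir dual_eq sx s1
      by (auto simp: xx bvec_def Pbasis_iff_summand wt_def algebra_simps dual_def split: if_splits)
  next
    case (Sb a)
    then show ?thesis using y vb sx by (auto simp: xx bvec_def Pbasis_iff_summand split: if_splits)
  next
    case (Rb a)
    then have ir: "i + 2 \<le> r" "a \<le> dual r i" using vb by (auto simp: dual_def)
    have dual_eq: "int (dual r i) = int r - 2 - int i" using ir by (intro int_dual) simp
    have s1: "summand r \<nu> (k + 1) (dual r i)"
      using summand_dual[OF ir(1) sx] by auto
    show ?thesis using y Rb ir dual_eq sx s1
      by (auto simp: xx bvec_def Pbasis_iff_summand wt_def algebra_simps dual_def split: if_splits)
  next
    case (Lb a)
    then have ir: "i + 2 \<le> r" "a \<le> dual r i" using vb by (auto simp: dual_def)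
    have dual_eq: "int (dual r i) = int r - 2 - int i" using ir by (intro int_dual) simp
    have s1: "summand r \<nu> (k - 1) (dual r i)"
      using summand_dual[OF ir(1) sx] by auto
    show ?thesis using y Lb ir dual_eq sx s1
      by (auto simp: xx bvec_def Pbasis_iff_summand wt_def algebra_simps dual_def split: if_splits)
  next
    case (Vb a)
    then show ?thesis using y vb sx by (auto simp: xx bvec_def Pbasis_iff_summand split: if_splits)
  qed
qed

lemma endo_row_E_comm:
  assumes vb: "valid_lab r i b"
  shows "mat_apply (endo_row r A B G D) (Ecoef r (k, i, b)) = mat_apply (Ecoef r) (endo_row r A B G D (k, i, b))"
proof (cases b)
  case (Hb a)
  then show ?thesis using vb by (cases a) (simp_all add: endo_row_E_H0 endo_row_E_H)
qed (use vb in \<open>simp_all add: endo_row_E_S endo_row_E_R endo_row_E_L endo_row_E_V dual_def\<close>)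

lemma endo_row_F_comm:
  assumes vb: "valid_lab r i b"
  shows "mat_apply (endo_row r A B G D) (Fcoef r (k, i, b)) = mat_apply (Fcoef r) (endo_row r A B G D (k, i, b))"
proof (cases b)
  case (Hb a)
  then show ?thesis using vb endo_row_F_H[of i r a] endo_row_F_Hbot[of i r] by (cases "a < i") auto
qed (use vb in \<open>simp_all add: endo_row_F_S endo_row_F_R endo_row_F_L endo_row_F_V dual_def\<close>)

lemma endo_row_EndSet:
  assumes pA: "\<And>k i. A (k + shift_deg r) i = A k i" and pB: "\<And>k i. B (k + shift_deg r) i = B k i"
    and pG: "\<And>k i. G (k + shift_deg r) i = G k i" and pD: "\<And>k i. D (k + shift_deg r) i = D k i"
  shows "mat_endo r \<nu> (endo_row r A B G D) \<in> EndSet r \<nu>"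
proof (rule mat_endo_EndSet)
  fix x assume x: "x \<in> Pbasis r \<nu>"
  show "endo_row r A B G D x \<in> Pnu r \<nu>"
    unfolding Pnu_iff using endo_row_supp[OF x] by auto
  show "\<And>y. endo_row r A B G D x y \<noteq> 0 \<Longrightarrow> wt r y = wt r x"
    using endo_row_supp[OF x] by auto
  obtain k i b where xx: "x = (k, i, b)" by (cases x) auto
  have vb: "valid_lab r i b" using x by (simp add: xx Pbasis_iff_summand)
  show "mat_apply (endo_row r A B G D) (Ecoef r x) = mat_apply (Ecoef r) (endo_row r A B G D x)"
    unfolding xx by (rule endo_row_E_comm[OF vb])
  show "mat_apply (endo_row r A B G D) (Fcoef r x) = mat_apply (Fcoef r) (endo_row r A B G D x)"
    unfolding xx by (rule endo_row_F_comm[OF vb])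
  show "endo_row r A B G D (fst x + shift_deg r, snd x) = shiftP r (endo_row r A B G D x)"
    by (cases b) (auto simp: xx shiftP_alt bvec_def fun_eq_iff prod_eq_iff pA pB pG pD algebra_simps)
qed

section \<open>Generation by top vectors\<close>

definition top_idx :: "nat \<Rightarrow> int \<Rightarrow> nat \<Rightarrow> pidx" where
  "top_idx r k i = (if i + 2 \<le> r then (k, i, Hb 0) else (k, i, Vb 0))"

lemma End_agree_Ecoef:
  assumes f: "f \<in> EndSet r \<nu>" and g: "g \<in> EndSet r \<nu>" and x: "x \<in> Pbasis r \<nu>"
    and e: "f (bvec x) = g (bvec x)"
  shows "f (Ecoef r x) = g (Ecoef r x)"
  using End_E[OF f, of "bvec x"] End_E[OF g, of "bvec x"] x e by (simp add: opE_mat_apply)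

lemma End_agree_Fcoef:
  assumes f: "f \<in> EndSet r \<nu>" and g: "g \<in> EndSet r \<nu>" and x: "x \<in> Pbasis r \<nu>"
    and e: "f (bvec x) = g (bvec x)"
  shows "f (Fcoef r x) = g (Fcoef r x)"
  using End_F[OF f, of "bvec x"] End_F[OF g, of "bvec x"] x e by (simp add: opF_mat_apply)

lemma End_agree_smul:
  assumes f: "f \<in> EndSet r \<nu>" and g: "g \<in> EndSet r \<nu>" and p: "p \<in> Pbasis r \<nu>"
    and e: "f (\<lambda>y. c * bvec p y) = g (\<lambda>y. c * bvec p y)" and c: "c \<noteq> 0"
  shows "f (bvec p) = g (bvec p)"
proof -
  have "(\<lambda>y. c * f (bvec p) y) = (\<lambda>y. c * g (bvec p) y)"
    using e End_smul[OF f, of "bvec p" c] End_smul[OF g, of "bvec p" c] p by simp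
  then show ?thesis using c by (simp add: fun_eq_iff)
qed

lemma End_agree_add:
  assumes f: "f \<in> EndSet r \<nu>" and g: "g \<in> EndSet r \<nu>" and p: "p \<in> Pbasis r \<nu>" and q: "q \<in> Pbasis r \<nu>"
    and e: "f (\<lambda>y. c * bvec p y + bvec q y) = g (\<lambda>y. c * bvec p y + bvec q y)"
    and ep: "f (bvec p) = g (bvec p)"
  shows "f (bvec q) = g (bvec q)"
proof -
  have cp: "(\<lambda>y. c * bvec p y) \<in> Pnu r \<nu>" using p by (intro smul_Pnu) simp
  have "f (\<lambda>y. c * bvec p y + bvec q y) = (\<lambda>y. c * f (bvec p) y + f (bvec q) y)"
    using End_add[OF f cp, of "bvec q"] End_smul[OF f, of "bvec p" c] p q by simp
  moreover have "g (\<lambda>y. c * bvec p y + bvec q y) = (\<lambda>y. c * g (bvec p) y + g (bvec q) y)"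
    using End_add[OF g cp, of "bvec q"] End_smul[OF g, of "bvec p" c] p q by simp
  ultimately show ?thesis using e ep by (simp add: fun_eq_iff)
qed

lemma End_agree_H:
  assumes f: "f \<in> EndSet r \<nu>" and g: "g \<in> EndSet r \<nu>" and s: "summand r \<nu> k i"
    and ir: "i + 2 \<le> r" and top: "f (bvec (k, i, Hb 0)) = g (bvec (k, i, Hb 0))"
  shows "a \<le> i \<Longrightarrow> f (bvec (k, i, Hb a)) = g (bvec (k, i, Hb a))"
proof (induction a)
  case 0 show ?case by (fact top)
next
  case (Suc a)
  have P: "\<And>b. valid_lab r i b \<Longrightarrow> (k, i, b) \<in> Pbasis r \<nu>" using s by (simp add: Pbasis_iff_summand)
  have "f (Fcoef r (k, i, Hb a)) = g (Fcoef r (k, i, Hb a))"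
    by (rule End_agree_Fcoef[OF f g]) (use P ir Suc in auto)
  then show ?case using Suc ir by (intro End_agree_smul[OF f g P _ deg_sign_nz]) (auto simp: F_H)
qed

lemma End_agree_L:
  assumes f: "f \<in> EndSet r \<nu>" and g: "g \<in> EndSet r \<nu>" and s: "summand r \<nu> k i"
    and ir: "i + 2 \<le> r" and bot: "f (bvec (k, i, Hb i)) = g (bvec (k, i, Hb i))"
  shows "a \<le> dual r i \<Longrightarrow> f (bvec (k, i, Lb a)) = g (bvec (k, i, Lb a))"
proof (induction a)
  have P: "\<And>b. valid_lab r i b \<Longrightarrow> (k, i, b) \<in> Pbasis r \<nu>" using s by (simp add: Pbasis_iff_summand)
  {
    case 0
    have "f (Fcoef r (k, i, Hb i)) = g (Fcoef r (k, i, Hb i))"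
      by (rule End_agree_Fcoef[OF f g]) (use P ir bot in auto)
    then show ?case using ir by (intro End_agree_smul[OF f g P _ deg_sign_nz]) (auto simp: F_Hbot dual_def)
  next
    case (Suc a)
    have "f (Fcoef r (k, i, Lb a)) = g (Fcoef r (k, i, Lb a))"
      by (rule End_agree_Fcoef[OF f g]) (use P ir Suc in \<open>auto simp: dual_def\<close>)
    then show ?case using Suc ir by (intro End_agree_smul[OF f g P _ deg_sign_nz]) (auto simp: F_L dual_def)
  }
qed

lemma End_agree_R:
  assumes f: "f \<in> EndSet r \<nu>" and g: "g \<in> EndSet r \<nu>" and s: "summand r \<nu> k i"
    and ir: "i + 2 \<le> r" and top: "f (bvec (k, i, Hb 0)) = g (bvec (k, i, Hb 0))"
  shows "a \<le> dual r i \<Longrightarrow> f (bvec (k, i, Rb a)) = g (bvec (k, i, Rb a))"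
proof (induction a)
  have P: "\<And>b. valid_lab r i b \<Longrightarrow> (k, i, b) \<in> Pbasis r \<nu>" using s by (simp add: Pbasis_iff_summand)
  {
    case 0
    have "f (Ecoef r (k, i, Hb 0)) = g (Ecoef r (k, i, Hb 0))"
      by (rule End_agree_Ecoef[OF f g]) (use P ir top in auto)
    then show ?case by (simp add: E_H0)
  next
    case (Suc a)
    have "f (Ecoef r (k, i, Rb a)) = g (Ecoef r (k, i, Rb a))"
      by (rule End_agree_Ecoef[OF f g]) (use P ir Suc in \<open>auto simp: dual_def\<close>)
    then show ?case using Suc by (simp add: E_R)
  }
qed

lemma End_agree_S:
  assumes f: "f \<in> EndSet r \<nu>" and g: "g \<in> EndSet r \<nu>" and s: "summand r \<nu> k i"
    and ir: "i + 2 \<le> r" and H: "\<And>a. a \<le> i \<Longrightarrow> f (bvec (k, i, Hb a)) = g (bvec (k, i, Hb a))"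
    and L0: "f (bvec (k, i, Lb 0)) = g (bvec (k, i, Lb 0))" and a: "a \<le> i"
  shows "f (bvec (k, i, Sb a)) = g (bvec (k, i, Sb a))"
proof (cases "a < i")
  case True
  have P: "\<And>b. valid_lab r i b \<Longrightarrow> (k, i, b) \<in> Pbasis r \<nu>" using s by (simp add: Pbasis_iff_summand)
  then have p1: "(k, i, Hb a) \<in> Pbasis r \<nu>" and p2: "(k, i, Sb a) \<in> Pbasis r \<nu>"
    using ir True by auto
  have "f (Ecoef r (k, i, Hb (Suc a))) = g (Ecoef r (k, i, Hb (Suc a)))"
    by (rule End_agree_Ecoef[OF f g]) (use P ir H True in auto)
  then have "f (\<lambda>y. gam r (int i) (int (Suc a)) * bvec (k, i, Hb a) y + bvec (k, i, Sb a) y)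
      = g (\<lambda>y. gam r (int i) (int (Suc a)) * bvec (k, i, Hb a) y + bvec (k, i, Sb a) y)"
    by (simp add: E_H)
  then show ?thesis by (rule End_agree_add[OF f g p1 p2 _ H]) (use True in simp)
next
  case False
  then have "a = i" using a by simp
  have "f (Ecoef r (k, i, Lb 0)) = g (Ecoef r (k, i, Lb 0))"
    by (rule End_agree_Ecoef[OF f g _ L0]) (use s ir in \<open>simp add: Pbasis_iff_summand dual_def\<close>)
  then show ?thesis using \<open>a = i\<close> by (simp add: E_L0)
qed

lemma End_agree_V:
  assumes f: "f \<in> EndSet r \<nu>" and g: "g \<in> EndSet r \<nu>" and s: "summand r \<nu> k i"
    and ri: "r = i + 1" and top: "f (bvec (k, i, Vb 0)) = g (bvec (k, i, Vb 0))"
  shows "a < r \<Longrightarrow> f (bvec (k, i, Vb a)) = g (bvec (k, i, Vb a))"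
proof (induction a)
  case 0 show ?case by (fact top)
next
  case (Suc a)
  have P: "\<And>b. valid_lab r i b \<Longrightarrow> (k, i, b) \<in> Pbasis r \<nu>" using s by (simp add: Pbasis_iff_summand)
  have "f (Fcoef r (k, i, Vb a)) = g (Fcoef r (k, i, Vb a))"
    by (rule End_agree_Fcoef[OF f g]) (use P ri Suc in auto)
  then show ?case using Suc by (intro End_agree_smul[OF f g P _ deg_sign_nz]) (auto simp: F_V ri)
qed

text \<open>The top vectors \<open>h\<^sub>i\<close> (resp. \<open>v\<^sub>0\<close> for \<open>i = r - 1\<close>) generate each \<open>P\<^sub>i\<close> under \<open>E\<close> and \<open>F\<close>:
  \<open>F\<close> reaches the \<open>h\<close>- and \<open>L\<close>-strings, \<open>E\<close> the \<open>R\<close>-string, and \<open>E h\<^sub>a = \<gamma> h\<^sub>a\<^sub>-\<^sub>1 + s\<^sub>a\<^sub>-\<^sub>1\<close>, \<open>E L\<^sub>0 = s\<^sub>-\<^sub>i\<close> the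
  \<open>s\<close>-string.\<close>

lemma End_eq_tops:
  assumes f: "f \<in> EndSet r \<nu>" and g: "g \<in> EndSet r \<nu>"
    and t: "\<And>k i. summand r \<nu> k i \<Longrightarrow> f (bvec (top_idx r k i)) = g (bvec (top_idx r k i))"
  shows "f = g"
proof (rule End_eqI[OF f g])
  fix x assume x: "x \<in> Pbasis r \<nu>"
  obtain k i b where xx: "x = (k, i, b)" by (cases x) auto
  have s: "summand r \<nu> k i" and vb: "valid_lab r i b" using x by (auto simp: xx Pbasis_iff_summand)
  show "f (bvec x) = g (bvec x)"
  proof (cases "i + 2 \<le> r")
    case ir: True
    have top: "f (bvec (k, i, Hb 0)) = g (bvec (k, i, Hb 0))" using t[OF s] ir by (simp add: top_idx_def)
    note H = End_agree_H[OF f g s ir top]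
    note L = End_agree_L[OF f g s ir H[OF order_refl]]
    note R = End_agree_R[OF f g s ir top]
    note S = End_agree_S[OF f g s ir H L[OF le0]]
    show ?thesis using vb ir H S R L by (cases b) (auto simp: xx dual_def)
  next
    case ir: False
    then have ri: "r = i + 1" using s by (simp add: summand_def)
    have "f (bvec (k, i, Vb 0)) = g (bvec (k, i, Vb 0))" using t[OF s] ir by (simp add: top_idx_def)
    note V = End_agree_V[OF f g s ri this]
    show ?thesis using vb ir V by (cases b) (auto simp: xx)
  qed
qed

section \<open>The Casimir element\<close>

text \<open>The Casimir element acts as \<open>\<Omega> = E F + (K q\<^sup>-\<^sup>1 + K\<^sup>-\<^sup>1 q) / {1}\<^sup>2\<close>; \<open>cas_wt r m\<close> is the
  second summand at weight \<open>m\<close>.  Since \<open>\<Omega>\<close> is central, every \<open>\<overline>U\<close>-linear map commutes with it, and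
  on the summand \<open>(k, i)\<close> the operator \<open>\<Omega> - cas_val r k i\<close> is nilpotent.\<close>

definition cas_wt :: "nat \<Rightarrow> int \<Rightarrow> complex" where
  "cas_wt r m = (qe r (m - 1) + qe r (1 - m)) / (qbr r 1)\<^sup>2"

definition cas_P :: "nat \<Rightarrow> nat \<Rightarrow> complex" where
  "cas_P r i = (qe r (int i + 1) + qe r (- (int i + 1))) / (qbr r 1)\<^sup>2"

definition cas_val :: "nat \<Rightarrow> int \<Rightarrow> nat \<Rightarrow> complex" where
  "cas_val r k i = deg_sign r k * cas_P r i"

lemma cas_wt_shift: "r > 0 \<Longrightarrow> cas_wt r (k * int r + m) = deg_sign r k * cas_wt r m"
proof -
  assume r: "r > 0"
  have "qe r (k * int r + m - 1) = deg_sign r k * qe r (m - 1)"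
    using qe_add[of r "k * int r" "m - 1"] qe_kr[OF r] by (simp add: algebra_simps)
  moreover have "qe r (1 - (k * int r + m)) = deg_sign r k * qe r (1 - m)"
    using qe_add[of r "- (k * int r)" "1 - m"] by (simp add: deg_sign_def algebra_simps)
  ultimately show ?thesis by (simp add: cas_wt_def algebra_simps add_divide_distrib)
qed

lemma qint_prod_plus_cas_wt:
  assumes "r \<ge> 2"
  shows "qint r (a + 1) * qint r (i - a) + cas_wt r (i - 2 * a) = (qe r (i + 1) + qe r (- (i + 1))) / (qbr r 1)\<^sup>2"
proof -
  have args: "a + 1 + (i - a) = i + 1" "a + 1 - (i - a) = 1 - (i - 2 * a)" "i - a - (a + 1) = i - 2 * a - 1"
    "- (a + 1) - (i - a) = - (i + 1)" by simp_all
  have "qint r (a + 1) * qint r (i - a) + cas_wt r (i - 2 * a)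
     = (qe r (i + 1) - qe r (1 - (i - 2 * a)) - qe r (i - 2 * a - 1) + qe r (- (i + 1))) / (qbr r 1)\<^sup>2
       + (qe r (i - 2 * a - 1) + qe r (1 - (i - 2 * a))) / (qbr r 1)\<^sup>2"
    by (simp only: qint_prod[OF assms] cas_wt_def args)
  also have "\<dots> = (qe r (i + 1) + qe r (- (i + 1))) / (qbr r 1)\<^sup>2"
    by (simp only: add_divide_distrib[symmetric]) (simp add: algebra_simps)
  finally show ?thesis .
qed

lemma cas_wt_sym: "cas_wt r (2 - m) = cas_wt r m"
  by (simp add: cas_wt_def algebra_simps)

lemma cas_wt_wt: "r > 0 \<Longrightarrow> cas_wt r (wt r (k, i, b)) = deg_sign r k * cas_wt r (lab_wt r i b)"
  by (simp add: wt_def cas_wt_shift)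

lemma gam_eq_cas_diff:
  assumes "r \<ge> 2"
  shows "gam r (int i) (int (Suc a)) = cas_P r i - cas_wt r (int i - 2 * int a)"
proof -
  have e1: "int (Suc a) = int a + 1" and e2: "int i - (int a + 1) + 1 = int i - int a" by simp_all
  have "gam r (int i) (int (Suc a)) = qint r (int a + 1) * qint r (int i - int a)"
    unfolding gam_def e1 e2 ..
  then show ?thesis using qint_prod_plus_cas_wt[OF assms, of "int a" "int i"] unfolding cas_P_def by (simp add: eq_diff_eq)
qed

lemma qint_prod_Steinberg:
  assumes "r \<ge> 2" "a + 1 < r"
  shows "qint r (int (Suc a)) * qint r (int r - int (Suc a)) = cas_P r (r - 1) - cas_wt r (int r - 1 - 2 * int a)"
proof -
  have i: "int (r - 1) = int r - 1" using assms by simp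
  have e1: "int (Suc a) = int a + 1" and e2: "int r - (int a + 1) = int (r - 1) - int a"
    using i by simp_all
  have e3: "int (r - 1) - 2 * int a = int r - 1 - 2 * int a" using i by simp
  have "qint r (int (Suc a)) * qint r (int r - int (Suc a)) = qint r (int a + 1) * qint r (int (r - 1) - int a)"
    unfolding e1 e2 ..
  then show ?thesis using qint_prod_plus_cas_wt[OF assms(1), of "int a" "int (r - 1)"] unfolding cas_P_def e3 by (simp add: eq_diff_eq)
qed

lemma gam_dual_eq_cas_diff:
  assumes r2: "r \<ge> 2" and ir: "i + 2 \<le> r"
  shows "gam r (int (dual r i)) (int (Suc a)) = cas_wt r (int i + 2 + 2 * (int a + 1)) - cas_P r i"
proof -
  have r: "r > 0" using r2 by simp
  define j where "j = int (dual r i)"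
  have j: "j = int r - 2 - int i" using ir by (simp add: j_def int_dual)
  have sym_arg: "2 - (int i + 2 + 2 * (int a + 1)) = - 2 - int i - 2 * int a" by simp
  have "gam r j (int (Suc a)) = qint r (int a + 1) * qint r (j - int a)"
    by (simp add: gam_def add.commute)
  also have "\<dots> = (qe r (j + 1) + qe r (- (j + 1))) / (qbr r 1)\<^sup>2 - cas_wt r (j - 2 * int a)"
    using qint_prod_plus_cas_wt[OF r2, of "int a" j] by (simp add: eq_diff_eq)
  also have "qe r (j + 1) + qe r (- (j + 1)) = - (qe r (int i + 1) + qe r (- (int i + 1)))"
    using qe_plus_r[OF r, of "- 1 - int i"] qe_plus_r[OF r, of "int i + 1 - int r"] by (simp add: j algebra_simps)
  also have "cas_wt r (j - 2 * int a) = deg_sign r 1 * cas_wt r (- 2 - int i - 2 * int a)"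
    using cas_wt_shift[OF r, of 1 "- 2 - int i - 2 * int a"] by (simp add: j algebra_simps)
  also have "cas_wt r (- 2 - int i - 2 * int a) = cas_wt r (int i + 2 + 2 * (int a + 1))"
    using cas_wt_sym[of r "int i + 2 + 2 * (int a + 1)"] unfolding sym_arg .
  also have "deg_sign r 1 = -1"
    using deg_sign_succ[OF r, of 0] by (simp add: deg_sign_def)
  finally show ?thesis by (simp add: j_def cas_P_def cas_wt_sym minus_divide_left)
qed

lemma cas_P_eq_cas_wt_top: "cas_P r i = cas_wt r (int i + 2)"
proof -
  have a: "int i + 2 - 1 = int i + 1" "1 - (int i + 2) = - (int i + 1)" by simp_all
  show ?thesis unfolding cas_wt_def cas_P_def a ..
qed

lemma cas_P_eq_cas_wt_bot: "cas_P r i = cas_wt r (- int i)"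
proof -
  have a: "- int i - 1 = - (int i + 1)" "1 - - int i = int i + 1" by simp_all
  show ?thesis unfolding cas_wt_def cas_P_def a by (simp add: add.commute)
qed

lemma cas_P_eq_cas_wt_Lbot:
  assumes "r > 0"
  shows "cas_P r i = cas_wt r (int i + 2 - 2 * int r)"
proof -
  have "qe r (int i + 2 - 2 * int r - 1) = qe r (int i + 1)"
    using qe_plus_r[OF assms, of "int i + 1 - 2 * int r"] qe_plus_r[OF assms, of "int i + 1 - int r"]
    by (simp add: algebra_simps)
  moreover have "qe r (1 - (int i + 2 - 2 * int r)) = qe r (- (int i + 1))"
    using qe_plus_r[OF assms, of "- (int i + 1)"] qe_plus_r[OF assms, of "- (int i + 1) + int r"]
    by (simp add: algebra_simps)
  ultimately show ?thesis by (simp add: cas_P_def cas_wt_def)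
qed

definition cas_row :: "nat \<Rightarrow> complex \<Rightarrow> pidx \<Rightarrow> pvec" where
  "cas_row r c x = (\<lambda>y. mat_apply (Ecoef r) (Fcoef r x) y + (cas_wt r (wt r x) - c) * bvec x y)"

lemma cas_row_H:
  assumes r2: "r \<ge> 2" and a: "a < i"
  shows "cas_row r (cas_val r k i) (k, i, Hb a) = (\<lambda>y. deg_sign r k * bvec (k, i, Sb a) y)"
proof -
  have r0: "r > 0" using r2 by simp
  have g: "gam r (int i) (int (Suc a)) = cas_P r i - cas_wt r (int i - 2 * int a)" by (rule gam_eq_cas_diff[OF r2])
  have "cas_row r (cas_val r k i) (k, i, Hb a) = (\<lambda>y. deg_sign r k * (gam r (int i) (int (Suc a)) * bvec (k, i, Hb a) y + bvec (k, i, Sb a) y)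
     + (deg_sign r k * cas_wt r (int i - 2 * int a) - deg_sign r k * cas_P r i) * bvec (k, i, Hb a) y)"
    using a by (simp add: cas_row_def F_H E_H cas_wt_wt[OF r0] cas_val_def)
  also have "\<dots> = (\<lambda>y. deg_sign r k * bvec (k, i, Sb a) y)"
    unfolding g by (simp add: fun_eq_iff algebra_simps)
  finally show ?thesis .
qed

lemma cas_row_Hbot:
  assumes r2: "r \<ge> 2"
  shows "cas_row r (cas_val r k i) (k, i, Hb i) = (\<lambda>y. deg_sign r k * bvec (k, i, Sb i) y)"
proof -
  have r0: "r > 0" using r2 by simp
  have e: "int i - 2 * int i = - int i" by simp
  have "cas_row r (cas_val r k i) (k, i, Hb i) = (\<lambda>y. deg_sign r k * bvec (k, i, Sb i) y
     + (deg_sign r k * cas_wt r (int i - 2 * int i) - deg_sign r k * cas_P r i) * bvec (k, i, Hb i) y)"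
    by (simp add: cas_row_def F_Hbot E_L0 cas_wt_wt[OF r0] cas_val_def)
  also have "\<dots> = (\<lambda>y. deg_sign r k * bvec (k, i, Sb i) y)"
    unfolding e cas_P_eq_cas_wt_bot[symmetric] by simp
  finally show ?thesis .
qed

lemma cas_row_S:
  assumes r2: "r \<ge> 2" and a: "a < i"
  shows "cas_row r (cas_val r k i) (k, i, Sb a) = (\<lambda>y. 0)"
proof -
  have r0: "r > 0" using r2 by simp
  have g: "gam r (int i) (int (Suc a)) = cas_P r i - cas_wt r (int i - 2 * int a)" by (rule gam_eq_cas_diff[OF r2])
  have "cas_row r (cas_val r k i) (k, i, Sb a) = (\<lambda>y. deg_sign r k * (gam r (int i) (int (Suc a)) * bvec (k, i, Sb a) y)
     + (deg_sign r k * cas_wt r (int i - 2 * int a) - deg_sign r k * cas_P r i) * bvec (k, i, Sb a) y)"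
    using a by (simp add: cas_row_def F_S E_S cas_wt_wt[OF r0] cas_val_def)
  also have "\<dots> = (\<lambda>y. 0)"
    unfolding g by (simp add: fun_eq_iff algebra_simps)
  finally show ?thesis .
qed

lemma cas_row_Sbot:
  assumes r2: "r \<ge> 2"
  shows "cas_row r (cas_val r k i) (k, i, Sb i) = (\<lambda>y. 0)"
proof -
  have r0: "r > 0" using r2 by simp
  have e: "int i - 2 * int i = - int i" by simp
  have "cas_row r (cas_val r k i) (k, i, Sb i) = (\<lambda>y. (deg_sign r k * cas_wt r (int i - 2 * int i) - deg_sign r k * cas_P r i) * bvec (k, i, Sb i) y)"
    by (simp add: cas_row_def F_Sbot cas_wt_wt[OF r0] cas_val_def)
  also have "\<dots> = (\<lambda>y. 0)"
    unfolding e cas_P_eq_cas_wt_bot[symmetric] by simp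
  finally show ?thesis .
qed

lemma cas_row_R0:
  assumes r2: "r \<ge> 2" and ir: "i + 2 \<le> r"
  shows "cas_row r (cas_val r k i) (k, i, Rb 0) = (\<lambda>y. 0)"
proof -
  have r0: "r > 0" using r2 by simp
  have e: "int r - (int r - 2 - int i) + 2 * int 0 = int i + 2" by simp
  have "cas_row r (cas_val r k i) (k, i, Rb 0) = (\<lambda>y. (deg_sign r k * cas_wt r (int r - (int r - 2 - int i) + 2 * int 0) - deg_sign r k * cas_P r i) * bvec (k, i, Rb 0) y)"
    by (simp add: cas_row_def F_R0 E_S0 cas_wt_wt[OF r0] cas_val_def del: of_nat_0)
  also have "\<dots> = (\<lambda>y. 0)"
    unfolding e cas_P_eq_cas_wt_top[symmetric] by simp
  finally show ?thesis .
qed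

lemma cas_row_R:
  assumes r2: "r \<ge> 2" and ir: "i + 2 \<le> r" and a: "a < dual r i"
  shows "cas_row r (cas_val r k i) (k, i, Rb (Suc a)) = (\<lambda>y. 0)"
proof -
  have r0: "r > 0" using r2 by simp
  have g: "gam r (int (dual r i)) (int (Suc a)) = cas_wt r (int i + 2 + 2 * (int a + 1)) - cas_P r i"
    by (rule gam_dual_eq_cas_diff[OF r2 ir])
  have e: "int r - (int r - 2 - int i) + 2 * int (Suc a) = int i + 2 + 2 * (int a + 1)" by simp
  have "cas_row r (cas_val r k i) (k, i, Rb (Suc a)) = (\<lambda>y. (deg_sign r k * (- gam r (int (dual r i)) (int (Suc a)))) * bvec (k, i, Rb (Suc a)) y
     + (deg_sign r k * cas_wt r (int r - (int r - 2 - int i) + 2 * int (Suc a)) - deg_sign r k * cas_P r i) * bvec (k, i, Rb (Suc a)) y)"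
    using a by (simp add: cas_row_def F_R E_R cas_wt_wt[OF r0] cas_val_def del: of_nat_Suc)
  also have "\<dots> = (\<lambda>y. 0)"
    unfolding e g by (simp add: fun_eq_iff algebra_simps)
  finally show ?thesis .
qed

lemma cas_row_L:
  assumes r2: "r \<ge> 2" and ir: "i + 2 \<le> r" and a: "a < dual r i"
  shows "cas_row r (cas_val r k i) (k, i, Lb a) = (\<lambda>y. 0)"
proof -
  have r0: "r > 0" using r2 by simp
  have g: "gam r (int (dual r i)) (int (Suc a)) = cas_wt r (int i + 2 + 2 * (int a + 1)) - cas_P r i"
    by (rule gam_dual_eq_cas_diff[OF r2 ir])
  have e: "int r - 2 - int i - int r - 2 * int a = 2 - (int i + 2 + 2 * (int a + 1))" by simp
  have "cas_row r (cas_val r k i) (k, i, Lb a) = (\<lambda>y. deg_sign r k * ((- gam r (int (dual r i)) (int (Suc a))) * bvec (k, i, Lb a) y)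
     + (deg_sign r k * cas_wt r (int r - 2 - int i - int r - 2 * int a) - deg_sign r k * cas_P r i) * bvec (k, i, Lb a) y)"
    using a by (simp add: cas_row_def F_L E_L cas_wt_wt[OF r0] cas_val_def del: of_nat_Suc)
  also have "\<dots> = (\<lambda>y. 0)"
    unfolding e g cas_wt_sym by (simp add: fun_eq_iff algebra_simps)
  finally show ?thesis .
qed

lemma cas_row_Lbot:
  assumes r2: "r \<ge> 2" and ir: "i + 2 \<le> r"
  shows "cas_row r (cas_val r k i) (k, i, Lb (dual r i)) = (\<lambda>y. 0)"
proof -
  have r0: "r > 0" using r2 by simp
  have dual_eq: "int (dual r i) = int r - 2 - int i" using ir by (rule int_dual)
  have e: "int r - 2 - int i - int r - 2 * int (dual r i) = int i + 2 - 2 * int r" using dual_eq by simp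
  have "cas_row r (cas_val r k i) (k, i, Lb (dual r i)) = (\<lambda>y. (deg_sign r k * cas_wt r (int r - 2 - int i - int r - 2 * int (dual r i)) - deg_sign r k * cas_P r i) * bvec (k, i, Lb (dual r i)) y)"
    by (simp add: cas_row_def F_Lbot cas_wt_wt[OF r0] cas_val_def)
  also have "\<dots> = (\<lambda>y. 0)"
    unfolding e cas_P_eq_cas_wt_Lbot[OF r0, symmetric] by simp
  finally show ?thesis .
qed

lemma cas_row_V:
  assumes r2: "r \<ge> 2" and a: "a + 1 < r" and i: "i = r - 1"
  shows "cas_row r (cas_val r k i) (k, i, Vb a) = (\<lambda>y. 0)"
proof -
  have r0: "r > 0" using r2 by simp
  have g: "qint r (int (Suc a)) * qint r (int r - int (Suc a)) = cas_P r (r - 1) - cas_wt r (int r - 1 - 2 * int a)"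
    by (rule qint_prod_Steinberg[OF r2 a])
  have "cas_row r (cas_val r k i) (k, i, Vb a) = (\<lambda>y. deg_sign r k * ((qint r (int (Suc a)) * qint r (int r - int (Suc a))) * bvec (k, i, Vb a) y)
     + (deg_sign r k * cas_wt r (int r - 1 - 2 * int a) - deg_sign r k * cas_P r i) * bvec (k, i, Vb a) y)"
    using a by (simp add: cas_row_def F_V E_V cas_wt_wt[OF r0] cas_val_def del: of_nat_Suc)
  also have "\<dots> = (\<lambda>y. 0)"
    unfolding g i by (simp add: fun_eq_iff algebra_simps)
  finally show ?thesis .
qed

lemma cas_row_Vbot:
  assumes r2: "r \<ge> 2" and i: "i = r - 1"
  shows "cas_row r (cas_val r k i) (k, i, Vb (r - 1)) = (\<lambda>y. 0)"
proof -
  have r0: "r > 0" using r2 by simp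
  have e: "int r - 1 - 2 * int (r - 1) = - int (r - 1)" using r0 by simp
  have "cas_row r (cas_val r k i) (k, i, Vb (r - 1)) = (\<lambda>y. (deg_sign r k * cas_wt r (int r - 1 - 2 * int (r - 1)) - deg_sign r k * cas_P r i) * bvec (k, i, Vb (r - 1)) y)"
    using r0 by (simp add: cas_row_def F_Vbot cas_wt_wt[OF r0] cas_val_def)
  also have "\<dots> = (\<lambda>y. 0)"
    unfolding e i cas_P_eq_cas_wt_bot[symmetric] by simp
  finally show ?thesis .
qed

definition cas_nil :: "nat \<Rightarrow> pidx \<Rightarrow> pvec" where
  "cas_nil r x = (case snd (snd x) of Hb a \<Rightarrow> (\<lambda>y. deg_sign r (fst x) * bvec (fst x, fst (snd x), Sb a) y) | _ \<Rightarrow> (\<lambda>y. 0))"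

lemma cas_row_basis:
  assumes r2: "r \<ge> 2" and x: "(k, i, b) \<in> Pbasis r \<nu>"
  shows "cas_row r (cas_val r k i) (k, i, b) = cas_nil r (k, i, b)"
proof -
  have vb: "valid_lab r i b" and ir: "i < r" using x by (auto simp: Pbasis_iff_summand summand_def)
  show ?thesis
  proof (cases b)
    case (Hb a)
    then show ?thesis using vb cas_row_H[OF r2, of a i k] cas_row_Hbot[OF r2, of k i]
      by (cases "a < i") (auto simp: cas_nil_def)
  next
    case (Sb a)
    then show ?thesis using vb cas_row_S[OF r2, of a i k] cas_row_Sbot[OF r2, of k i]
      by (cases "a < i") (auto simp: cas_nil_def)
  next
    case (Rb a)
    then have ir2: "i + 2 \<le> r" "a \<le> dual r i" using vb by (auto simp: dual_def)
    show ?thesis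
    proof (cases a)
      case 0 then show ?thesis using Rb cas_row_R0[OF r2 ir2(1)] by (simp add: cas_nil_def)
    next
      case (Suc a') then show ?thesis using Rb ir2 cas_row_R[OF r2 ir2(1), of a' k] by (simp add: cas_nil_def)
    qed
  next
    case (Lb a)
    then have ir2: "i + 2 \<le> r" "a \<le> dual r i" using vb by (auto simp: dual_def)
    show ?thesis
    proof (cases "a < dual r i")
      case True then show ?thesis using Lb cas_row_L[OF r2 ir2(1) True] by (simp add: cas_nil_def)
    next
      case False then have "a = dual r i" using ir2 by simp
      then show ?thesis using Lb cas_row_Lbot[OF r2 ir2(1)] by (simp add: cas_nil_def)
    qed
  next
    case (Vb a)
    then have i1: "i = r - 1" "a < r" using vb by auto
    show ?thesis
    proof (cases "a + 1 < r")
      case True then show ?thesis using Vb cas_row_V[OF r2 True i1(1)] by (simp add: cas_nil_def)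
    next
      case False then have "a = r - 1" using i1 by simp
      then show ?thesis using Vb cas_row_Vbot[OF r2 i1(1)] by (simp add: cas_nil_def)
    qed
  qed
qed

lemma fin_supp_cas_row[simp]: "fin_supp (cas_row r c x)"
  unfolding cas_row_def by (intro fin_supp_add fin_supp_smul fin_supp_mat_apply) auto

lemma cas_row_same_summand:
  assumes "cas_row r c x y \<noteq> 0"
  shows "fst y = fst x \<and> fst (snd y) = fst (snd x)"
proof (cases "bvec x y = 0")
  case True
  then have "mat_apply (Ecoef r) (Fcoef r x) y \<noteq> 0" using assms by (simp add: cas_row_def)
  then obtain z where "Fcoef r x z \<noteq> 0" "Ecoef r z y \<noteq> 0" by (rule mat_apply_supp)
  then show ?thesis by (auto simp: Ecoef_def Fcoef_def split: if_splits)
next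
  case False then show ?thesis by (simp add: bvec_def split: if_splits)
qed

lemma cas_row_nilpotent:
  assumes r2: "r \<ge> 2" and x: "(k, i, b) \<in> Pbasis r \<nu>"
  shows "mat_apply (cas_row r (cas_val r k i)) (cas_row r (cas_val r k i) (k, i, b)) = (\<lambda>y. 0)"
proof (cases b)
  case (Hb a)
  then have a: "a \<le> i" using x by (simp add: Pbasis_iff_summand)
  have "(k, i, Sb a) \<in> Pbasis r \<nu>" using x a by (simp add: Pbasis_iff_summand Hb)
  then have "cas_row r (cas_val r k i) (k, i, Sb a) = (\<lambda>y. 0)"
    using cas_row_basis[OF r2] by (simp add: cas_nil_def)
  then show ?thesis using cas_row_basis[OF r2 x] Hb by (simp add: cas_nil_def)
qed (use cas_row_basis[OF r2 x] in \<open>simp_all add: cas_nil_def\<close>)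

definition cas_op :: "nat \<Rightarrow> complex \<Rightarrow> pvec \<Rightarrow> pvec" where
  "cas_op r c = mat_apply (cas_row r c)"

definition restrict :: "int \<Rightarrow> nat \<Rightarrow> pvec \<Rightarrow> pvec" where
  "restrict k i v = (\<lambda>y. if fst y = k \<and> fst (snd y) = i then v y else 0)"

lemma mat_apply_restrict:
  assumes M: "\<And>x y. M x y \<noteq> 0 \<Longrightarrow> fst y = fst x \<and> fst (snd y) = fst (snd x)" and v: "fin_supp v"
  shows "mat_apply M (restrict k i v) = restrict k i (mat_apply M v)"
proof
  fix y
  have f: "finite {x. v x \<noteq> 0}" using v by (simp add: fin_supp_def)
  have "mat_apply M (restrict k i v) y = (\<Sum>x\<in>{x. v x \<noteq> 0}. restrict k i v x * M x y)"
    by (rule mat_apply_sum[OF f]) (auto simp: restrict_def)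
  also have "\<dots> = (\<Sum>x\<in>{x. v x \<noteq> 0}. (if fst y = k \<and> fst (snd y) = i then v x * M x y else 0))"
  proof (rule sum.cong[OF refl])
    fix x
    show "restrict k i v x * M x y = (if fst y = k \<and> fst (snd y) = i then v x * M x y else 0)"
      using M[of x y] by (cases "M x y = 0") (auto simp: restrict_def)
  qed
  also have "\<dots> = restrict k i (mat_apply M v) y" by (auto simp: restrict_def mat_apply_def)
  finally show "mat_apply M (restrict k i v) y = restrict k i (mat_apply M v) y" .
qed

lemma fin_supp_restrict[simp]: "fin_supp v \<Longrightarrow> fin_supp (restrict k i v)"
  unfolding fin_supp_def restrict_def by (rule finite_subset[of _ "{x. v x \<noteq> 0}"]) auto

lemma restrict_Pnu: "v \<in> Pnu r \<nu> \<Longrightarrow> restrict k i v \<in> Pnu r \<nu>"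
  unfolding Pnu_iff
proof (intro conjI allI impI)
  assume v: "fin_supp v \<and> (\<forall>x. v x \<noteq> 0 \<longrightarrow> x \<in> Pbasis r \<nu>)"
  then show "fin_supp (restrict k i v)" by simp
  fix x assume "restrict k i v x \<noteq> 0"
  then have "v x \<noteq> 0" by (simp add: restrict_def split: if_splits)
  then show "x \<in> Pbasis r \<nu>" using v by blast
qed

lemma mat_apply_add_rows: "mat_apply (\<lambda>x y. M x y + N x y) v = (\<lambda>y. mat_apply M v y + mat_apply N v y)"
  by (simp add: mat_apply_def fun_eq_iff distrib_left sum.distrib)

lemma mat_apply_diag:
  assumes "fin_supp v"
  shows "mat_apply (\<lambda>x y. g x * bvec x y) v = (\<lambda>y. g y * v y)"
proof
  fix y
  show "mat_apply (\<lambda>x y. g x * bvec x y) v y = g y * v y"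
  proof (cases "v y = 0")
    case True then show ?thesis by (auto simp: mat_apply_def bvec_def intro!: sum.neutral)
  next
    case False
    have f: "finite {x. v x \<noteq> 0}" using assms by (simp add: fin_supp_def)
    have "mat_apply (\<lambda>x y. g x * bvec x y) v y = (\<Sum>x\<in>{y}. v x * (g x * bvec x y))"
      unfolding mat_apply_def by (rule sum.mono_neutral_right) (use f False in \<open>auto simp: bvec_def\<close>)
    then show ?thesis by (simp add: bvec_def)
  qed
qed

lemma cas_op_alt:
  assumes "fin_supp v"
  shows "cas_op r c v = (\<lambda>y. opE r (opF r v) y + wt_diag r (\<lambda>m. cas_wt r m - c) v y)"
proof -
  have "cas_row r c = (\<lambda>x y. mat_apply (Ecoef r) (Fcoef r x) y + (cas_wt r (wt r x) - c) * bvec x y)"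
    by (simp add: fun_eq_iff cas_row_def)
  then have "cas_op r c v = mat_apply (\<lambda>x y. mat_apply (Ecoef r) (Fcoef r x) y + (cas_wt r (wt r x) - c) * bvec x y) v"
    by (simp add: cas_op_def)
  also have "\<dots> = (\<lambda>y. mat_apply (\<lambda>x. mat_apply (Ecoef r) (Fcoef r x)) v y + mat_apply (\<lambda>x y. (cas_wt r (wt r x) - c) * bvec x y) v y)"
    by (rule mat_apply_add_rows)
  also have "\<dots> = (\<lambda>y. opE r (opF r v) y + wt_diag r (\<lambda>m. cas_wt r m - c) v y)"
    using assms by (simp add: opE_mat_apply opF_mat_apply mat_apply_comp mat_apply_diag[OF assms] wt_diag_def)
  finally show ?thesis .
qed

lemma cas_op_Pnu: "v \<in> Pnu r \<nu> \<Longrightarrow> cas_op r c v \<in> Pnu r \<nu>"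
  by (simp add: cas_op_alt Pnu_fin_supp add_Pnu opE_Pnu opF_Pnu wt_diag_Pnu)

lemma End_wt_diag:
  assumes f: "f \<in> EndSet r \<nu>" and v: "v \<in> Pnu r \<nu>"
  shows "f (wt_diag r g v) = wt_diag r g (f v)"
proof -
  have "f (wt_diag r g v) = mat_apply (\<lambda>x. f (bvec x)) (wt_diag r g v)" by (rule End_mat_apply[OF f wt_diag_Pnu[OF v]])
  also have "\<dots> = wt_diag r g (mat_apply (\<lambda>x. f (bvec x)) v)"
    by (rule mat_apply_wt_diag[OF v]) (use End_wt[OF f] in auto)
  also have "\<dots> = wt_diag r g (f v)" using End_mat_apply[OF f v] by simp
  finally show ?thesis .
qed

lemma End_cas_op:
  assumes f: "f \<in> EndSet r \<nu>" and v: "v \<in> Pnu r \<nu>"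
  shows "f (cas_op r c v) = cas_op r c (f v)"
proof -
  have a: "opE r (opF r v) \<in> Pnu r \<nu>" using v by (simp add: opE_Pnu opF_Pnu)
  have b: "wt_diag r (\<lambda>m. cas_wt r m - c) v \<in> Pnu r \<nu>" using v by (simp add: wt_diag_Pnu)
  have "f (cas_op r c v) = (\<lambda>y. f (opE r (opF r v)) y + f (wt_diag r (\<lambda>m. cas_wt r m - c) v) y)"
    using End_add[OF f a b] by (simp add: cas_op_alt Pnu_fin_supp[OF v])
  also have "\<dots> = cas_op r c (f v)"
    using End_E[OF f opF_Pnu[OF v]] End_F[OF f v] End_wt_diag[OF f v] End_Pnu[OF f v]
    by (simp add: cas_op_alt Pnu_fin_supp)
  finally show ?thesis .
qed

lemma cas_op_sq_zero:
  assumes r2: "r \<ge> 2" and u: "u \<in> Pnu r \<nu>" and s: "\<And>x. u x \<noteq> 0 \<Longrightarrow> fst x = k \<and> fst (snd x) = i"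
  shows "cas_op r (cas_val r k i) (cas_op r (cas_val r k i) u) = (\<lambda>y. 0)"
proof -
  have fu: "fin_supp u" using u by (simp add: Pnu_fin_supp)
  have "cas_op r (cas_val r k i) (cas_op r (cas_val r k i) u) = mat_apply (\<lambda>x. mat_apply (cas_row r (cas_val r k i)) (cas_row r (cas_val r k i) x)) u"
    unfolding cas_op_def by (rule mat_apply_comp[OF fu]) simp
  also have "\<dots> = mat_apply (\<lambda>x. (\<lambda>y. 0)) u"
  proof (rule mat_apply_cong)
    fix x assume ux: "u x \<noteq> 0"
    then have xP: "x \<in> Pbasis r \<nu>" using u by (simp add: Pnu_iff)
    obtain b where xx: "x = (k, i, b)" using s[OF ux] by (cases x) auto
    show "mat_apply (cas_row r (cas_val r k i)) (cas_row r (cas_val r k i) x) = (\<lambda>y. 0)"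
      using cas_row_nilpotent[OF r2, of k i b] xP by (simp add: xx)
  qed
  also have "\<dots> = (\<lambda>y. 0)" by (simp add: mat_apply_def)
  finally show ?thesis .
qed

lemma cas_op_const_shift:
  assumes "fin_supp v"
  shows "cas_op r c v = (\<lambda>y. cas_op r c' v y + (c' - c) * v y)"
proof -
  have "cas_row r c = (\<lambda>x y. cas_row r c' x y + (c' - c) * bvec x y)"
    by (simp add: cas_row_def fun_eq_iff algebra_simps)
  then have "cas_op r c v = mat_apply (\<lambda>x y. cas_row r c' x y + (c' - c) * bvec x y) v" by (simp add: cas_op_def)
  also have "\<dots> = (\<lambda>y. cas_op r c' v y + (c' - c) * v y)"
    by (simp add: mat_apply_add_rows mat_apply_diag[OF assms] cas_op_def)
  finally show ?thesis .
qed

lemma cas_op_sq_zero_imp_zero: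
  assumes r2: "r \<ge> 2" and u: "u \<in> Pnu r \<nu>" and s: "\<And>x. u x \<noteq> 0 \<Longrightarrow> fst x = k \<and> fst (snd x) = i"
    and n: "cas_op r c (cas_op r c u) = (\<lambda>y. 0)" and c: "c \<noteq> cas_val r k i"
  shows "u = (\<lambda>y. 0)"
proof -
  define c' where "c' = cas_val r k i"
  define d where "d = c' - c"
  have d: "d \<noteq> 0" using c by (simp add: d_def c'_def)
  have fu: "fin_supp u" using u by (simp add: Pnu_fin_supp)
  have fN: "\<And>v. fin_supp v \<Longrightarrow> fin_supp (cas_op r c' v)" unfolding cas_op_def by (intro fin_supp_mat_apply) auto
  have h0: "cas_op r c' (cas_op r c' u) = (\<lambda>y. 0)" unfolding c'_def by (rule cas_op_sq_zero[OF r2 u s])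
  have p: "cas_op r c u = (\<lambda>y. cas_op r c' u y + d * u y)" unfolding d_def by (rule cas_op_const_shift[OF fu])
  have fp: "fin_supp (cas_op r c u)" unfolding cas_op_def by (intro fin_supp_mat_apply fu) auto
  have "cas_op r c (cas_op r c u) = (\<lambda>y. cas_op r c' (cas_op r c u) y + d * cas_op r c u y)"
    unfolding d_def by (rule cas_op_const_shift[OF fp])
  also have "cas_op r c' (cas_op r c u) = (\<lambda>y. cas_op r c' (cas_op r c' u) y + d * cas_op r c' u y)"
    unfolding p using fu fN[OF fu] by (simp add: cas_op_def fin_supp_mat_apply)
  finally have "(\<lambda>y. 0) = (\<lambda>y. (cas_op r c' (cas_op r c' u) y + d * cas_op r c' u y) + d * (cas_op r c' u y + d * u y))"
    using n p by simp
  then have e: "\<And>y. 0 = 2 * d * cas_op r c' u y + d * d * u y"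
    using h0 by (simp add: fun_eq_iff algebra_simps)
  have e2: "cas_op r c' u = (\<lambda>y. (- d / 2) * u y)"
  proof
    fix y
    have "d * (2 * cas_op r c' u y + d * u y) = 0" using e[of y] by (simp add: algebra_simps)
    then have "2 * cas_op r c' u y + d * u y = 0" using d by simp
    then show "cas_op r c' u y = (- d / 2) * u y" by (simp add: field_simps add_eq_0_iff2)
  qed
  have l: "cas_op r c' (\<lambda>y. (- d / 2) * u y) = (\<lambda>y. (- d / 2) * cas_op r c' u y)"
    unfolding cas_op_def by (rule mat_apply_smul[OF fu])
  have "(\<lambda>y. 0) = cas_op r c' (cas_op r c' u)" using h0 by simp
  also have "\<dots> = cas_op r c' (\<lambda>y. (- d / 2) * u y)" using e2 by (rule arg_cong)
  also have "\<dots> = (\<lambda>y. (- d / 2) * cas_op r c' u y)" by (rule l)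
  also have "\<dots> = (\<lambda>y. (- d / 2) * ((- d / 2) * u y))" by (simp add: e2)
  finally have "(\<lambda>y. 0) = (\<lambda>y. (- d / 2) * ((- d / 2) * u y))" .
  then show ?thesis using d by (simp add: fun_eq_iff)
qed

lemma End_preserves_cas_val:
  assumes r2: "r \<ge> 2" and f: "f \<in> EndSet r \<nu>" and t: "(k, i, b) \<in> Pbasis r \<nu>"
    and y: "f (bvec (k, i, b)) (k', i', b') \<noteq> 0"
  shows "cas_val r k' i' = cas_val r k i"
proof (rule ccontr)
  assume ne: "cas_val r k' i' \<noteq> cas_val r k i"
  define c where "c = cas_val r k i"
  define w where "w = f (bvec (k, i, b))"
  have et: "bvec (k, i, b) \<in> Pnu r \<nu>" using t by simp
  have w: "w \<in> Pnu r \<nu>" unfolding w_def by (rule End_Pnu[OF f et])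
  have n0: "cas_op r c (cas_op r c (bvec (k, i, b))) = (\<lambda>y. 0)"
    unfolding c_def by (rule cas_op_sq_zero[OF r2 et]) (simp add: bvec_def split: if_splits)
  have "cas_op r c (cas_op r c w) = f (cas_op r c (cas_op r c (bvec (k, i, b))))"
    unfolding w_def using End_cas_op[OF f et] End_cas_op[OF f cas_op_Pnu[OF et]] by simp
  also have "\<dots> = (\<lambda>y. 0)" unfolding n0 by (rule End_zero[OF f])
  finally have nw: "cas_op r c (cas_op r c w) = (\<lambda>y. 0)" .
  define u where "u = restrict k' i' w"
  have u: "u \<in> Pnu r \<nu>" unfolding u_def by (rule restrict_Pnu[OF w])
  have fw: "fin_supp w" using w by (simp add: Pnu_fin_supp)
  have fNw: "fin_supp (cas_op r c w)" unfolding cas_op_def by (intro fin_supp_mat_apply fw) auto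
  have "cas_op r c (cas_op r c u) = restrict k' i' (cas_op r c (cas_op r c w))"
    unfolding u_def cas_op_def using mat_apply_restrict[OF cas_row_same_summand fw] mat_apply_restrict[OF cas_row_same_summand fNw[unfolded cas_op_def]]
    by simp
  then have nu: "cas_op r c (cas_op r c u) = (\<lambda>y. 0)" by (simp add: nw restrict_def)
  have "u = (\<lambda>y. 0)"
    by (rule cas_op_sq_zero_imp_zero[OF r2 u _ nu]) (use ne c_def in \<open>auto simp: u_def restrict_def split: if_splits\<close>)
  then have "u (k', i', b') = 0" by simp
  then show False using y by (simp add: u_def restrict_def w_def)
qed

lemma cas_P_real: "cas_P r i = of_real (2 * cos (pi * (real i + 1) / real r)) / (qbr r 1)\<^sup>2"
  using qe_plus_neg[of r "int i + 1"] by (simp add: cas_P_def)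

lemma cas_val_eq:
  assumes r2: "r \<ge> 2" and i: "i < r" and i': "i' < r" and e: "cas_val r k' i' = cas_val r k i"
  shows "(i' = i \<and> even (k' - k)) \<or> (i + i' + 2 = r \<and> odd (k' - k))"
proof -
  have r: "r > 0" using r2 by simp
  have Q: "(qbr r 1)\<^sup>2 \<noteq> 0" using qbr1_nz[OF r2] by simp
  have sgnz: "deg_sign r k \<noteq> 0" by (rule deg_sign_nz)
  define th where "th = pi * (real i + 1) / real r"
  define th' where "th' = pi * (real i' + 1) / real r"
  have q: "(real i + 1) / real r \<le> 1" using i r by (simp add: divide_le_eq)
  have q': "(real i' + 1) / real r \<le> 1" using i' r by (simp add: divide_le_eq)
  have th: "0 \<le> th" "th \<le> pi" using mult_left_mono[OF q pi_ge_zero] r unfolding th_def by auto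
  have th': "0 < th'" "th' \<le> pi" using mult_left_mono[OF q' pi_ge_zero] r unfolding th'_def by auto
  show ?thesis
  proof (cases "even (k' - k)")
    case True
    then have "deg_sign r k' = deg_sign r k" using deg_sign_eq[OF r, of k' k] by simp
    then have "cas_P r i' = cas_P r i" using e sgnz by (simp add: cas_val_def)
    then have "of_real (2 * cos th') / (qbr r 1)\<^sup>2 = of_real (2 * cos th) / (qbr r 1)\<^sup>2"
      by (simp add: cas_P_real th_def th'_def)
    then have cc: "cos th' = cos th" using Q by simp
    have a: "0 \<le> th'" using th' by simp
    have "th' = th" by (rule cos_inj_pi[OF a th'(2) th(1) th(2) cc])
    then have "real i' = real i" using r unfolding th_def th'_def by (simp add: field_simps)
    then show ?thesis using True by simp
  next
    case False
    then have "deg_sign r k' = - deg_sign r k" using deg_sign_eq[OF r, of k' k] by simp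
    then have "deg_sign r k * cas_P r i' = deg_sign r k * (- cas_P r i)" using e by (simp add: cas_val_def minus_equation_iff)
    then have "cas_P r i' = - cas_P r i" using sgnz by (rule mult_left_cancel[THEN iffD1, rotated])
    then have "of_real (2 * cos th') / (qbr r 1)\<^sup>2 = - (of_real (2 * cos th) / (qbr r 1)\<^sup>2)"
      by (simp add: cas_P_real th_def th'_def)
    then have "cos th' = - cos th" using Q by (simp add: field_simps)
    then have cc: "cos th' = cos (pi - th)" by simp
    have a: "0 \<le> th'" and b: "0 \<le> pi - th" and c: "pi - th \<le> pi" using th' th by simp_all
    have "th' = pi - th" by (rule cos_inj_pi[OF a th'(2) b c cc])
    then have "pi * (real i' + 1) = pi * real r - pi * (real i + 1)" using r unfolding th_def th'_def
      by (simp add: field_simps)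
    then have "pi * (real i' + 1) = pi * (real r - (real i + 1))" by (simp add: algebra_simps)
    then have "real i' + 1 = real r - (real i + 1)" by simp
    then show ?thesis using False by simp
  qed
qed

section \<open>Every endomorphism is standard\<close>

lemma bounds_of_mult:
  fixes m e lo hi :: int
  assumes r: "r > 0" and e: "m * int r = e" and lo: "lo * int r < e" and hi: "e < hi * int r"
  shows "lo < m \<and> m < hi"
proof
  show "lo < m"
  proof (rule ccontr)
    assume "\<not> lo < m"
    then have "m * int r \<le> lo * int r" using r by (intro mult_right_mono) auto
    then show False using e lo by simp
  qed
  show "m < hi"
  proof (rule ccontr)
    assume "\<not> m < hi"
    then have "hi * int r \<le> m * int r" using r by (intro mult_right_mono) auto
    then show False using e hi by simp
  qed
qed

text \<open>Equal weights give \<open>(k\<acute> - k) r = i - lab_wt r i\<acute> b\<acute>\<close>, which confines \<open>k\<acute> - k\<close> to a short interval;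
  its parity, known from the Casimir value, then fixes it.\<close>

lemma wt_classify_same_summand:
  assumes ir: "i + 2 \<le> r" and v: "valid_lab r i' b'" and ii: "i' = i"
    and w: "k' * int r + lab_wt r i' b' = k * int r + int i" and par: "even (k' - k)"
  shows "(k', i', b') \<in> {(k, i, Hb 0), (k, i, Sb 0)}"
proof -
  have r: "r > 0" using ir by simp
  define m where "m = k' - k"
  have me: "m * int r = int i - lab_wt r i' b'" using w by (simp add: m_def algebra_simps)
  have m_even: "even m" using par by (simp add: m_def)
  show ?thesis
  proof (cases b')
    case (Hb a)
    then have "a \<le> i" using v ii by simp
    then have "m * int r = 2 * int a" "(- 1) * int r < 2 * int a" "2 * int a < 2 * int r"
      using me Hb ii ir by auto
    then have "- 1 < m \<and> m < 2" using bounds_of_mult[OF r] by blast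
    then have "m = 0" using m_even by presburger
    then have "a = 0" using me Hb ii by simp
    then show ?thesis using Hb ii \<open>m = 0\<close> by (simp add: m_def)
  next
    case (Sb a)
    then have "a \<le> i" using v ii by simp
    then have "m * int r = 2 * int a" "(- 1) * int r < 2 * int a" "2 * int a < 2 * int r"
      using me Sb ii ir by auto
    then have "- 1 < m \<and> m < 2" using bounds_of_mult[OF r] by blast
    then have "m = 0" using m_even by presburger
    then have "a = 0" using me Sb ii by simp
    then show ?thesis using Sb ii \<open>m = 0\<close> by (simp add: m_def)
  next
    case (Rb a)
    then have "a \<le> r - 2 - i" using v ii by simp
    then have "m * int r = - 2 - 2 * int a" "(- 2) * int r < - 2 - 2 * int a" "- 2 - 2 * int a < 0 * int r"
      using me Rb ii ir by auto
    then have "- 2 < m \<and> m < 0" using bounds_of_mult[OF r] by blast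
    then have False using m_even by presburger
    then show ?thesis ..
  next
    case (Lb a)
    then have "a \<le> r - 2 - i" using v ii by simp
    then have "m * int r = 2 + 2 * int i + 2 * int a" "0 * int r < 2 + 2 * int i + 2 * int a"
      "2 + 2 * int i + 2 * int a < 2 * int r"
      using me Lb ii ir by auto
    then have "0 < m \<and> m < 2" using bounds_of_mult[OF r] by blast
    then have False using m_even by presburger
    then show ?thesis ..
  next
    case (Vb a)
    then show ?thesis using v ii ir by simp
  qed
qed

lemma wt_classify_dual_summand:
  assumes ir: "i + 2 \<le> r" and v: "valid_lab r i' b'" and ii: "i' = r - 2 - i"
    and w: "k' * int r + lab_wt r i' b' = k * int r + int i" and par: "odd (k' - k)"
  shows "(k', i', b') \<in> {(k + 1, dual r i, Lb 0), (k - 1, dual r i, Rb i)}"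
proof -
  have r: "r > 0" using ir by simp
  define m where "m = k' - k"
  have me: "m * int r = int i - lab_wt r i' b'" using w by (simp add: m_def algebra_simps)
  have od: "odd m" using par by (simp add: m_def)
  have dual_eq: "dual r i = i'" using ii by (simp add: dual_def)
  show ?thesis
  proof (cases b')
    case (Hb a)
    then have "a \<le> i'" using v by simp
    then have "m * int r = int i - int i' + 2 * int a" "(- 1) * int r < int i - int i' + 2 * int a"
      "int i - int i' + 2 * int a < 1 * int r"
      using me Hb ii ir by auto
    then have "- 1 < m \<and> m < 1" using bounds_of_mult[OF r] by blast
    then have False using od by presburger
    then show ?thesis ..
  next
    case (Sb a)
    then have "a \<le> i'" using v by simp
    then have "m * int r = int i - int i' + 2 * int a" "(- 1) * int r < int i - int i' + 2 * int a"
      "int i - int i' + 2 * int a < 1 * int r"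
      using me Sb ii ir by auto
    then have "- 1 < m \<and> m < 1" using bounds_of_mult[OF r] by blast
    then have False using od by presburger
    then show ?thesis ..
  next
    case (Rb a)
    then have a: "a \<le> r - 2 - i'" using v by simp
    then have "m * int r = int i - int i' - 2 - 2 * int a" "(- 2) * int r < int i - int i' - 2 - 2 * int a"
      "int i - int i' - 2 - 2 * int a < 1 * int r"
      using me Rb ii ir by auto
    then have "- 2 < m \<and> m < 1" using bounds_of_mult[OF r] by blast
    then have "m = -1" using od by presburger
    then have "a = i" using me Rb ii ir by simp
    then show ?thesis using Rb dual_eq \<open>m = -1\<close> by (simp add: m_def)
  next
    case (Lb a)
    then have a: "a \<le> r - 2 - i'" using v by simp
    then have "m * int r = int i + 2 + int i' + 2 * int a" "0 * int r < int i + 2 + int i' + 2 * int a"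
      "int i + 2 + int i' + 2 * int a < 3 * int r"
      using me Lb ii ir by auto
    then have "0 < m \<and> m < 3" using bounds_of_mult[OF r] by blast
    then have "m = 1" using od by presburger
    then have "a = 0" using me Lb ii ir by simp
    then show ?thesis using Lb dual_eq \<open>m = 1\<close> by (simp add: m_def)
  next
    case (Vb a)
    then show ?thesis using v ii ir by (simp; linarith)
  qed
qed

lemma wt_cas_classify_H:
  assumes ir: "i + 2 \<le> r" and v: "valid_lab r i' b'"
    and w: "k' * int r + lab_wt r i' b' = k * int r + int i"
    and c: "(i' = i \<and> even (k' - k)) \<or> (i + i' + 2 = r \<and> odd (k' - k))"
  shows "(k', i', b') \<in> {(k, i, Hb 0), (k, i, Sb 0), (k + 1, dual r i, Lb 0), (k - 1, dual r i, Rb i)}"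
  using c
proof
  assume "i' = i \<and> even (k' - k)"
  then show ?thesis using wt_classify_same_summand[OF ir v _ w] by blast
next
  assume "i + i' + 2 = r \<and> odd (k' - k)"
  then show ?thesis using wt_classify_dual_summand[OF ir v _ w] by force
qed

lemma wt_cas_classify_V:
  assumes ir: "i + 1 = r" and v: "valid_lab r i' b'"
    and w: "k' * int r + lab_wt r i' b' = k * int r + lab_wt r i (Vb 0)"
    and c: "i' = i \<and> even (k' - k)"
  shows "(k', i', b') = (k, i, Vb 0)"
proof -
  have r: "r > 0" using ir by simp
  define m where "m = k' - k"
  have m_even: "even m" and ii: "i' = i" using c by (auto simp: m_def)
  have me: "m * int r = lab_wt r i (Vb 0) - lab_wt r i' b'" using w by (simp add: m_def algebra_simps)
  show ?thesis
  proof (cases b')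
    case (Vb a)
    then have "a < r" using v by simp
    then have "m * int r = 2 * int a" "(- 1) * int r < 2 * int a" "2 * int a < 2 * int r"
      using me Vb ii ir by auto
    then have "- 1 < m \<and> m < 2" using bounds_of_mult[OF r] by blast
    then have "m = 0" using m_even by presburger
    then have "a = 0" using me Vb ii by simp
    then show ?thesis using Vb ii \<open>m = 0\<close> by (simp add: m_def)
  qed (use v ii ir in auto)
qed

lemma End_bvec_top_H:
  assumes r2: "r \<ge> 2" and f: "f \<in> EndSet r \<nu>" and t: "(k, i, Hb 0) \<in> Pbasis r \<nu>"
  shows "f (bvec (k, i, Hb 0)) = (\<lambda>y. f (bvec (k, i, Hb 0)) (k, i, Hb 0) * bvec (k, i, Hb 0) y
     + (f (bvec (k, i, Hb 0)) (k, i, Sb 0) * bvec (k, i, Sb 0) y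
     + (f (bvec (k, i, Hb 0)) (k + 1, dual r i, Lb 0) * bvec (k + 1, dual r i, Lb 0) y
     + f (bvec (k, i, Hb 0)) (k - 1, dual r i, Rb i) * bvec (k - 1, dual r i, Rb i) y)))"
proof
  fix y
  let ?w = "f (bvec (k, i, Hb 0))"
  have ir: "i + 2 \<le> r" and si: "summand r \<nu> k i" using t by (auto simp: Pbasis_iff_summand)
  show "?w y = ?w (k, i, Hb 0) * bvec (k, i, Hb 0) y + (?w (k, i, Sb 0) * bvec (k, i, Sb 0) y
     + (?w (k + 1, dual r i, Lb 0) * bvec (k + 1, dual r i, Lb 0) y + ?w (k - 1, dual r i, Rb i) * bvec (k - 1, dual r i, Rb i) y))"
  proof (cases "?w y = 0")
    case True
    then show ?thesis by (auto simp: bvec_def)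
  next
    case False
    obtain k' i' b' where yy: "y = (k', i', b')" by (cases y) auto
    have wP: "?w \<in> Pnu r \<nu>" using End_Pnu[OF f] t by simp
    have yP: "y \<in> Pbasis r \<nu>" using wP False by (simp add: Pnu_iff)
    have v: "valid_lab r i' b'" and i'r: "i' < r" using yP by (auto simp: yy Pbasis_iff_summand summand_def)
    have wt: "wt r y = wt r (k, i, Hb 0)" by (rule End_wt[OF f t False])
    have cv: "cas_val r k' i' = cas_val r k i" using End_preserves_cas_val[OF r2 f t] False by (simp add: yy)
    have c: "(i' = i \<and> even (k' - k)) \<or> (i + i' + 2 = r \<and> odd (k' - k))"
      using cas_val_eq[OF r2 _ i'r cv] ir by simp
    have "(k', i', b') \<in> {(k, i, Hb 0), (k, i, Sb 0), (k + 1, dual r i, Lb 0), (k - 1, dual r i, Rb i)}"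
      by (rule wt_cas_classify_H[OF ir v _ c]) (use wt in \<open>simp add: yy wt_def\<close>)
    then show ?thesis by (auto simp: yy bvec_def)
  qed
qed

lemma End_bvec_top_V:
  assumes r2: "r \<ge> 2" and f: "f \<in> EndSet r \<nu>" and t: "(k, i, Vb 0) \<in> Pbasis r \<nu>"
  shows "f (bvec (k, i, Vb 0)) = (\<lambda>y. f (bvec (k, i, Vb 0)) (k, i, Vb 0) * bvec (k, i, Vb 0) y)"
proof
  fix y
  let ?w = "f (bvec (k, i, Vb 0))"
  have ir: "i + 1 = r" and si: "summand r \<nu> k i" using t by (auto simp: Pbasis_iff_summand)
  show "?w y = ?w (k, i, Vb 0) * bvec (k, i, Vb 0) y"
  proof (cases "?w y = 0")
    case True
    then show ?thesis by (auto simp: bvec_def)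
  next
    case False
    obtain k' i' b' where yy: "y = (k', i', b')" by (cases y) auto
    have wP: "?w \<in> Pnu r \<nu>" using End_Pnu[OF f] t by simp
    have yP: "y \<in> Pbasis r \<nu>" using wP False by (simp add: Pnu_iff)
    have v: "valid_lab r i' b'" and i'r: "i' < r" using yP by (auto simp: yy Pbasis_iff_summand summand_def)
    have wt: "wt r y = wt r (k, i, Vb 0)" by (rule End_wt[OF f t False])
    have cv: "cas_val r k' i' = cas_val r k i" using End_preserves_cas_val[OF r2 f t] False by (simp add: yy)
    have c: "(i' = i \<and> even (k' - k)) \<or> (i + i' + 2 = r \<and> odd (k' - k))"
      using cas_val_eq[OF r2 _ i'r cv] ir by simp
    then have c: "i' = i \<and> even (k' - k)" using ir by auto
    have "(k', i', b') = (k, i, Vb 0)"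
      by (rule wt_cas_classify_V[OF ir v _ c]) (use wt in \<open>simp add: yy wt_def\<close>)
    then show ?thesis by (auto simp: yy bvec_def)
  qed
qed

definition coef_diag :: "nat \<Rightarrow> (pvec \<Rightarrow> pvec) \<Rightarrow> coef_fun" where
  "coef_diag r f k i = f (bvec (top_idx r k i)) (top_idx r k i)"
definition coef_nil :: "nat \<Rightarrow> (pvec \<Rightarrow> pvec) \<Rightarrow> coef_fun" where
  "coef_nil r f k i = f (bvec (k, i, Hb 0)) (k, i, Sb 0)"
definition coef_up :: "nat \<Rightarrow> (pvec \<Rightarrow> pvec) \<Rightarrow> coef_fun" where
  "coef_up r f k i = f (bvec (k, i, Hb 0)) (k + 1, dual r i, Lb 0)"
definition coef_down :: "nat \<Rightarrow> (pvec \<Rightarrow> pvec) \<Rightarrow> coef_fun" where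
  "coef_down r f k i = f (bvec (k, i, Hb 0)) (k - 1, dual r i, Rb i)"

definition coefs :: "nat \<Rightarrow> (pvec \<Rightarrow> pvec) \<Rightarrow> int \<Rightarrow> nat \<Rightarrow> complex \<times> complex \<times> complex \<times> complex" where
  "coefs r f k i = (coef_diag r f k i, coef_nil r f k i, coef_up r f k i, coef_down r f k i)"

lemma End_bvec_shift_apply:
  assumes f: "f \<in> EndSet r \<nu>"
  shows "f (bvec (k + shift_deg r, i, b)) y = f (bvec (k, i, b)) (fst y - shift_deg r, snd y)"
proof (cases "(k, i, b) \<in> Pbasis r \<nu>")
  case True
  then show ?thesis using End_shift_bvec[OF f True] by (simp add: shiftP_alt)
next
  case False
  then have "(k + shift_deg r, i, b) \<notin> Pbasis r \<nu>" using Pbasis_unshift[of "(k + shift_deg r, i, b)" r \<nu>] by auto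
  then show ?thesis using False End_out[OF f] by simp
qed

lemma coefs_shift_periodic:
  assumes f: "f \<in> EndSet r \<nu>"
  shows "coef_diag r f (k + shift_deg r) i = coef_diag r f k i" "coef_nil r f (k + shift_deg r) i = coef_nil r f k i"
    "coef_up r f (k + shift_deg r) i = coef_up r f k i" "coef_down r f (k + shift_deg r) i = coef_down r f k i"
  by (simp_all add: coef_diag_def coef_nil_def coef_up_def coef_down_def top_idx_def End_bvec_shift_apply[OF f] algebra_simps)

abbreviation coef_rows :: "nat \<Rightarrow> (pvec \<Rightarrow> pvec) \<Rightarrow> pidx \<Rightarrow> pvec" where
  "coef_rows r f \<equiv> endo_row r (coef_diag r f) (coef_nil r f) (coef_up r f) (coef_down r f)"

theorem End_standard_form:
  assumes r2: "r \<ge> 2" and f: "f \<in> EndSet r \<nu>"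
  shows "f = mat_endo r \<nu> (coef_rows r f)"
proof (rule End_eq_tops[OF f])
  show "mat_endo r \<nu> (coef_rows r f) \<in> EndSet r \<nu>"
    by (rule endo_row_EndSet) (use coefs_shift_periodic[OF f] in auto)
next
  fix k i assume s: "summand r \<nu> k i"
  show "f (bvec (top_idx r k i)) = mat_endo r \<nu> (coef_rows r f) (bvec (top_idx r k i))"
  proof (cases "i + 2 \<le> r")
    case True
    have t: "(k, i, Hb 0) \<in> Pbasis r \<nu>" using s True by (simp add: Pbasis_iff_summand)
    show ?thesis using t True End_bvec_top_H[OF r2 f t]
      by (simp add: top_idx_def mat_endo_def coef_diag_def coef_nil_def coef_up_def coef_down_def)
  next
    case False
    then have ri: "i + 1 = r" using s by (simp add: summand_def)
    have t: "(k, i, Vb 0) \<in> Pbasis r \<nu>" using s ri by (simp add: Pbasis_iff_summand)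
    show ?thesis using t False End_bvec_top_V[OF r2 f t]
      by (simp add: top_idx_def mat_endo_def coef_diag_def)
  qed
qed

lemma End_bvec_eq_coef_rows:
  assumes r2: "r \<ge> 2" and f: "f \<in> EndSet r \<nu>" and x: "x \<in> Pbasis r \<nu>"
  shows "f (bvec x) = coef_rows r f x"
  using End_standard_form[OF r2 f] x by (metis bvec_Pnu mat_apply_bvec mat_endo_def)

lemma End_eq_mat_apply_coef_rows:
  assumes r2: "r \<ge> 2" and f: "f \<in> EndSet r \<nu>" and v: "v \<in> Pnu r \<nu>"
  shows "f v = mat_apply (coef_rows r f) v"
  using End_standard_form[OF r2 f] v by (metis mat_endo_def)

definition end_mul :: "nat \<Rightarrow> int \<Rightarrow> (pvec \<Rightarrow> pvec) \<Rightarrow> (pvec \<Rightarrow> pvec) \<Rightarrow> pvec \<Rightarrow> pvec" where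
  "end_mul r \<nu> f g = amul (EndAlg r \<nu>) f g"

lemma end_mul_bvec: "x \<in> Pbasis r \<nu> \<Longrightarrow> end_mul r \<nu> f g (bvec x) = f (g (bvec x))"
  by (simp add: end_mul_def EndAlg_def)

lemma coefs_end_mul_H:
  assumes r2: "r \<ge> 2" and f: "f \<in> EndSet r \<nu>" and g: "g \<in> EndSet r \<nu>" and t: "(k, i, Hb 0) \<in> Pbasis r \<nu>"
  defines "h \<equiv> end_mul r \<nu> f g"
  shows "coef_diag r h k i = coef_diag r g k i * coef_diag r f k i"
    "coef_nil r h k i = coef_diag r g k i * coef_nil r f k i + coef_nil r g k i * coef_diag r f k i
        - coef_up r g k i * coef_down r f (k + 1) (dual r i) * gam_prod r (dual r i) (dual r i)
        + coef_down r g k i * coef_up r f (k - 1) (dual r i) * gam_prod r i i"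
    "coef_up r h k i = coef_diag r g k i * coef_up r f k i + coef_up r g k i * coef_diag r f (k + 1) (dual r i)"
    "coef_down r h k i = coef_diag r g k i * coef_down r f k i + coef_down r g k i * coef_diag r f (k - 1) (dual r i)"
proof -
  have ir: "i + 2 \<le> r" using t by (simp add: Pbasis_iff_summand)
  have j: "dual r (dual r i) = i" using ir by (rule dual_inv)
  have gt: "g (bvec (k, i, Hb 0)) = coef_rows r g (k, i, Hb 0)" by (rule End_bvec_eq_coef_rows[OF r2 g t])
  have gP: "g (bvec (k, i, Hb 0)) \<in> Pnu r \<nu>" using End_Pnu[OF g] t by simp
  have "h (bvec (k, i, Hb 0)) = f (g (bvec (k, i, Hb 0)))" unfolding h_def by (rule end_mul_bvec[OF t])
  also have "\<dots> = mat_apply (coef_rows r f) (coef_rows r g (k, i, Hb 0))"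
    using End_eq_mat_apply_coef_rows[OF r2 f gP] gt by simp
  finally have hv: "h (bvec (k, i, Hb 0)) = mat_apply (coef_rows r f) (coef_rows r g (k, i, Hb 0))" .
  have top_idx_eq: "top_idx r k i = (k, i, Hb 0)" using ir by (simp add: top_idx_def)
  have top_idx_eq2: "top_idx r (k + 1) (dual r i) = (k + 1, dual r i, Hb 0)" "top_idx r (k - 1) (dual r i) = (k - 1, dual r i, Hb 0)"
    using ir by (simp_all add: top_idx_def dual_def)
  show "coef_diag r h k i = coef_diag r g k i * coef_diag r f k i"
    unfolding coef_diag_def top_idx_eq hv by (simp; simp add: bvec_def coef_diag_def coef_nil_def coef_up_def coef_down_def top_idx_eq j)
  show "coef_nil r h k i = coef_diag r g k i * coef_nil r f k i + coef_nil r g k i * coef_diag r f k i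
        - coef_up r g k i * coef_down r f (k + 1) (dual r i) * gam_prod r (dual r i) (dual r i)
        + coef_down r g k i * coef_up r f (k - 1) (dual r i) * gam_prod r i i"
    unfolding coef_nil_def hv by (simp; simp add: bvec_def coef_diag_def coef_nil_def coef_up_def coef_down_def top_idx_eq top_idx_eq2 j algebra_simps)
  show "coef_up r h k i = coef_diag r g k i * coef_up r f k i + coef_up r g k i * coef_diag r f (k + 1) (dual r i)"
    unfolding coef_up_def hv by (simp; simp add: bvec_def coef_diag_def coef_nil_def coef_up_def coef_down_def top_idx_eq top_idx_eq2 j algebra_simps)
  show "coef_down r h k i = coef_diag r g k i * coef_down r f k i + coef_down r g k i * coef_diag r f (k - 1) (dual r i)"
    unfolding coef_down_def hv by (simp; simp add: bvec_def coef_diag_def coef_nil_def coef_up_def coef_down_def top_idx_eq top_idx_eq2 j algebra_simps)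
qed

lemma coef_diag_end_mul_V:
  assumes r2: "r \<ge> 2" and f: "f \<in> EndSet r \<nu>" and g: "g \<in> EndSet r \<nu>" and t: "(k, i, Vb 0) \<in> Pbasis r \<nu>"
  shows "coef_diag r (end_mul r \<nu> f g) k i = coef_diag r g k i * coef_diag r f k i"
proof -
  have ir: "\<not> i + 2 \<le> r" using t by (simp add: Pbasis_iff_summand)
  have top_idx_eq: "top_idx r k i = (k, i, Vb 0)" using ir by (simp add: top_idx_def)
  have gt: "g (bvec (k, i, Vb 0)) = coef_rows r g (k, i, Vb 0)" by (rule End_bvec_eq_coef_rows[OF r2 g t])
  have gP: "g (bvec (k, i, Vb 0)) \<in> Pnu r \<nu>" using End_Pnu[OF g] t by simp
  have hv: "end_mul r \<nu> f g (bvec (k, i, Vb 0)) = mat_apply (coef_rows r f) (coef_rows r g (k, i, Vb 0))"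
    using end_mul_bvec[OF t] End_eq_mat_apply_coef_rows[OF r2 f gP] gt by simp
  show ?thesis unfolding coef_diag_def top_idx_eq hv by (simp; simp add: coef_diag_def top_idx_eq bvec_def)
qed

lemma coefs_periodic_mult:
  assumes f: "f \<in> EndSet r \<nu>"
  shows "coef_diag r f (k + m * shift_deg r) i = coef_diag r f k i \<and> coef_nil r f (k + m * shift_deg r) i = coef_nil r f k i
    \<and> coef_up r f (k + m * shift_deg r) i = coef_up r f k i \<and> coef_down r f (k + m * shift_deg r) i = coef_down r f k i"
proof (induction m rule: int_induct[where k = 0])
  case base then show ?case by simp
next
  case (step1 m)
  have e: "k + (m + 1) * shift_deg r = (k + m * shift_deg r) + shift_deg r" by (simp add: algebra_simps)
  show ?case unfolding e using step1 coefs_shift_periodic[OF f] by simp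
next
  case (step2 m)
  have e: "k + m * shift_deg r = (k + (m - 1) * shift_deg r) + shift_deg r" by (simp add: algebra_simps)
  show ?case using step2 coefs_shift_periodic[OF f, of "k + (m - 1) * shift_deg r" i] unfolding e by simp
qed

lemma coefs_periodic_2:
  assumes f: "f \<in> EndSet r \<nu>" and r: "r > 0"
  shows "coef_diag r f (k + 2) i = coef_diag r f k i" "coef_nil r f (k + 2) i = coef_nil r f k i"
    "coef_up r f (k + 2) i = coef_up r f k i" "coef_down r f (k + 2) i = coef_down r f k i"
proof -
  obtain m where m: "2 = m * shift_deg r" using shift_deg_cases[OF r] by (metis mult_1 mult.commute numeral_One one_add_one)
  show "coef_diag r f (k + 2) i = coef_diag r f k i" "coef_nil r f (k + 2) i = coef_nil r f k i"
    "coef_up r f (k + 2) i = coef_up r f k i" "coef_down r f (k + 2) i = coef_down r f k i"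
    unfolding m using coefs_periodic_mult[OF f] by simp_all
qed

lemma coefs_periodic_1:
  assumes f: "f \<in> EndSet r \<nu>" and r: "r > 0" and e: "even r"
  shows "coef_diag r f (k + 1) i = coef_diag r f k i" "coef_nil r f (k + 1) i = coef_nil r f k i"
    "coef_up r f (k + 1) i = coef_up r f k i" "coef_down r f (k + 1) i = coef_down r f k i"
proof -
  have m: "shift_deg r = 1" using shift_deg_cases[OF r] e by auto
  show "coef_diag r f (k + 1) i = coef_diag r f k i" "coef_nil r f (k + 1) i = coef_nil r f k i"
    "coef_up r f (k + 1) i = coef_up r f k i" "coef_down r f (k + 1) i = coef_down r f k i"
    using coefs_periodic_mult[OF f, of k 1 i] unfolding m by simp_all
qed

section \<open>Block homomorphisms\<close>

text \<open>For a pair of summands \<open>(k, i)\<close>, \<open>(k + 1, j)\<close> with \<open>i < j\<close>: \<open>p\<close>, \<open>q\<close> are the scalars on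
  \<open>P\<^sub>i\<close>, \<open>P\<^sub>j\<close>, the arrows \<open>a\<^sub>\<plusminus>\<close>, \<open>b\<^sub>\<plusminus>\<close> are the maps to the neighbouring summands (degrees being
  taken modulo the \<open>\<int>\<close>-action), and \<open>b\<^sub>+a\<^sub>-\<close>, \<open>a\<^sub>+b\<^sub>-\<close> the nilpotent parts \<open>h \<mapsto> s\<close>.  The
  \<open>\<gamma>\<close>-products normalize \<open>D\<close> so that the relations of \<open>A\<close> hold exactly.  For \<open>i = j\<close> (\<open>r\<close> even, where
  the \<open>\<int>\<close>-action shifts the degree by one) the two summands coincide and \<open>A\<close> collapses to \<open>B\<close>.\<close>

definition blockA :: "nat \<Rightarrow> (pvec \<Rightarrow> pvec) \<Rightarrow> int \<Rightarrow> nat \<Rightarrow> abas \<Rightarrow> complex" where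
  "blockA r f k i = (\<lambda>z. case z of
      Ap \<Rightarrow> coef_diag r f k i
    | Aq \<Rightarrow> coef_diag r f (k + 1) (dual r i)
    | Aap \<Rightarrow> coef_up r f k i
    | Aam \<Rightarrow> gam_prod r i i * coef_down r f k i
    | Abp \<Rightarrow> coef_up r f (k + 1) (dual r i)
    | Abm \<Rightarrow> gam_prod r (dual r i) (dual r i) * coef_down r f (k + 1) (dual r i)
    | Abpam \<Rightarrow> coef_nil r f k i
    | Aapbm \<Rightarrow> coef_nil r f (k + 1) (dual r i))"

definition blockB :: "nat \<Rightarrow> (pvec \<Rightarrow> pvec) \<Rightarrow> int \<Rightarrow> nat \<Rightarrow> bbas \<Rightarrow> complex" where
  "blockB r f k i = (\<lambda>z. case z of
      B1 \<Rightarrow> coef_diag r f k i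
    | Bp \<Rightarrow> coef_up r f k i
    | Bm \<Rightarrow> gam_prod r i i * coef_down r f k i
    | Bpm \<Rightarrow> coef_nil r f k i)"

lemma blockA_mul:
  assumes r2: "r \<ge> 2" and f: "f \<in> EndSet r \<nu>" and g: "g \<in> EndSet r \<nu>" and t: "(k, i, Hb 0) \<in> Pbasis r \<nu>"
  shows "blockA r (end_mul r \<nu> f g) k i = amul algA (blockA r f k i) (blockA r g k i)"
proof -
  have r: "r > 0" using r2 by simp
  have ir: "i + 2 \<le> r" and si: "summand r \<nu> k i" using t by (auto simp: Pbasis_iff_summand)
  have j: "dual r (dual r i) = i" using ir by (rule dual_inv)
  have q: "(k + 1, dual r i, Hb 0) \<in> Pbasis r \<nu>"
    using summand_dual[OF ir si] ir by (simp add: Pbasis_iff_summand dual_def)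
  note P = coefs_end_mul_H[OF r2 f g t] and Q = coefs_end_mul_H[OF r2 f g q]
  have e1: "coef_up r f (k - 1) (dual r i) = coef_up r f (k + 1) (dual r i)"
    "coef_diag r f (k - 1) (dual r i) = coef_diag r f (k + 1) (dual r i)"
    using coefs_periodic_2[OF f r, of "k - 1" "dual r i"] unfolding diff_add_cancel[of k 1] by (simp_all add: add.commute)
  have e2: "coef_diag r f (k + 1 + 1) i = coef_diag r f k i" "coef_down r f (k + 1 + 1) i = coef_down r f k i"
    "coef_diag r f (k + 2) i = coef_diag r f k i" "coef_down r f (k + 2) i = coef_down r f k i"
    "coef_diag r f (2 + k) i = coef_diag r f k i" "coef_down r f (2 + k) i = coef_down r f k i"
    using coefs_periodic_2[OF f r, of k i] by (simp_all add: add.assoc add.commute)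
  show ?thesis
  proof (rule ext)
    fix z show "blockA r (end_mul r \<nu> f g) k i z = amul algA (blockA r f k i) (blockA r g k i) z"
      apply (cases z)
             apply (simp_all add: blockA_def amul_algA P Q e1 e2 j)
       apply (simp_all add: algebra_simps)
      done
  qed
qed

lemma blockB_mul:
  assumes r2: "r \<ge> 2" and f: "f \<in> EndSet r \<nu>" and g: "g \<in> EndSet r \<nu>" and t: "(k, i, Hb 0) \<in> Pbasis r \<nu>"
    and r_even: "even r" and ij: "dual r i = i"
  shows "blockB r (end_mul r \<nu> f g) k i = amul algB (blockB r f k i) (blockB r g k i)"
proof -
  have r: "r > 0" using r2 by simp
  note P = coefs_end_mul_H[OF r2 f g t]
  have e1: "coef_up r f (k - 1) i = coef_up r f k i" "coef_diag r f (k - 1) i = coef_diag r f k i"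
    using coefs_periodic_1[OF f r r_even, of "k - 1" i] by simp_all
  have e2: "coef_diag r f (k + 1) i = coef_diag r f k i" "coef_down r f (k + 1) i = coef_down r f k i"
    "coef_diag r f (1 + k) i = coef_diag r f k i" "coef_down r f (1 + k) i = coef_down r f k i"
    using coefs_periodic_1[OF f r r_even, of k i] by (simp_all add: add.commute)
  show ?thesis
  proof (rule ext)
    fix z show "blockB r (end_mul r \<nu> f g) k i z = amul algB (blockB r f k i) (blockB r g k i) z"
      by (cases z) (simp_all add: blockB_def amul_algB P e1 e2 ij algebra_simps)
  qed
qed

lemma EndAlg_simps:
  "acar (EndAlg r \<nu>) = EndSet r \<nu>"
  "aadd (EndAlg r \<nu>) f g = (\<lambda>v. if v \<in> Pnu r \<nu> then (\<lambda>x. f v x + g v x) else (\<lambda>x. 0))"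
  "asmul (EndAlg r \<nu>) c f = (\<lambda>v. if v \<in> Pnu r \<nu> then (\<lambda>x. c * f v x) else (\<lambda>x. 0))"
  "aone (EndAlg r \<nu>) = (\<lambda>v. if v \<in> Pnu r \<nu> then v else (\<lambda>x. 0))"
  "amul (EndAlg r \<nu>) f g = end_mul r \<nu> f g"
  by (simp_all add: EndAlg_def end_mul_def)

lemma coefs_linear:
  assumes t: "(k, i, Hb 0) \<in> Pbasis r \<nu>"
  shows "coef_diag r (aadd (EndAlg r \<nu>) f g) k i = coef_diag r f k i + coef_diag r g k i"
    "coef_nil r (aadd (EndAlg r \<nu>) f g) k i = coef_nil r f k i + coef_nil r g k i"
    "coef_up r (aadd (EndAlg r \<nu>) f g) k i = coef_up r f k i + coef_up r g k i"
    "coef_down r (aadd (EndAlg r \<nu>) f g) k i = coef_down r f k i + coef_down r g k i"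
    "coef_diag r (asmul (EndAlg r \<nu>) c f) k i = c * coef_diag r f k i"
    "coef_nil r (asmul (EndAlg r \<nu>) c f) k i = c * coef_nil r f k i"
    "coef_up r (asmul (EndAlg r \<nu>) c f) k i = c * coef_up r f k i"
    "coef_down r (asmul (EndAlg r \<nu>) c f) k i = c * coef_down r f k i"
    "coef_diag r (aone (EndAlg r \<nu>)) k i = 1"
    "coef_nil r (aone (EndAlg r \<nu>)) k i = 0"
    "coef_up r (aone (EndAlg r \<nu>)) k i = 0"
    "coef_down r (aone (EndAlg r \<nu>)) k i = 0"
proof -
  have ir: "i + 2 \<le> r" using t by (simp add: Pbasis_iff_summand)
  then have top_idx_eq: "top_idx r k i = (k, i, Hb 0)" by (simp add: top_idx_def)
  have e: "(\<lambda>y. if y = (k, i, Hb 0) then 1 else 0) \<in> Pnu r \<nu>" using t bvec_Pnu[of "(k, i, Hb 0)" r \<nu>] by (simp add: bvec_def)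
  show "coef_diag r (aadd (EndAlg r \<nu>) f g) k i = coef_diag r f k i + coef_diag r g k i"
    "coef_nil r (aadd (EndAlg r \<nu>) f g) k i = coef_nil r f k i + coef_nil r g k i"
    "coef_up r (aadd (EndAlg r \<nu>) f g) k i = coef_up r f k i + coef_up r g k i"
    "coef_down r (aadd (EndAlg r \<nu>) f g) k i = coef_down r f k i + coef_down r g k i"
    "coef_diag r (asmul (EndAlg r \<nu>) c f) k i = c * coef_diag r f k i"
    "coef_nil r (asmul (EndAlg r \<nu>) c f) k i = c * coef_nil r f k i"
    "coef_up r (asmul (EndAlg r \<nu>) c f) k i = c * coef_up r f k i"
    "coef_down r (asmul (EndAlg r \<nu>) c f) k i = c * coef_down r f k i"
    "coef_diag r (aone (EndAlg r \<nu>)) k i = 1"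
    "coef_nil r (aone (EndAlg r \<nu>)) k i = 0"
    "coef_up r (aone (EndAlg r \<nu>)) k i = 0"
    "coef_down r (aone (EndAlg r \<nu>)) k i = 0"
    using t e by (simp_all add: EndAlg_simps coef_diag_def coef_nil_def coef_up_def coef_down_def top_idx_eq bvec_def)
qed

lemma coef_diag_linear_V:
  assumes t: "(k, i, Vb 0) \<in> Pbasis r \<nu>"
  shows "coef_diag r (aadd (EndAlg r \<nu>) f g) k i = coef_diag r f k i + coef_diag r g k i"
    "coef_diag r (asmul (EndAlg r \<nu>) c f) k i = c * coef_diag r f k i"
    "coef_diag r (aone (EndAlg r \<nu>)) k i = 1"
proof -
  have ir: "\<not> i + 2 \<le> r" using t by (simp add: Pbasis_iff_summand)
  then have top_idx_eq: "top_idx r k i = (k, i, Vb 0)" by (simp add: top_idx_def)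
  have e: "(\<lambda>y. if y = (k, i, Vb 0) then 1 else 0) \<in> Pnu r \<nu>" using t bvec_Pnu[of "(k, i, Vb 0)" r \<nu>] by (simp add: bvec_def)
  show "coef_diag r (aadd (EndAlg r \<nu>) f g) k i = coef_diag r f k i + coef_diag r g k i"
    "coef_diag r (asmul (EndAlg r \<nu>) c f) k i = c * coef_diag r f k i"
    "coef_diag r (aone (EndAlg r \<nu>)) k i = 1"
    using t e by (simp_all add: EndAlg_simps coef_diag_def top_idx_eq bvec_def)
qed

lemma blockA_hom:
  assumes r2: "r \<ge> 2" and t: "(k, i, Hb 0) \<in> Pbasis r \<nu>"
  shows "alg_hom (EndAlg r \<nu>) algA (\<lambda>f. blockA r f k i)"
proof -
  have ir: "i + 2 \<le> r" and si: "summand r \<nu> k i" using t by (auto simp: Pbasis_iff_summand)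
  have q: "(k + 1, dual r i, Hb 0) \<in> Pbasis r \<nu>"
    using summand_dual[OF ir si] ir by (simp add: Pbasis_iff_summand dual_def)
  note L = coefs_linear[OF t] and Lq = coefs_linear[OF q]
  show ?thesis unfolding alg_hom_def
  proof (intro conjI ballI allI)
    fix f g assume f: "f \<in> acar (EndAlg r \<nu>)" and g: "g \<in> acar (EndAlg r \<nu>)"
    show "blockA r (aadd (EndAlg r \<nu>) f g) k i = aadd algA (blockA r f k i) (blockA r g k i)"
    proof (rule ext)
      fix z :: abas show "blockA r (aadd (EndAlg r \<nu>) f g) k i z = aadd algA (blockA r f k i) (blockA r g k i) z"
        by (cases z) (simp_all add: blockA_def algA_simps L Lq distrib_left mult_ac)
    qed
    show "blockA r (amul (EndAlg r \<nu>) f g) k i = amul algA (blockA r f k i) (blockA r g k i)"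
      using blockA_mul[OF r2 _ _ t] f g by (simp add: EndAlg_simps)
  next
    fix c f
    show "blockA r (asmul (EndAlg r \<nu>) c f) k i = asmul algA c (blockA r f k i)"
    proof (rule ext)
      fix z :: abas show "blockA r (asmul (EndAlg r \<nu>) c f) k i z = asmul algA c (blockA r f k i) z"
        by (cases z) (simp_all add: blockA_def algA_simps L Lq distrib_left mult_ac)
    qed
  next
    show "blockA r (aone (EndAlg r \<nu>)) k i = aone algA"
    proof (rule ext)
      fix z :: abas show "blockA r (aone (EndAlg r \<nu>)) k i z = aone algA z"
        by (cases z) (simp_all add: blockA_def algA_simps L Lq)
    qed
  qed (simp add: algA_simps)
qed

lemma blockB_hom:
  assumes r2: "r \<ge> 2" and t: "(k, i, Hb 0) \<in> Pbasis r \<nu>" and r_even: "even r" and ij: "dual r i = i"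
  shows "alg_hom (EndAlg r \<nu>) algB (\<lambda>f. blockB r f k i)"
proof -
  note L = coefs_linear[OF t]
  show ?thesis unfolding alg_hom_def
  proof (intro conjI ballI allI)
    fix f g assume f: "f \<in> acar (EndAlg r \<nu>)" and g: "g \<in> acar (EndAlg r \<nu>)"
    show "blockB r (aadd (EndAlg r \<nu>) f g) k i = aadd algB (blockB r f k i) (blockB r g k i)"
    proof (rule ext)
      fix z :: bbas show "blockB r (aadd (EndAlg r \<nu>) f g) k i z = aadd algB (blockB r f k i) (blockB r g k i) z"
        by (cases z) (simp_all add: blockB_def algB_simps L distrib_left mult_ac)
    qed
    show "blockB r (amul (EndAlg r \<nu>) f g) k i = amul algB (blockB r f k i) (blockB r g k i)"
      using blockB_mul[OF r2 _ _ t r_even ij] f g by (simp add: EndAlg_simps)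
  next
    fix c f
    show "blockB r (asmul (EndAlg r \<nu>) c f) k i = asmul algB c (blockB r f k i)"
    proof (rule ext)
      fix z :: bbas show "blockB r (asmul (EndAlg r \<nu>) c f) k i z = asmul algB c (blockB r f k i) z"
        by (cases z) (simp_all add: blockB_def algB_simps L distrib_left mult_ac)
    qed
  next
    show "blockB r (aone (EndAlg r \<nu>)) k i = aone algB"
    proof (rule ext)
      fix z :: bbas show "blockB r (aone (EndAlg r \<nu>)) k i z = aone algB z"
        by (cases z) (simp_all add: blockB_def algB_simps L)
    qed
  qed (simp add: algB_simps)
qed

lemma blockC_hom:
  assumes r2: "r \<ge> 2" and t: "(k, i, Vb 0) \<in> Pbasis r \<nu>"
  shows "alg_hom (EndAlg r \<nu>) complex_alg (\<lambda>f. coef_diag r f k i)"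
  unfolding alg_hom_def
  using coef_diag_linear_V[OF t] coef_diag_end_mul_V[OF r2 _ _ t]
  by (simp add: complex_alg_def EndAlg_simps mult.commute)

lemma coefs_periodic_dvd:
  assumes f: "f \<in> EndSet r \<nu>" and d: "shift_deg r dvd (k' - k)"
  shows "coefs r f k' i = coefs r f k i"
proof -
  obtain m where m: "k' - k = shift_deg r * m" using d by (auto elim: dvdE)
  have "k' = k + m * shift_deg r" using m by (simp add: algebra_simps)
  then show ?thesis using coefs_periodic_mult[OF f, of k m i] by (simp add: coefs_def)
qed

lemma End_eq_coords:
  assumes r2: "r \<ge> 2" and f: "f \<in> EndSet r \<nu>" and g: "g \<in> EndSet r \<nu>"
    and c: "\<And>k i. summand r \<nu> k i \<Longrightarrow> coef_diag r f k i = coef_diag r g k i \<and>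
       (i + 2 \<le> r \<longrightarrow> coefs r f k i = coefs r g k i)"
  shows "f = g"
proof -
  have "mat_endo r \<nu> (coef_rows r f) = mat_endo r \<nu> (coef_rows r g)"
  proof
    fix v show "mat_endo r \<nu> (coef_rows r f) v = mat_endo r \<nu> (coef_rows r g) v"
    proof (cases "v \<in> Pnu r \<nu>")
      case True
      have "mat_apply (coef_rows r f) v = mat_apply (coef_rows r g) v"
      proof (rule mat_apply_cong)
        fix x assume "v x \<noteq> 0"
        then have x: "x \<in> Pbasis r \<nu>" using True by (simp add: Pnu_iff)
        obtain k i b where xx: "x = (k, i, b)" by (cases x) auto
        have s: "summand r \<nu> k i" and vb: "valid_lab r i b" using x by (auto simp: xx Pbasis_iff_summand)
        note cc = c[OF s]
        show "coef_rows r f x = coef_rows r g x"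
          using vb cc by (cases b) (auto simp: xx coefs_def)
      qed
      then show ?thesis using True by (simp add: mat_endo_def)
    qed (simp add: mat_endo_def)
  qed
  then show ?thesis using End_standard_form[OF r2 f] End_standard_form[OF r2 g] by simp
qed

lemma endo_row_coords:
  assumes pA: "\<And>k i. A (k + shift_deg r) i = A k i" and pB: "\<And>k i. B (k + shift_deg r) i = B k i"
    and pG: "\<And>k i. G (k + shift_deg r) i = G k i" and pD: "\<And>k i. D (k + shift_deg r) i = D k i"
    and s: "summand r \<nu> k i"
  defines "h \<equiv> mat_endo r \<nu> (endo_row r A B G D)"
  shows "coef_diag r h k i = A k i"
    "i + 2 \<le> r \<Longrightarrow> coef_nil r h k i = B k i"
    "i + 2 \<le> r \<Longrightarrow> coef_up r h k i = G k i"
    "i + 2 \<le> r \<Longrightarrow> coef_down r h k i = D k i"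
proof -
  show "coef_diag r h k i = A k i"
  proof (cases "i + 2 \<le> r")
    case True
    then have t: "(k, i, Hb 0) \<in> Pbasis r \<nu>" using s by (simp add: Pbasis_iff_summand)
    have "h (bvec (k, i, Hb 0)) = endo_row r A B G D (k, i, Hb 0)" using t by (simp add: h_def mat_endo_def)
    then show ?thesis using True by (simp add: coef_diag_def top_idx_def bvec_def)
  next
    case False
    then have "i + 1 = r" using s by (simp add: summand_def)
    then have t: "(k, i, Vb 0) \<in> Pbasis r \<nu>" using s by (simp add: Pbasis_iff_summand)
    have "h (bvec (k, i, Vb 0)) = endo_row r A B G D (k, i, Vb 0)" using t by (simp add: h_def mat_endo_def)
    then show ?thesis using False by (simp add: coef_diag_def top_idx_def bvec_def)
  qed
  assume ir: "i + 2 \<le> r"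
  then have t: "(k, i, Hb 0) \<in> Pbasis r \<nu>" using s by (simp add: Pbasis_iff_summand)
  have "h (bvec (k, i, Hb 0)) = endo_row r A B G D (k, i, Hb 0)" using t by (simp add: h_def mat_endo_def)
  then show "coef_nil r h k i = B k i" "coef_up r h k i = G k i" "coef_down r h k i = D k i"
    by (simp_all add: coef_nil_def coef_up_def coef_down_def bvec_def)
qed

text \<open>A choice of representatives for the summands of \<open>P\<^sub>\<nu>\<close> modulo the \<open>\<int>\<close>-action: \<open>ir t\<close> (\<open>t < n\<close>) in
  degree \<open>k0 t\<close> runs through the pairs \<open>i < j\<close>, with inverse \<open>blk\<close>; \<open>mB\<close> in degree \<open>kB\<close> is the
  self-dual summand and \<open>r - 1\<close> in degree \<open>kC\<close> the simple one, if present.\<close>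

definition block_layout :: "nat \<Rightarrow> int \<Rightarrow> nat \<Rightarrow> (nat \<Rightarrow> nat) \<Rightarrow> (nat \<Rightarrow> nat) \<Rightarrow> (nat \<Rightarrow> int)
    \<Rightarrow> bool \<Rightarrow> nat \<Rightarrow> int \<Rightarrow> bool \<Rightarrow> int \<Rightarrow> bool" where
  "block_layout r \<nu> n ir blk k0 hasB mB kB hasC kC \<longleftrightarrow> r \<ge> 2
    \<and> (\<forall>t<n. ir t + 2 \<le> r \<and> ir t < dual r (ir t) \<and> summand r \<nu> (k0 t) (ir t) \<and> blk (ir t) = t)
    \<and> (\<forall>k i. summand r \<nu> k i \<and> i + 2 \<le> r \<and> i < dual r i \<longrightarrow> blk i < n \<and> ir (blk i) = i \<and> shift_deg r dvd (k - k0 (blk i)))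
    \<and> (hasB \<longrightarrow> mB = dual r mB \<and> mB + 2 \<le> r \<and> summand r \<nu> kB mB \<and> even r)
    \<and> (\<forall>k i. summand r \<nu> k i \<and> i + 2 \<le> r \<and> i = dual r i \<longrightarrow> hasB \<and> i = mB \<and> shift_deg r dvd (k - kB))
    \<and> (hasC \<longrightarrow> summand r \<nu> kC (r - 1))
    \<and> (\<forall>k. summand r \<nu> k (r - 1) \<longrightarrow> hasC \<and> shift_deg r dvd (k - kC))"

lemma blockA_eq_imp_coefs_eq:
  assumes r2: "r \<ge> 2" and ir: "i + 2 \<le> r" and e: "blockA r f k i = blockA r g k i"
  shows "coefs r f k i = coefs r g k i" and "coefs r f (k + 1) (dual r i) = coefs r g (k + 1) (dual r i)"
proof -
  have "gam_prod r i i \<noteq> 0" "gam_prod r (dual r i) (dual r i) \<noteq> 0"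
    using gam_prod_full_nz[OF r2] ir dual_le[OF ir] by auto
  then show "coefs r f k i = coefs r g k i" and "coefs r f (k + 1) (dual r i) = coefs r g (k + 1) (dual r i)"
    using fun_cong[OF e, of Ap] fun_cong[OF e, of Abpam] fun_cong[OF e, of Aap] fun_cong[OF e, of Aam]
      fun_cong[OF e, of Aq] fun_cong[OF e, of Aapbm] fun_cong[OF e, of Abp] fun_cong[OF e, of Abm]
    by (simp_all add: blockA_def coefs_def)
qed

lemma blockB_eq_imp_coefs_eq:
  assumes r2: "r \<ge> 2" and ir: "i < r" and e: "blockB r f k i = blockB r g k i"
  shows "coefs r f k i = coefs r g k i"
  using gam_prod_full_nz[OF r2 ir] fun_cong[OF e, of B1] fun_cong[OF e, of Bpm] fun_cong[OF e, of Bp]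
    fun_cong[OF e, of Bm]
  by (simp add: blockB_def coefs_def)

lemma block_layout_inj:
  assumes gd: "block_layout r \<nu> n ir blk k0 hasB mB kB hasC kC"
    and f: "f \<in> EndSet r \<nu>" and g: "g \<in> EndSet r \<nu>"
    and eA: "\<And>t. t < n \<Longrightarrow> blockA r f (k0 t) (ir t) = blockA r g (k0 t) (ir t)"
    and eB: "hasB \<Longrightarrow> blockB r f kB mB = blockB r g kB mB"
    and eC: "hasC \<Longrightarrow> coef_diag r f kC (r - 1) = coef_diag r g kC (r - 1)"
  shows "f = g"
proof -
  have r2: "r \<ge> 2" using gd by (simp add: block_layout_def)
  show ?thesis
  proof (rule End_eq_coords[OF r2 f g])
    fix k i assume s: "summand r \<nu> k i"
    have ir: "i < r" using s by (simp add: summand_def)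
    have periodic: "coefs r f k i = coefs r g k i"
      if "shift_deg r dvd (k - k')" "coefs r f k' i = coefs r g k' i" for k'
      using that coefs_periodic_dvd[OF f that(1)] coefs_periodic_dvd[OF g that(1)] by simp
    show "coef_diag r f k i = coef_diag r g k i \<and> (i + 2 \<le> r \<longrightarrow> coefs r f k i = coefs r g k i)"
    proof (cases "i + 2 \<le> r")
      case False
      then have i1: "i = r - 1" using ir by simp
      have hc: "hasC" and d: "shift_deg r dvd (k - kC)" using gd s i1 by (auto simp: block_layout_def)
      show ?thesis
        using False eC[OF hc] coefs_periodic_dvd[OF f d] coefs_periodic_dvd[OF g d] i1 by (simp add: coefs_def)
    next
      case ir2: True
      have "coefs r f k i = coefs r g k i"
      proof (cases rule: linorder_cases[of i "dual r i"])
        case less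
        then have t: "blk i < n" "ir (blk i) = i" "shift_deg r dvd (k - k0 (blk i))"
          using gd s ir2 by (auto simp: block_layout_def)
        show ?thesis using periodic[OF t(3) blockA_eq_imp_coefs_eq(1)[OF r2 ir2]] eA[OF t(1)] t(2) by simp
      next
        case greater
        define i' where "i' = dual r i"
        have ir': "i' + 2 \<le> r" using dual_le[OF ir2] by (simp add: i'_def)
        have j: "dual r i' = i" using dual_inv[OF ir2] by (simp add: i'_def)
        have "summand r \<nu> (k - 1) i'" using summand_dual[OF ir2 s] by (simp add: i'_def)
        moreover have "i' < dual r i'" using greater j by (simp add: i'_def)
        ultimately have t: "blk i' < n" "ir (blk i') = i'" "shift_deg r dvd (k - 1 - k0 (blk i'))"
          using gd ir' by (auto simp: block_layout_def)
        have d: "shift_deg r dvd (k - (k0 (blk i') + 1))" using t(3) by (simp add: algebra_simps)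
        have "blockA r f (k0 (blk i')) i' = blockA r g (k0 (blk i')) i'" using eA[OF t(1)] t(2) by simp
        from blockA_eq_imp_coefs_eq(2)[OF r2 ir' this] show ?thesis
          unfolding j by (rule periodic[OF d])
      next
        case equal
        have hb: "hasB" and m: "i = mB" and d: "shift_deg r dvd (k - kB)"
          using gd s ir2 equal by (auto simp: block_layout_def)
        show ?thesis using periodic[OF d blockB_eq_imp_coefs_eq[OF r2 ir]] eB[OF hb] m by simp
      qed
      then show ?thesis by (simp add: coefs_def)
    qed
  qed
qed

lemma block_layout_surj:
  assumes gd: "block_layout r \<nu> n ir blk k0 hasB mB kB hasC kC"
  shows "\<exists>h\<in>EndSet r \<nu>. (\<forall>t<n. blockA r h (k0 t) (ir t) = zA t)
    \<and> (hasB \<longrightarrow> blockB r h kB mB = zB) \<and> (hasC \<longrightarrow> coef_diag r h kC (r - 1) = zC)"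
proof -
  have r2: "r \<ge> 2" using gd by (simp add: block_layout_def)
  define A :: coef_fun where "A k i = (if i + 2 \<le> r then (if i < dual r i then zA (blk i) Ap
     else if dual r i < i then zA (blk (dual r i)) Aq else zB B1) else zC)" for k i
  define B :: coef_fun where "B k i = (if i < dual r i then zA (blk i) Abpam
     else if dual r i < i then zA (blk (dual r i)) Aapbm else zB Bpm)" for k i
  define G :: coef_fun where "G k i = (if i < dual r i then zA (blk i) Aap
     else if dual r i < i then zA (blk (dual r i)) Abp else zB Bp)" for k i
  define D :: coef_fun where "D k i = (if i < dual r i then zA (blk i) Aam
     else if dual r i < i then zA (blk (dual r i)) Abm else zB Bm) / gam_prod r i i" for k i
  define h where "h = mat_endo r \<nu> (endo_row r A B G D)"
  have per: "\<And>k i. A (k + shift_deg r) i = A k i" "\<And>k i. B (k + shift_deg r) i = B k i"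
    "\<And>k i. G (k + shift_deg r) i = G k i" "\<And>k i. D (k + shift_deg r) i = D k i"
    by (simp_all add: A_def B_def G_def D_def)
  have hE: "h \<in> EndSet r \<nu>" unfolding h_def by (rule endo_row_EndSet) (fact per)+
  note co = endo_row_coords[where A=A and B=B and G=G and D=D, OF per, folded h_def]
  have bA: "\<forall>t<n. blockA r h (k0 t) (ir t) = zA t"
  proof (intro allI impI)
    fix t assume t: "t < n"
    define i where "i = ir t"
    have i: "i + 2 \<le> r" "i < dual r i" "summand r \<nu> (k0 t) i" "blk i = t"
      using gd t by (auto simp: block_layout_def i_def)
    have j: "dual r (dual r i) = i" using i(1) by (rule dual_inv)
    have s': "summand r \<nu> (k0 t + 1) (dual r i)" using summand_dual[OF i(1) i(3)] by simp
    have ir': "dual r i + 2 \<le> r" using i(1) by (rule dual_le)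
    have pnz: "gam_prod r i i \<noteq> 0" "gam_prod r (dual r i) (dual r i) \<noteq> 0"
      using gam_prod_full_nz[OF r2] i(1) ir' by auto
    show "blockA r h (k0 t) (ir t) = zA t"
    proof (rule ext)
      fix z :: abas
      show "blockA r h (k0 t) (ir t) z = zA t z"
        using i j pnz co[OF i(3)] co[OF s'] ir'
        by (cases z) (simp_all add: blockA_def i_def[symmetric] h_def A_def B_def G_def D_def)
    qed
  qed
  have bB: "hasB \<longrightarrow> blockB r h kB mB = zB"
  proof
    assume hb: hasB
    have m: "mB = dual r mB" "mB + 2 \<le> r" "summand r \<nu> kB mB" using gd hb by (auto simp: block_layout_def)
    have pnz: "gam_prod r mB mB \<noteq> 0" using gam_prod_full_nz[OF r2] m by auto
    show "blockB r h kB mB = zB"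
    proof (rule ext)
      fix z :: bbas
      have mm: "dual r mB = mB" using m(1) by simp
      show "blockB r h kB mB z = zB z"
        using m(2,3) mm pnz co[OF m(3)]
        by (cases z) (simp_all add: blockB_def h_def A_def B_def G_def D_def)
    qed
  qed
  have bC: "hasC \<longrightarrow> coef_diag r h kC (r - 1) = zC"
  proof
    assume hc: hasC
    have s: "summand r \<nu> kC (r - 1)" using gd hc by (auto simp: block_layout_def)
    show "coef_diag r h kC (r - 1) = zC" using co(1)[OF s] r2 by (simp add: A_def h_def)
  qed
  show ?thesis using hE bA bB bC by blast
qed

definition blocksA :: "nat \<Rightarrow> nat \<Rightarrow> (nat \<Rightarrow> nat) \<Rightarrow> (nat \<Rightarrow> int) \<Rightarrow> (pvec \<Rightarrow> pvec) \<Rightarrow> nat \<Rightarrow> abas \<Rightarrow> complex" where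
  "blocksA r n ir k0 f = (\<lambda>t. if t < n then blockA r f (k0 t) (ir t) else azero algA)"

lemma block_layout_basic:
  assumes gd: "block_layout r \<nu> n ir blk k0 hasB mB kB hasC kC"
  shows "r \<ge> 2" "\<And>t. t < n \<Longrightarrow> (k0 t, ir t, Hb 0) \<in> Pbasis r \<nu>"
    "hasB \<Longrightarrow> (kB, mB, Hb 0) \<in> Pbasis r \<nu> \<and> even r \<and> dual r mB = mB"
    "hasC \<Longrightarrow> (kC, r - 1, Vb 0) \<in> Pbasis r \<nu>"
  using gd by (auto simp: block_layout_def Pbasis_iff_summand)

lemma blocksA_hom:
  assumes gd: "block_layout r \<nu> n ir blk k0 hasB mB kB hasC kC"
  shows "alg_hom (EndAlg r \<nu>) (pow_alg algA n) (blocksA r n ir k0)"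
  unfolding blocksA_def
  by (rule alg_hom_pow[of n _ _ "\<lambda>t f. blockA r f (k0 t) (ir t)", simplified])
     (rule blockA_hom[OF block_layout_basic(1,2)[OF gd]])

lemma blocksA_eq: "z \<in> acar (pow_alg algA n) \<Longrightarrow> (\<forall>t<n. blockA r h (k0 t) (ir t) = z t) \<Longrightarrow> blocksA r n ir k0 h = z"
  by (auto simp: blocksA_def acar_pow_algA fun_eq_iff)

lemma blocksA_inj: "blocksA r n ir k0 f = blocksA r n ir k0 g \<Longrightarrow> t < n \<Longrightarrow> blockA r f (k0 t) (ir t) = blockA r g (k0 t) (ir t)"
  by (drule fun_cong[of _ _ t]) (simp add: blocksA_def)

lemma EndAlg_iso_A_C:
  assumes gd: "block_layout r \<nu> n ir blk k0 False mB kB True kC"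
  shows "alg_isomorphic (EndAlg r \<nu>) (prod_alg (pow_alg algA n) complex_alg)"
proof -
  note b = block_layout_basic[OF gd]
  let ?phi = "\<lambda>f. (blocksA r n ir k0 f, coef_diag r f kC (r - 1))"
  have "alg_iso (EndAlg r \<nu>) (prod_alg (pow_alg algA n) complex_alg) ?phi"
  proof (rule alg_iso_intro)
    show "alg_hom (EndAlg r \<nu>) (prod_alg (pow_alg algA n) complex_alg) ?phi"
      by (rule alg_hom_prod[OF blocksA_hom[OF gd] blockC_hom[OF b(1) b(4)]]) simp
    show "inj_on ?phi (acar (EndAlg r \<nu>))"
      by (auto simp: inj_on_def EndAlg_simps intro!: block_layout_inj[OF gd] dest: blocksA_inj)
    fix y assume y: "y \<in> acar (prod_alg (pow_alg algA n) complex_alg)"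
    obtain zA zC where yy: "y = (zA, zC)" by (cases y) auto
    have zA: "zA \<in> acar (pow_alg algA n)" using y by (simp add: yy prod_alg_def)
    obtain h where h: "h \<in> EndSet r \<nu>" "\<forall>t<n. blockA r h (k0 t) (ir t) = zA t" "coef_diag r h kC (r - 1) = zC"
      using block_layout_surj[OF gd, of zA undefined zC] by auto
    show "\<exists>x\<in>acar (EndAlg r \<nu>). ?phi x = y"
      using h blocksA_eq[OF zA h(2)] by (auto simp: yy EndAlg_simps)
  qed
  then show ?thesis by (auto simp: alg_isomorphic_def)
qed

lemma EndAlg_iso_A_B:
  assumes gd: "block_layout r \<nu> n ir blk k0 True mB kB False kC"
  shows "alg_isomorphic (EndAlg r \<nu>) (prod_alg (pow_alg algA n) algB)"
proof -
  note b = block_layout_basic[OF gd]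
  let ?phi = "\<lambda>f. (blocksA r n ir k0 f, blockB r f kB mB)"
  have "alg_iso (EndAlg r \<nu>) (prod_alg (pow_alg algA n) algB) ?phi"
  proof (rule alg_iso_intro)
    show "alg_hom (EndAlg r \<nu>) (prod_alg (pow_alg algA n) algB) ?phi"
      using b(3) by (intro alg_hom_prod[OF blocksA_hom[OF gd] blockB_hom[OF b(1)]]) auto
    show "inj_on ?phi (acar (EndAlg r \<nu>))"
      by (auto simp: inj_on_def EndAlg_simps intro!: block_layout_inj[OF gd] dest: blocksA_inj)
    fix y assume y: "y \<in> acar (prod_alg (pow_alg algA n) algB)"
    obtain zA zB where yy: "y = (zA, zB)" by (cases y) auto
    have zA: "zA \<in> acar (pow_alg algA n)" using y by (simp add: yy prod_alg_def)
    obtain h where h: "h \<in> EndSet r \<nu>" "\<forall>t<n. blockA r h (k0 t) (ir t) = zA t" "blockB r h kB mB = zB"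
      using block_layout_surj[OF gd, of zA zB undefined] by auto
    show "\<exists>x\<in>acar (EndAlg r \<nu>). ?phi x = y"
      using h blocksA_eq[OF zA h(2)] by (auto simp: yy EndAlg_simps)
  qed
  then show ?thesis by (auto simp: alg_isomorphic_def)
qed

lemma EndAlg_iso_A:
  assumes gd: "block_layout r \<nu> n ir blk k0 False mB kB False kC"
  shows "alg_isomorphic (EndAlg r \<nu>) (pow_alg algA n)"
proof -
  note b = block_layout_basic[OF gd]
  let ?phi = "blocksA r n ir k0"
  have "alg_iso (EndAlg r \<nu>) (pow_alg algA n) ?phi"
  proof (rule alg_iso_intro)
    show "alg_hom (EndAlg r \<nu>) (pow_alg algA n) ?phi" by (rule blocksA_hom[OF gd])
    show "inj_on ?phi (acar (EndAlg r \<nu>))"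
      by (auto simp: inj_on_def EndAlg_simps intro!: block_layout_inj[OF gd] dest: blocksA_inj)
    fix y assume y: "y \<in> acar (pow_alg algA n)"
    obtain h where h: "h \<in> EndSet r \<nu>" "\<forall>t<n. blockA r h (k0 t) (ir t) = y t"
      using block_layout_surj[OF gd, of y undefined undefined] by auto
    show "\<exists>x\<in>acar (EndAlg r \<nu>). ?phi x = y"
      using h blocksA_eq[OF y h(2)] by (auto simp: EndAlg_simps)
  qed
  then show ?thesis by (auto simp: alg_isomorphic_def)
qed

lemma EndAlg_iso_A_B_C:
  assumes gd: "block_layout r \<nu> n ir blk k0 True mB kB True kC"
  shows "alg_isomorphic (EndAlg r \<nu>) (prod_alg (prod_alg (pow_alg algA n) algB) complex_alg)"
proof -
  note b = block_layout_basic[OF gd]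
  let ?phi = "\<lambda>f. ((blocksA r n ir k0 f, blockB r f kB mB), coef_diag r f kC (r - 1))"
  have "alg_iso (EndAlg r \<nu>) (prod_alg (prod_alg (pow_alg algA n) algB) complex_alg) ?phi"
  proof (rule alg_iso_intro)
    show "alg_hom (EndAlg r \<nu>) (prod_alg (prod_alg (pow_alg algA n) algB) complex_alg) ?phi"
      using b(3) by (intro alg_hom_prod[OF alg_hom_prod[OF blocksA_hom[OF gd] blockB_hom[OF b(1)]] blockC_hom[OF b(1) b(4)]]) auto
    show "inj_on ?phi (acar (EndAlg r \<nu>))"
      by (auto simp: inj_on_def EndAlg_simps intro!: block_layout_inj[OF gd] dest: blocksA_inj)
    fix y assume y: "y \<in> acar (prod_alg (prod_alg (pow_alg algA n) algB) complex_alg)"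
    obtain zA zB zC where yy: "y = ((zA, zB), zC)" by (cases y) auto
    have zA: "zA \<in> acar (pow_alg algA n)" using y by (simp add: yy prod_alg_def)
    obtain h where h: "h \<in> EndSet r \<nu>" "\<forall>t<n. blockA r h (k0 t) (ir t) = zA t" "blockB r h kB mB = zB"
        "coef_diag r h kC (r - 1) = zC"
      using block_layout_surj[OF gd, of zA zB zC] by auto
    show "\<exists>x\<in>acar (EndAlg r \<nu>). ?phi x = y"
      using h blocksA_eq[OF zA h(2)] by (auto simp: yy EndAlg_simps)
  qed
  then show ?thesis by (auto simp: alg_isomorphic_def)
qed

lemma block_layout_odd:
  assumes o: "odd r" and r3: "r \<ge> 3" and nu: "\<nu> = 0 \<or> \<nu> = 1"
  shows "block_layout r \<nu> ((r - 1) div 2) id id (\<lambda>t. (\<nu> - int t) mod 2) False 0 0 True \<nu>"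
proof -
  have noB: "\<And>i. i + 2 \<le> r \<Longrightarrow> i = dual r i \<Longrightarrow> False"
  proof -
    fix i assume "i + 2 \<le> r" "i = dual r i"
    then have "r = 2 * i + 2" by (simp add: dual_def; linarith)
    then show False using o by simp
  qed
  show ?thesis
  unfolding block_layout_def
proof (intro conjI allI impI)
  show "2 \<le> r" using r3 by simp
  fix t assume t: "t < (r - 1) div 2"
  show "id t + 2 \<le> r" "id t < dual r (id t)" using t o by (auto simp: dual_def elim!: oddE)
  show "summand r \<nu> ((\<nu> - int t) mod 2) (id t)"
    using t nu by (auto simp: summand_def mult_odd_mod2[OF o]) presburger+
  show "id (id t) = t" by simp
next
  fix k i assume a: "summand r \<nu> k i \<and> i + 2 \<le> r \<and> i < dual r i"
  then have "i + i + 2 < r" by (simp add: dual_def; linarith)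
  then show "id i < (r - 1) div 2" using o by (auto elim!: oddE)
  show "id (id i) = i" by simp
  have "(k + int i) mod 2 = \<nu>" using a by (simp add: summand_def mult_odd_mod2[OF o])
  then have "(2::int) dvd k - (\<nu> - int i) mod 2" by presburger
  then show "shift_deg r dvd k - (\<nu> - int (id i)) mod 2" using shift_deg_odd[OF o] by simp
next
  fix k i assume a: "summand r \<nu> k i \<and> i + 2 \<le> r \<and> i = dual r i"
  then have "r = 2 * i + 2" by (simp add: dual_def; linarith)
  then show False using o by simp
next
  show "summand r \<nu> \<nu> (r - 1)"
    using nu o r3 by (auto simp: summand_def mult_odd_mod2[OF o] elim!: oddE)
next
  fix k assume a: "summand r \<nu> k (r - 1)"
  show True by simp
  obtain q where q: "r = 2 * q + 1" using o by (auto elim: oddE)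
  have "(k + int (r - 1)) mod 2 = \<nu>" using a unfolding summand_def mult_odd_mod2[OF o] by blast
  moreover have "int (r - 1) = 2 * int q" using q by simp
  ultimately have "(k + 2 * int q) mod 2 = \<nu>" by simp
  then have "(2::int) dvd k - \<nu>" using nu by presburger
  then show "shift_deg r dvd k - \<nu>" using shift_deg_odd[OF o] by simp
qed (use noB in auto)
qed

lemma block_layout_intro:
  assumes "r \<ge> 2"
    "\<And>t. t < n \<Longrightarrow> ir t + 2 \<le> r \<and> ir t < dual r (ir t) \<and> summand r \<nu> (k0 t) (ir t) \<and> blk (ir t) = t"
    "\<And>k i. summand r \<nu> k i \<Longrightarrow> i + 2 \<le> r \<Longrightarrow> i < dual r i \<Longrightarrow> blk i < n \<and> ir (blk i) = i \<and> shift_deg r dvd (k - k0 (blk i))"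
    "hasB \<Longrightarrow> mB = dual r mB \<and> mB + 2 \<le> r \<and> summand r \<nu> kB mB \<and> even r"
    "\<And>k i. summand r \<nu> k i \<Longrightarrow> i + 2 \<le> r \<Longrightarrow> i = dual r i \<Longrightarrow> hasB \<and> i = mB \<and> shift_deg r dvd (k - kB)"
    "hasC \<Longrightarrow> summand r \<nu> kC (r - 1)"
    "\<And>k. summand r \<nu> k (r - 1) \<Longrightarrow> hasC \<and> shift_deg r dvd (k - kC)"
  shows "block_layout r \<nu> n ir blk k0 hasB mB kB hasC kC"
  using assms unfolding block_layout_def by blast

lemma block_layout_even:
  assumes r_even: "even r" and r2: "r \<ge> 2" and p: "p \<le> 1" and nu: "\<nu> = int p"
    and n: "n = (r - 2 * p) div 4" and ir: "ir = (\<lambda>t. 2 * t + p)"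
    and hB: "hasB \<longleftrightarrow> even ((r - 2) div 2 + p)" and hC: "hasC \<longleftrightarrow> p = 1"
  shows "block_layout r \<nu> n ir (\<lambda>i. i div 2) (\<lambda>t. 0) hasB ((r - 2) div 2) 0 hasC 0"
proof -
  have "\<exists>m. r = 2 * m + 2" using r_even r2 by presburger
  then obtain m where m: "r = 2 * m + 2" ..
  have sh1: "shift_deg r = 1" using shift_deg_even[OF r_even] r2 by simp
  have summand_iff: "summand r \<nu> k i \<longleftrightarrow> i < r \<and> i mod 2 = p" for k i
    using p by (auto simp: summand_even[OF r_even] nu)
  have dual: "dual r i = 2 * m - i" for i by (simp add: dual_def m)
  have mB: "(r - 2) div 2 = m" by (simp add: m)
  have n': "n = (m + 1 - p) div 2" using p by (simp add: n m)
  have p01: "p = 0 \<or> p = 1" using p by auto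
  show ?thesis
  proof (rule block_layout_intro, unfold summand_iff dual mB n' hB hC sh1 ir)
    show "2 \<le> r" by (fact r2)
  next
    fix t assume "t < (m + 1 - p) div 2"
    then have "2 * t + p + 1 \<le> m" by linarith
    then show "2 * t + p + 2 \<le> r \<and> 2 * t + p < 2 * m - (2 * t + p) \<and> (2 * t + p < r \<and> (2 * t + p) mod 2 = p)
        \<and> (2 * t + p) div 2 = t"
      using p01 unfolding m by auto
  next
    fix k :: int and i assume i: "i < r \<and> i mod 2 = p" "i < 2 * m - i"
    have "i + 1 \<le> m" using i(2) by simp
    moreover have "i = 2 * (i div 2) + p" using i(1) div_mult_mod_eq[of i 2] by linarith
    ultimately show "i div 2 < (m + 1 - p) div 2 \<and> 2 * (i div 2) + p = i \<and> 1 dvd (k - 0)"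
      by simp
  next
    assume "even (m + p)"
    then show "m = 2 * m - m \<and> m + 2 \<le> r \<and> (m < r \<and> m mod 2 = p) \<and> even r"
      using p01 r_even unfolding m by (auto simp: odd_iff_mod_2_eq_one)
  next
    fix k :: int and i assume i: "i < r \<and> i mod 2 = p" "i = 2 * m - i"
    then have "i = m" by arith
    then show "even (m + p) \<and> i = m \<and> 1 dvd (k - 0)"
      using i(1) p01 by auto
  next
    assume "p = 1"
    then show "r - 1 < r \<and> (r - 1) mod 2 = p" unfolding m by simp
  next
    fix k :: int assume "r - 1 < r \<and> (r - 1) mod 2 = p"
    then show "p = 1 \<and> 1 dvd (k - 0)" using p01 unfolding m by auto
  qed
qed

lemma EndAlg_iso_odd:
  assumes "odd r" "r \<ge> 3"
  shows "alg_isomorphic (EndAlg r 0) (prod_alg (pow_alg algA ((r - 1) div 2)) complex_alg)"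
    and "alg_isomorphic (EndAlg r 1) (prod_alg (pow_alg algA ((r - 1) div 2)) complex_alg)"
  by (rule EndAlg_iso_A_C[OF block_layout_odd[OF assms]], simp)+

lemma EndAlg_iso_2_mod_4:
  assumes "r mod 4 = 2"
  shows "alg_isomorphic (EndAlg r 0) (prod_alg (pow_alg algA ((r - 2) div 4)) algB)"
    and "alg_isomorphic (EndAlg r 1) (prod_alg (pow_alg algA ((r - 2) div 4)) complex_alg)"
proof -
  have "r = 4 * (r div 4) + 2" using assms by presburger
  then obtain q where q: "r = 4 * q + 2" by blast
  have r: "even r" "r \<ge> 2" "(r - 2 * 0) div 4 = (r - 2) div 4" "(r - 2 * 1) div 4 = (r - 2) div 4"
    "even ((r - 2) div 2 + 0)" "odd ((r - 2) div 2 + 1)"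
    unfolding q by simp_all
  have "block_layout r 0 ((r - 2) div 4) (\<lambda>t. 2 * t) (\<lambda>i. i div 2) (\<lambda>t. 0) True ((r - 2) div 2) 0 False 0"
    by (rule block_layout_even[where p = 0]) (use r in \<open>simp_all only: of_nat_0 add_0_right simp_thms le0\<close>)
  then show "alg_isomorphic (EndAlg r 0) (prod_alg (pow_alg algA ((r - 2) div 4)) algB)"
    by (rule EndAlg_iso_A_B)
  have "block_layout r 1 ((r - 2) div 4) (\<lambda>t. 2 * t + 1) (\<lambda>i. i div 2) (\<lambda>t. 0) False ((r - 2) div 2) 0 True 0"
    by (rule block_layout_even[where p = 1]) (use r in \<open>simp_all only: of_nat_1 simp_thms order_refl\<close>)
  then show "alg_isomorphic (EndAlg r 1) (prod_alg (pow_alg algA ((r - 2) div 4)) complex_alg)"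
    by (rule EndAlg_iso_A_C)
qed

lemma EndAlg_iso_0_mod_4:
  assumes "r mod 4 = 0" "r \<ge> 4"
  shows "alg_isomorphic (EndAlg r 0) (pow_alg algA (r div 4))"
    and "alg_isomorphic (EndAlg r 1) (prod_alg (prod_alg (pow_alg algA ((r - 4) div 4)) algB) complex_alg)"
proof -
  have "r = 4 * (r div 4 - 1) + 4" using assms by presburger
  then obtain q where q: "r = 4 * q + 4" by blast
  have r: "even r" "r \<ge> 2" "(r - 2 * 0) div 4 = r div 4" "(r - 2 * 1) div 4 = (r - 4) div 4"
    "odd ((r - 2) div 2 + 0)" "even ((r - 2) div 2 + 1)"
    unfolding q by simp_all
  have "block_layout r 0 (r div 4) (\<lambda>t. 2 * t) (\<lambda>i. i div 2) (\<lambda>t. 0) False ((r - 2) div 2) 0 False 0"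
    by (rule block_layout_even[where p = 0]) (use r in \<open>simp_all only: of_nat_0 add_0_right simp_thms le0\<close>)
  then show "alg_isomorphic (EndAlg r 0) (pow_alg algA (r div 4))"
    by (rule EndAlg_iso_A)
  have "block_layout r 1 ((r - 4) div 4) (\<lambda>t. 2 * t + 1) (\<lambda>i. i div 2) (\<lambda>t. 0) True ((r - 2) div 2) 0 True 0"
    by (rule block_layout_even[where p = 1]) (use r in \<open>simp_all only: of_nat_1 simp_thms order_refl\<close>)
  then show "alg_isomorphic (EndAlg r 1) (prod_alg (prod_alg (pow_alg algA ((r - 4) div 4)) algB) complex_alg)"
    by (rule EndAlg_iso_A_B_C)
qed

theorem theorem7p2:
  fixes r :: nat
  shows "(odd r \<and> r \<ge> 3 \<longrightarrow>
            alg_isomorphic (EndAlg r 0) (prod_alg (pow_alg algA ((r - 1) div 2)) complex_alg)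
          \<and> alg_isomorphic (EndAlg r 1) (prod_alg (pow_alg algA ((r - 1) div 2)) complex_alg))
       \<and> (r mod 4 = 2 \<longrightarrow>
            alg_isomorphic (EndAlg r 0) (prod_alg (pow_alg algA ((r - 2) div 4)) algB)
          \<and> alg_isomorphic (EndAlg r 1) (prod_alg (pow_alg algA ((r - 2) div 4)) complex_alg))
       \<and> (r mod 4 = 0 \<and> r \<ge> 4 \<longrightarrow>
            alg_isomorphic (EndAlg r 0) (pow_alg algA (r div 4))
          \<and> alg_isomorphic (EndAlg r 1)
              (prod_alg (prod_alg (pow_alg algA ((r - 4) div 4)) algB) complex_alg))"
  by (intro conjI impI; (elim conjE)?)
     (rule EndAlg_iso_odd EndAlg_iso_2_mod_4 EndAlg_iso_0_mod_4; assumption)+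

end
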